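(* Let $K$ be a field, $p\colon A\to B$ a morphism of cocommutative Hopf algebras over $K$, and $i\colon C\to B$ the inclusion of a Hopf subalgebra $C$ of $B$. Let $p^{-1}(C)=\{x\in A \mid (p\otimes \mathrm{id}_A)\Delta(x)-1\otimes x\in C^+\otimes A\}$, let $j\colon p^{-1}(C)\to A$ be the inclusion and $\hat p\colon p^{-1}(C)\to C$ the restriction of $p$. Then $p(p^{-1}(C))\subseteq C$ (so $\hat p$ is well defined) and the square with $i\circ \hat p = p\circ j$ is a pullback in the category $\mathsf{Hopf}_{K,coc}$ of cocommutative Hopf algebras over $K$.
   Context: For a coalgebra $C$ with counit $\epsilon$, $C^+=\{x\in C\mid \epsilon(x)=0\}$. $p^{-1}(C)$ is a Hopf subalgebra of $A$ (the h-inverse of $C$ along $p$). Morphisms in $\mathsf{Hopf}_{K,coc}$ are linear maps that are algebra and coalgebra morphisms. *)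

theory Defs
  imports Main
begin

text \<open>An element of a tensor product V \<otimes> W is represented by a finite list of pairs
  (a sum of pure tensors); two such lists denote the same tensor iff every
  K-valued bilinear form gives the same value on them (over a field this is
  exactly equality in V \<otimes> W, by the universal property with target K).\<close>

record ('k,'a) hopf_alg =
  hcarrier :: "'a set"
  hadd :: "'a \<Rightarrow> 'a \<Rightarrow> 'a"
  hzero :: "'a"
  hscale :: "'k \<Rightarrow> 'a \<Rightarrow> 'a"
  hmult :: "'a \<Rightarrow> 'a \<Rightarrow> 'a"
  hone :: "'a"
  hcomult :: "'a \<Rightarrow> ('a \<times> 'a) list"
  hcounit :: "'a \<Rightarrow> 'k"
  hantipode :: "'a \<Rightarrow> 'a"

definition vspace :: "('k::field,'a) hopf_alg \<Rightarrow> bool" where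
  "vspace V \<longleftrightarrow>
     hzero V \<in> hcarrier V \<and>
     (\<forall>x\<in>hcarrier V. \<forall>y\<in>hcarrier V. hadd V x y \<in> hcarrier V) \<and>
     (\<forall>c. \<forall>x\<in>hcarrier V. hscale V c x \<in> hcarrier V) \<and>
     (\<forall>x\<in>hcarrier V. \<forall>y\<in>hcarrier V. \<forall>z\<in>hcarrier V.
        hadd V (hadd V x y) z = hadd V x (hadd V y z)) \<and>
     (\<forall>x\<in>hcarrier V. \<forall>y\<in>hcarrier V. hadd V x y = hadd V y x) \<and>
     (\<forall>x\<in>hcarrier V. hadd V (hzero V) x = x) \<and>
     (\<forall>x\<in>hcarrier V. \<exists>y\<in>hcarrier V. hadd V x y = hzero V) \<and>
     (\<forall>c. \<forall>x\<in>hcarrier V. \<forall>y\<in>hcarrier V.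
        hscale V c (hadd V x y) = hadd V (hscale V c x) (hscale V c y)) \<and>
     (\<forall>c d. \<forall>x\<in>hcarrier V. hscale V (c + d) x = hadd V (hscale V c x) (hscale V d x)) \<and>
     (\<forall>c d. \<forall>x\<in>hcarrier V. hscale V (c * d) x = hscale V c (hscale V d x)) \<and>
     (\<forall>x\<in>hcarrier V. hscale V 1 x = x)"

definition vsum :: "('k,'a) hopf_alg \<Rightarrow> 'a list \<Rightarrow> 'a" where
  "vsum V xs = foldr (hadd V) xs (hzero V)"

definition linear_map :: "('k::field,'a) hopf_alg \<Rightarrow> ('k,'b) hopf_alg \<Rightarrow> ('a \<Rightarrow> 'b) \<Rightarrow> bool" where
  "linear_map V W f \<longleftrightarrow> f ` hcarrier V \<subseteq> hcarrier W \<and>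
     (\<forall>x\<in>hcarrier V. \<forall>y\<in>hcarrier V. f (hadd V x y) = hadd W (f x) (f y)) \<and>
     (\<forall>c. \<forall>x\<in>hcarrier V. f (hscale V c x) = hscale W c (f x))"

definition bilinear_form :: "('k::field,'a) hopf_alg \<Rightarrow> ('k,'b) hopf_alg \<Rightarrow> ('a \<Rightarrow> 'b \<Rightarrow> 'k) \<Rightarrow> bool" where
  "bilinear_form V W \<beta> \<longleftrightarrow>
     (\<forall>x\<in>hcarrier V. \<forall>x'\<in>hcarrier V. \<forall>y\<in>hcarrier W. \<beta> (hadd V x x') y = \<beta> x y + \<beta> x' y) \<and>
     (\<forall>c. \<forall>x\<in>hcarrier V. \<forall>y\<in>hcarrier W. \<beta> (hscale V c x) y = c * \<beta> x y) \<and>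
     (\<forall>x\<in>hcarrier V. \<forall>y\<in>hcarrier W. \<forall>y'\<in>hcarrier W. \<beta> x (hadd W y y') = \<beta> x y + \<beta> x y') \<and>
     (\<forall>c. \<forall>x\<in>hcarrier V. \<forall>y\<in>hcarrier W. \<beta> x (hscale W c y) = c * \<beta> x y)"

definition trilinear_form :: "('k::field,'a) hopf_alg \<Rightarrow> ('a \<Rightarrow> 'a \<Rightarrow> 'a \<Rightarrow> 'k) \<Rightarrow> bool" where
  "trilinear_form V \<tau> \<longleftrightarrow>
     (\<forall>x\<in>hcarrier V. \<forall>y\<in>hcarrier V. bilinear_form V V (\<lambda>a b. \<tau> a b x)
        \<and> bilinear_form V V (\<lambda>a b. \<tau> a y b) \<and> bilinear_form V V (\<lambda>a b. \<tau> x a b))"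

definition tensor_eq :: "('k::field,'a) hopf_alg \<Rightarrow> ('k,'b) hopf_alg \<Rightarrow>
    ('a \<times> 'b) list \<Rightarrow> ('a \<times> 'b) list \<Rightarrow> bool" where
  "tensor_eq V W xs ys \<longleftrightarrow>
     set xs \<subseteq> hcarrier V \<times> hcarrier W \<and> set ys \<subseteq> hcarrier V \<times> hcarrier W \<and>
     (\<forall>\<beta>. bilinear_form V W \<beta> \<longrightarrow>
        sum_list (map (\<lambda>(a,b). \<beta> a b) xs) = sum_list (map (\<lambda>(a,b). \<beta> a b) ys))"

definition tensor3_eq :: "('k::field,'a) hopf_alg \<Rightarrow>
    ('a \<times> 'a \<times> 'a) list \<Rightarrow> ('a \<times> 'a \<times> 'a) list \<Rightarrow> bool" where
  "tensor3_eq V xs ys \<longleftrightarrow>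
     set xs \<subseteq> hcarrier V \<times> hcarrier V \<times> hcarrier V \<and>
     set ys \<subseteq> hcarrier V \<times> hcarrier V \<times> hcarrier V \<and>
     (\<forall>\<tau>. trilinear_form V \<tau> \<longrightarrow>
        sum_list (map (\<lambda>(a,b,c). \<tau> a b c) xs) = sum_list (map (\<lambda>(a,b,c). \<tau> a b c) ys))"

definition k_algebra :: "('k::field,'a) hopf_alg \<Rightarrow> bool" where
  "k_algebra H \<longleftrightarrow> vspace H \<and>
     hone H \<in> hcarrier H \<and>
     (\<forall>x\<in>hcarrier H. \<forall>y\<in>hcarrier H. hmult H x y \<in> hcarrier H) \<and>
     (\<forall>x\<in>hcarrier H. \<forall>y\<in>hcarrier H. \<forall>z\<in>hcarrier H.
        hmult H (hmult H x y) z = hmult H x (hmult H y z)) \<and>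
     (\<forall>x\<in>hcarrier H. hmult H (hone H) x = x \<and> hmult H x (hone H) = x) \<and>
     (\<forall>x\<in>hcarrier H. \<forall>y\<in>hcarrier H. \<forall>z\<in>hcarrier H.
        hmult H (hadd H x y) z = hadd H (hmult H x z) (hmult H y z) \<and>
        hmult H z (hadd H x y) = hadd H (hmult H z x) (hmult H z y)) \<and>
     (\<forall>c. \<forall>x\<in>hcarrier H. \<forall>y\<in>hcarrier H.
        hmult H (hscale H c x) y = hscale H c (hmult H x y) \<and>
        hmult H x (hscale H c y) = hscale H c (hmult H x y))"

definition k_coalgebra :: "('k::field,'a) hopf_alg \<Rightarrow> bool" where
  "k_coalgebra H \<longleftrightarrow> vspace H \<and>
     (\<forall>x\<in>hcarrier H. set (hcomult H x) \<subseteq> hcarrier H \<times> hcarrier H) \<and>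
     (\<forall>x\<in>hcarrier H. \<forall>y\<in>hcarrier H.
        tensor_eq H H (hcomult H (hadd H x y)) (hcomult H x @ hcomult H y)) \<and>
     (\<forall>c. \<forall>x\<in>hcarrier H. tensor_eq H H (hcomult H (hscale H c x))
        (map (\<lambda>(u,v). (hscale H c u, v)) (hcomult H x))) \<and>
     (\<forall>x\<in>hcarrier H. \<forall>y\<in>hcarrier H. hcounit H (hadd H x y) = hcounit H x + hcounit H y) \<and>
     (\<forall>c. \<forall>x\<in>hcarrier H. hcounit H (hscale H c x) = c * hcounit H x) \<and>
     (\<forall>x\<in>hcarrier H. tensor3_eq H
        (concat (map (\<lambda>(u,v). map (\<lambda>(u1,u2). (u1,u2,v)) (hcomult H u)) (hcomult H x)))
        (concat (map (\<lambda>(u,v). map (\<lambda>(v1,v2). (u,v1,v2)) (hcomult H v)) (hcomult H x)))) \<and>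
     (\<forall>x\<in>hcarrier H.
        vsum H (map (\<lambda>(u,v). hscale H (hcounit H u) v) (hcomult H x)) = x \<and>
        vsum H (map (\<lambda>(u,v). hscale H (hcounit H v) u) (hcomult H x)) = x)"

definition hopf :: "('k::field,'a) hopf_alg \<Rightarrow> bool" where
  "hopf H \<longleftrightarrow> k_algebra H \<and> k_coalgebra H \<and>
     (\<forall>x\<in>hcarrier H. \<forall>y\<in>hcarrier H. tensor_eq H H (hcomult H (hmult H x y))
        (concat (map (\<lambda>(u,v). map (\<lambda>(u',v'). (hmult H u u', hmult H v v')) (hcomult H y))
                   (hcomult H x)))) \<and>
     tensor_eq H H (hcomult H (hone H)) [(hone H, hone H)] \<and>
     (\<forall>x\<in>hcarrier H. \<forall>y\<in>hcarrier H. hcounit H (hmult H x y) = hcounit H x * hcounit H y) \<and>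
     hcounit H (hone H) = 1 \<and>
     linear_map H H (hantipode H) \<and>
     (\<forall>x\<in>hcarrier H.
        vsum H (map (\<lambda>(u,v). hmult H (hantipode H u) v) (hcomult H x))
          = hscale H (hcounit H x) (hone H) \<and>
        vsum H (map (\<lambda>(u,v). hmult H u (hantipode H v)) (hcomult H x))
          = hscale H (hcounit H x) (hone H))"

definition cocomm_hopf :: "('k::field,'a) hopf_alg \<Rightarrow> bool" where
  "cocomm_hopf H \<longleftrightarrow> hopf H \<and>
     (\<forall>x\<in>hcarrier H. tensor_eq H H (hcomult H x) (map (\<lambda>(u,v). (v,u)) (hcomult H x)))"

definition hopf_hom :: "('k::field,'a) hopf_alg \<Rightarrow> ('k,'b) hopf_alg \<Rightarrow> ('a \<Rightarrow> 'b) \<Rightarrow> bool" where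
  "hopf_hom H H' f \<longleftrightarrow> linear_map H H' f \<and>
     (\<forall>x\<in>hcarrier H. \<forall>y\<in>hcarrier H. f (hmult H x y) = hmult H' (f x) (f y)) \<and>
     f (hone H) = hone H' \<and>
     (\<forall>x\<in>hcarrier H. tensor_eq H' H' (hcomult H' (f x))
        (map (\<lambda>(u,v). (f u, f v)) (hcomult H x))) \<and>
     (\<forall>x\<in>hcarrier H. hcounit H' (f x) = hcounit H x)"

definition hopf_subalg :: "('k::field,'a) hopf_alg \<Rightarrow> 'a set \<Rightarrow> bool" where
  "hopf_subalg H S \<longleftrightarrow> S \<subseteq> hcarrier H \<and> hzero H \<in> S \<and>
     (\<forall>x\<in>S. \<forall>y\<in>S. hadd H x y \<in> S) \<and> (\<forall>c. \<forall>x\<in>S. hscale H c x \<in> S) \<and>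
     hone H \<in> S \<and> (\<forall>x\<in>S. \<forall>y\<in>S. hmult H x y \<in> S) \<and>
     (\<forall>x\<in>S. hantipode H x \<in> S) \<and>
     (\<forall>x\<in>S. \<exists>l. set l \<subseteq> S \<times> S \<and> tensor_eq H H (hcomult H x) l)"

definition sub_hopf :: "('k::field,'a) hopf_alg \<Rightarrow> 'a set \<Rightarrow> ('k,'a) hopf_alg" where
  "sub_hopf H S = H\<lparr>hcarrier := S,
     hcomult := (\<lambda>x. SOME l. set l \<subseteq> S \<times> S \<and> tensor_eq H H (hcomult H x) l)\<rparr>"

definition hplus :: "('k::field,'a) hopf_alg \<Rightarrow> 'a set \<Rightarrow> 'a set" where
  "hplus H S = {x \<in> S. hcounit H x = 0}"

definition h_inverse :: "('k::field,'a) hopf_alg \<Rightarrow> ('k,'b) hopf_alg \<Rightarrow> ('a \<Rightarrow> 'b) \<Rightarrow> 'b set \<Rightarrow> 'a set" where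
  "h_inverse A B p C = {x \<in> hcarrier A. \<exists>l. set l \<subseteq> hplus B C \<times> hcarrier A \<and>
     tensor_eq B A (map (\<lambda>(u,v). (p u, v)) (hcomult A x) @ [(hscale B (-1) (hone B), x)]) l}"

end

theory Submission
  imports Defs
begin

(* Applying id \<otimes> \<epsilon> to this identity exhibits p x as an element of C.  Sums, scalar multiples,
   1 and products stay in p^-1(C) because \<Delta> and p are multiplicative and C\<^sup>+ is an ideal of C;
   the antipode does because p commutes with S and, A being cocommutative, \<Delta> \<circ> S = (S \<otimes> S) \<circ> \<Delta>.
   p^-1(C) is a subcoalgebra: it is stable under every slice (id \<otimes> \<psi>)\<Delta>, and writing \<Delta>x with
   linearly independent second legs makes each first leg such a slice; by cocommutativity the same
   holds for the second legs.  For the pullback property, a morphism f : D \<rightarrow> A with p \<circ> f = i \<circ> g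
   has image in p^-1(C), witnessed by l = \<Sum> (g x\<^sub>1 - \<epsilon>(x\<^sub>1) 1) \<otimes> f x\<^sub>2, so f itself is the unique
   factorisation.
   Tensors are lists of pure tensors compared through bilinear forms; over an arbitrary field there
   are enough linear forms to separate vectors because every subspace has a complement (Zorn). *)

section \<open>Linear algebra on carrier sets\<close>

definition linear_form :: "('k::field,'a) hopf_alg \<Rightarrow> ('a \<Rightarrow> 'k) \<Rightarrow> bool" where
  "linear_form V \<phi> \<longleftrightarrow> (\<forall>x\<in>hcarrier V. \<forall>y\<in>hcarrier V. \<phi> (hadd V x y) = \<phi> x + \<phi> y) \<and>
    (\<forall>c. \<forall>x\<in>hcarrier V. \<phi> (hscale V c x) = c * \<phi> x)"

definition subspace :: "('k::field,'a) hopf_alg \<Rightarrow> 'a set \<Rightarrow> bool" where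
  "subspace V W \<longleftrightarrow> W \<subseteq> hcarrier V \<and> hzero V \<in> W \<and> (\<forall>x\<in>W. \<forall>y\<in>W. hadd V x y \<in> W) \<and>
    (\<forall>c. \<forall>x\<in>W. hscale V c x \<in> W)"

lemma linear_formD:
  assumes "linear_form V \<phi>"
  shows "x \<in> hcarrier V \<Longrightarrow> y \<in> hcarrier V \<Longrightarrow> \<phi> (hadd V x y) = \<phi> x + \<phi> y"
    and "x \<in> hcarrier V \<Longrightarrow> \<phi> (hscale V c x) = c * \<phi> x"
  using assms unfolding linear_form_def by auto

lemma subspaceD:
  assumes "subspace V W"
  shows "W \<subseteq> hcarrier V" "hzero V \<in> W" "x \<in> W \<Longrightarrow> y \<in> W \<Longrightarrow> hadd V x y \<in> W"
    "x \<in> W \<Longrightarrow> hscale V c x \<in> W"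
  using assms unfolding subspace_def by auto

lemma subspace_carrier: "subspace V W \<Longrightarrow> x \<in> W \<Longrightarrow> x \<in> hcarrier V"
  using subspaceD(1) by blast

lemma vsum_Nil[simp]: "vsum V [] = hzero V"
  by (simp add: vsum_def)

lemma vsum_Cons[simp]: "vsum V (x # xs) = hadd V x (vsum V xs)"
  by (simp add: vsum_def)

locale vec_space =
  fixes V :: "('k::field,'a) hopf_alg"
  assumes vspace: "vspace V"
begin

lemma zero_closed[simp]: "hzero V \<in> hcarrier V"
  using vspace unfolding vspace_def by (elim conjE) metis
lemma add_closed[simp]: "x \<in> hcarrier V \<Longrightarrow> y \<in> hcarrier V \<Longrightarrow> hadd V x y \<in> hcarrier V"
  using vspace unfolding vspace_def by (elim conjE) metis
lemma scale_closed[simp]: "x \<in> hcarrier V \<Longrightarrow> hscale V c x \<in> hcarrier V"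
  using vspace unfolding vspace_def by (elim conjE) metis
lemma add_assoc: "x \<in> hcarrier V \<Longrightarrow> y \<in> hcarrier V \<Longrightarrow> z \<in> hcarrier V \<Longrightarrow>
    hadd V (hadd V x y) z = hadd V x (hadd V y z)"
  using vspace unfolding vspace_def by (elim conjE) metis
lemma add_comm: "x \<in> hcarrier V \<Longrightarrow> y \<in> hcarrier V \<Longrightarrow> hadd V x y = hadd V y x"
  using vspace unfolding vspace_def by (elim conjE) metis
lemma zero_add[simp]: "x \<in> hcarrier V \<Longrightarrow> hadd V (hzero V) x = x"
  using vspace unfolding vspace_def by (elim conjE) metis
lemma add_inverse_ex: "x \<in> hcarrier V \<Longrightarrow> \<exists>y\<in>hcarrier V. hadd V x y = hzero V"
  using vspace unfolding vspace_def by (elim conjE) metis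
lemma scale_add_right: "x \<in> hcarrier V \<Longrightarrow> y \<in> hcarrier V \<Longrightarrow>
    hscale V c (hadd V x y) = hadd V (hscale V c x) (hscale V c y)"
  using vspace unfolding vspace_def by (elim conjE) metis
lemma scale_add_left: "x \<in> hcarrier V \<Longrightarrow> hscale V (c + d) x = hadd V (hscale V c x) (hscale V d x)"
  using vspace unfolding vspace_def by (elim conjE) metis
lemma scale_mult: "x \<in> hcarrier V \<Longrightarrow> hscale V (c * d) x = hscale V c (hscale V d x)"
  using vspace unfolding vspace_def by (elim conjE) metis
lemma scale_one[simp]: "x \<in> hcarrier V \<Longrightarrow> hscale V 1 x = x"
  using vspace unfolding vspace_def by (elim conjE) metis

lemma scale_scale[simp]: "x \<in> hcarrier V \<Longrightarrow> hscale V c (hscale V d x) = hscale V (c * d) x"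
  by (simp add: scale_mult)

lemma add_left_commute: "x \<in> hcarrier V \<Longrightarrow> y \<in> hcarrier V \<Longrightarrow> z \<in> hcarrier V \<Longrightarrow>
    hadd V x (hadd V y z) = hadd V y (hadd V x z)"
  by (metis add_assoc add_comm)

lemmas add_ac = add_assoc add_comm add_left_commute

lemma add_zero[simp]: "x \<in> hcarrier V \<Longrightarrow> hadd V x (hzero V) = x"
  using add_comm zero_add zero_closed by metis

lemma add_left_cancel:
  assumes "a \<in> hcarrier V" "x \<in> hcarrier V" "y \<in> hcarrier V" "hadd V a x = hadd V a y"
  shows "x = y"
proof -
  obtain b where b: "b \<in> hcarrier V" "hadd V a b = hzero V" using add_inverse_ex assms(1) by blast
  have "x = hadd V (hadd V b a) x" using b assms by (simp add: add_comm)
  also have "\<dots> = hadd V (hadd V b a) y" using b assms by (simp add: add_assoc)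
  also have "\<dots> = y" using b assms by (simp add: add_comm)
  finally show ?thesis .
qed

lemma scale_zero_left[simp]: assumes "x \<in> hcarrier V" shows "hscale V 0 x = hzero V"
proof -
  have "hadd V (hscale V 0 x) (hscale V 0 x) = hadd V (hscale V 0 x) (hzero V)"
    using scale_add_left[OF assms, of 0 0] assms by simp
  from add_left_cancel[OF _ _ _ this] assms show ?thesis by simp
qed

lemma scale_zero_right[simp]: "hscale V c (hzero V) = hzero V"
proof -
  have "hadd V (hscale V c (hzero V)) (hscale V c (hzero V)) = hadd V (hscale V c (hzero V)) (hzero V)"
    using scale_add_right[of "hzero V" "hzero V" c] by simp
  from add_left_cancel[OF _ _ _ this] show ?thesis by simp
qed

lemma add_neg_right[simp]: assumes "x \<in> hcarrier V" shows "hadd V x (hscale V (-1) x) = hzero V"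
proof -
  have "hadd V x (hscale V (-1) x) = hadd V (hscale V 1 x) (hscale V (-1) x)" using assms by simp
  also have "\<dots> = hscale V 0 x" using scale_add_left[OF assms, of 1 "-1"] assms by simp
  finally show ?thesis using assms by simp
qed

lemma add_neg_left[simp]: "x \<in> hcarrier V \<Longrightarrow> hadd V (hscale V (-1) x) x = hzero V"
  using add_neg_right add_comm by (metis scale_closed)

lemma eq_if_diff_zero:
  assumes "a \<in> hcarrier V" "c \<in> hcarrier V" "hadd V a (hscale V (-1) c) = hzero V"
  shows "a = c"
proof -
  have "a = hadd V a (hadd V (hscale V (-1) c) c)" using assms(1,2) by simp
  also have "\<dots> = hadd V (hadd V a (hscale V (-1) c)) c"
    using assms(1,2) by (simp del: add_neg_left add_neg_right add: add_assoc)
  also have "\<dots> = c" using assms by simp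
  finally show ?thesis .
qed

lemma diff_eq_diff_if_add_eq:
  assumes "a \<in> hcarrier V" "b \<in> hcarrier V" "c \<in> hcarrier V" "e \<in> hcarrier V"
    and "hadd V a b = hadd V c e"
  shows "hadd V a (hscale V (-1) c) = hadd V e (hscale V (-1) b)"
proof -
  have "hadd V (hadd V b c) (hadd V a (hscale V (-1) c)) = hadd V (hadd V a b) (hadd V c (hscale V (-1) c))"
    using assms(1-4) by (simp del: add_neg_left add_neg_right add: add_ac)
  also have "\<dots> = hadd V (hadd V c e) (hadd V b (hscale V (-1) b))" using assms by simp
  also have "\<dots> = hadd V (hadd V b c) (hadd V e (hscale V (-1) b))"
    using assms(1-4) by (simp del: add_neg_left add_neg_right add: add_ac)
  finally show ?thesis using assms add_left_cancel[of "hadd V b c"] by simp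
qed

lemma linear_form_zero: "linear_form V \<phi> \<Longrightarrow> \<phi> (hzero V) = 0"
  using linear_formD(2)[of V \<phi> "hzero V" 0] by simp

lemma linear_form_neg: "linear_form V \<phi> \<Longrightarrow> x \<in> hcarrier V \<Longrightarrow> \<phi> (hscale V (-1) x) = - \<phi> x"
  using linear_formD(2) by fastforce

lemma vsum_closed[simp]: "set xs \<subseteq> hcarrier V \<Longrightarrow> vsum V xs \<in> hcarrier V"
  by (induction xs) auto

lemma vsum_in_subspace: "subspace V W \<Longrightarrow> set xs \<subseteq> W \<Longrightarrow> vsum V xs \<in> W"
  by (induction xs) (auto simp: subspaceD)

lemma linear_form_vsum:
  "linear_form V \<phi> \<Longrightarrow> set xs \<subseteq> hcarrier V \<Longrightarrow> \<phi> (vsum V xs) = sum_list (map \<phi> xs)"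
  by (induction xs) (auto simp: linear_form_zero linear_formD)

lemma scale_left_inj:
  assumes x: "x \<in> hcarrier V" "x \<noteq> hzero V" and eq: "hscale V c x = hscale V d x"
  shows "c = d"
proof (rule ccontr)
  assume "c \<noteq> d"
  have "hscale V (c - d) x = hadd V (hscale V c x) (hscale V (-d) x)"
    using scale_add_left[OF x(1), of c "-d"] by simp
  also have "\<dots> = hscale V (d + -d) x" using eq scale_add_left[OF x(1), of d "-d"] by simp
  finally have "hscale V (c - d) x = hzero V" using x by simp
  then have "hscale V (inverse (c - d)) (hscale V (c - d) x) = hzero V" by simp
  with \<open>c \<noteq> d\<close> x show False by simp
qed

lemma subspace_Union_chain:
  assumes "C \<noteq> {}" and sub: "\<And>X. X \<in> C \<Longrightarrow> subspace V X"
    and chain: "\<And>X Y. X \<in> C \<Longrightarrow> Y \<in> C \<Longrightarrow> X \<subseteq> Y \<or> Y \<subseteq> X"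
  shows "subspace V (\<Union>C)"
  unfolding subspace_def
proof (intro conjI ballI allI)
  show "\<Union>C \<subseteq> hcarrier V" by (intro Union_least subspaceD(1)[OF sub])
  obtain X where "X \<in> C" using assms(1) by blast
  then show "hzero V \<in> \<Union>C" using subspaceD(2)[OF sub] by blast
next
  fix x y assume "x \<in> \<Union>C" "y \<in> \<Union>C"
  then obtain X Y where XY: "X \<in> C" "Y \<in> C" "x \<in> X" "y \<in> Y" by blast
  then obtain Z where Z: "Z \<in> C" "x \<in> Z" "y \<in> Z" using chain[OF XY(1,2)] by blast
  then have "hadd V x y \<in> Z" using subspaceD(3)[OF sub] by blast
  then show "hadd V x y \<in> \<Union>C" using Z(1) by blast
next
  fix c x assume "x \<in> \<Union>C"
  then obtain X where X: "X \<in> C" "x \<in> X" by blast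
  then have "hscale V c x \<in> X" using subspaceD(4)[OF sub] by blast
  then show "hscale V c x \<in> \<Union>C" using X(1) by blast
qed

definition adjoin :: "'a set \<Rightarrow> 'a \<Rightarrow> 'a set" where
  "adjoin T v = {hadd V t (hscale V c v) | t c. t \<in> T}"

lemma subspace_adjoin:
  assumes T: "subspace V T" and v: "v \<in> hcarrier V"
  shows "subspace V (adjoin T v)" "T \<subseteq> adjoin T v" "v \<in> adjoin T v"
proof -
  have Tc: "t \<in> hcarrier V" if "t \<in> T" for t using subspaceD(1)[OF T] that by blast
  show sub: "T \<subseteq> adjoin T v"
  proof
    fix t assume t: "t \<in> T"
    then have "t = hadd V t (hscale V 0 v)" using Tc[OF t] v by simp
    then show "t \<in> adjoin T v" unfolding adjoin_def using t by blast
  qed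
  have "v = hadd V (hzero V) (hscale V 1 v)" using v by simp
  then show "v \<in> adjoin T v" unfolding adjoin_def using subspaceD(2)[OF T] by blast
  show "subspace V (adjoin T v)"
    unfolding subspace_def
  proof (intro conjI ballI allI)
    show "adjoin T v \<subseteq> hcarrier V" unfolding adjoin_def by (auto simp: Tc v)
    show "hzero V \<in> adjoin T v" using sub subspaceD(2)[OF T] by blast
  next
    fix x y assume "x \<in> adjoin T v" "y \<in> adjoin T v"
    then obtain t c t' c' where tt: "t \<in> T" "t' \<in> T"
      and xy: "x = hadd V t (hscale V c v)" "y = hadd V t' (hscale V c' v)"
      unfolding adjoin_def by blast
    have "t \<in> hcarrier V" "t' \<in> hcarrier V" using Tc tt by auto
    then have "hadd V x y = hadd V (hadd V t t') (hadd V (hscale V c v) (hscale V c' v))"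
      unfolding xy using v by (simp del: add_neg_left add_neg_right add: add_ac)
    also have "\<dots> = hadd V (hadd V t t') (hscale V (c + c') v)" using v by (simp add: scale_add_left)
    finally show "hadd V x y \<in> adjoin T v"
      unfolding adjoin_def using subspaceD(3)[OF T tt] by blast
  next
    fix d x assume "x \<in> adjoin T v"
    then obtain t c where t: "t \<in> T" "x = hadd V t (hscale V c v)" unfolding adjoin_def by blast
    then have "hscale V d x = hadd V (hscale V d t) (hscale V (d * c) v)"
      using Tc[OF t(1)] v by (simp add: scale_add_right)
    then show "hscale V d x \<in> adjoin T v" unfolding adjoin_def using subspaceD(4)[OF T t(1)] by blast
  qed
qed

lemma adjoin_inter_zero:
  assumes W: "subspace V W" and T: "subspace V T" and TW: "T \<inter> W \<subseteq> {hzero V}"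
    and v: "v \<in> hcarrier V" and nv: "\<forall>w\<in>W. \<forall>t\<in>T. v \<noteq> hadd V w t"
  shows "adjoin T v \<inter> W \<subseteq> {hzero V}"
proof
  fix w assume "w \<in> adjoin T v \<inter> W"
  then obtain t c where t: "t \<in> T" and w: "w \<in> W" "w = hadd V t (hscale V c v)"
    unfolding adjoin_def by blast
  have tc: "t \<in> hcarrier V" using subspace_carrier[OF T t] .
  show "w \<in> {hzero V}"
  proof (cases "c = 0")
    case True
    then have "w = t" using w tc v by simp
    then show ?thesis using TW t w by blast
  next
    case False
    have "hscale V (inverse c) w = hadd V (hscale V (inverse c) t) v"
      using w tc v False by (simp add: scale_add_right)
    then have "hadd V (hscale V (inverse c) w) (hscale V (- inverse c) t) =
        hadd V v (hadd V (hscale V (inverse c) t) (hscale V (- inverse c) t))"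
      using tc v by (simp del: add_neg_left add_neg_right add: add_ac)
    also have "\<dots> = v" using tc v by (simp add: scale_add_left[symmetric])
    finally have "v = hadd V (hscale V (inverse c) w) (hscale V (- inverse c) t)" by simp
    moreover have "hscale V (inverse c) w \<in> W" using subspaceD(4)[OF W w(1)] .
    moreover have "hscale V (- inverse c) t \<in> T" using subspaceD(4)[OF T t] .
    ultimately show ?thesis using nv by blast
  qed
qed

lemma subspace_complement:
  assumes W: "subspace V W"
  shows "\<exists>T. subspace V T \<and> T \<inter> W \<subseteq> {hzero V} \<and> (\<forall>v\<in>hcarrier V. \<exists>w\<in>W. \<exists>t\<in>T. v = hadd V w t)"
proof -
  define \<T> where "\<T> = {T. subspace V T \<and> T \<inter> W \<subseteq> {hzero V}}"
  have "\<exists>M\<in>\<T>. \<forall>X\<in>\<T>. M \<subseteq> X \<longrightarrow> X = M"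
  proof (rule Zorn_Lemma2, intro ballI)
    fix Ch assume Ch: "Ch \<in> chains \<T>"
    show "\<exists>U\<in>\<T>. \<forall>X\<in>Ch. X \<subseteq> U"
    proof (cases "Ch = {}")
      case True
      have "{hzero V} \<in> \<T>" unfolding \<T>_def subspace_def by auto
      then show ?thesis using True by blast
    next
      case False
      have "subspace V (\<Union>Ch)"
        by (rule subspace_Union_chain[OF False])
           (use Ch in \<open>auto simp: chains_def chain_subset_def \<T>_def\<close>)
      moreover have "\<Union>Ch \<inter> W \<subseteq> {hzero V}" using Ch unfolding chains_def \<T>_def by blast
      ultimately show ?thesis unfolding \<T>_def by blast
    qed
  qed
  then obtain T where T: "subspace V T" "T \<inter> W \<subseteq> {hzero V}" and max: "\<forall>X\<in>\<T>. T \<subseteq> X \<longrightarrow> X = T"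
    unfolding \<T>_def by blast
  have "\<exists>w\<in>W. \<exists>t\<in>T. v = hadd V w t" if v: "v \<in> hcarrier V" for v
  proof (rule ccontr)
    assume nv: "\<not> ?thesis"
    have "adjoin T v \<in> \<T>"
      unfolding \<T>_def using subspace_adjoin(1)[OF T(1) v] adjoin_inter_zero[OF W T v] nv by blast
    then have "v \<in> T" using max subspace_adjoin(2,3)[OF T(1) v] by blast
    then show False using nv subspaceD(2)[OF W] v by (metis zero_add)
  qed
  then show ?thesis using T by blast
qed

lemma complement_component_unique:
  assumes W: "subspace V W" and T: "subspace V T" and TW: "T \<inter> W \<subseteq> {hzero V}"
    and w: "w \<in> W" "w' \<in> W" and t: "t \<in> T" "t' \<in> T" and eq: "hadd V w t = hadd V w' t'"
  shows "w = w'"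
proof -
  note Tc = subspace_carrier[OF T] and Wc = subspace_carrier[OF W]
  have "hadd V w (hscale V (-1) w') = hadd V t' (hscale V (-1) t)"
    using diff_eq_diff_if_add_eq[OF Wc[OF w(1)] Tc[OF t(1)] Wc[OF w(2)] Tc[OF t(2)] eq] .
  moreover have "hadd V w (hscale V (-1) w') \<in> W" using w subspaceD(3,4)[OF W] by blast
  moreover have "hadd V t' (hscale V (-1) t) \<in> T" using t subspaceD(3,4)[OF T] by blast
  ultimately have "hadd V w (hscale V (-1) w') = hzero V" using TW by auto
  then show ?thesis using eq_if_diff_zero Wc w by blast
qed

lemma subspace_projection:
  assumes W: "subspace V W"
  shows "\<exists>\<pi>. (\<forall>v\<in>hcarrier V. \<pi> v \<in> W) \<and> (\<forall>w\<in>W. \<pi> w = w) \<and>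
     (\<forall>x\<in>hcarrier V. \<forall>y\<in>hcarrier V. \<pi> (hadd V x y) = hadd V (\<pi> x) (\<pi> y)) \<and>
     (\<forall>c. \<forall>x\<in>hcarrier V. \<pi> (hscale V c x) = hscale V c (\<pi> x))"
proof -
  obtain T where Ts: "subspace V T" and TW: "T \<inter> W \<subseteq> {hzero V}"
    and span: "\<forall>v\<in>hcarrier V. \<exists>w\<in>W. \<exists>t\<in>T. v = hadd V w t"
    using subspace_complement[OF W] by blast
  note Tc = subspace_carrier[OF Ts] and Wc = subspace_carrier[OF W]
  note uniq = complement_component_unique[OF W Ts TW]
  define \<pi> where "\<pi> v = (SOME w. w \<in> W \<and> (\<exists>t\<in>T. v = hadd V w t))" for v
  have \<pi>_spec0: "\<pi> v \<in> W \<and> (\<exists>t\<in>T. v = hadd V (\<pi> v) t)" if "v \<in> hcarrier V" for v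
    unfolding \<pi>_def by (rule someI_ex) (use span that in blast)
  have \<pi>_spec: "\<pi> v \<in> W \<and> (\<exists>t\<in>T. hadd V (\<pi> v) t = v)" if "v \<in> hcarrier V" for v
    using \<pi>_spec0[OF that] by metis
  have \<pi>_eq: "\<pi> v = w" if "v \<in> hcarrier V" "w \<in> W" "t \<in> T" "v = hadd V w t" for v w t
    using \<pi>_spec[OF that(1)] uniq that by metis
  have \<pi>_range: "\<forall>v\<in>hcarrier V. \<pi> v \<in> W" using \<pi>_spec by blast
  have \<pi>_id: "\<forall>w\<in>W. \<pi> w = w"
  proof
    fix w assume w: "w \<in> W"
    show "\<pi> w = w" using \<pi>_eq[of w w "hzero V"] w Wc subspaceD(2)[OF Ts] by simp
  qed
  have \<pi>_add: "\<forall>x\<in>hcarrier V. \<forall>y\<in>hcarrier V. \<pi> (hadd V x y) = hadd V (\<pi> x) (\<pi> y)"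
  proof (intro ballI)
    fix x y assume x: "x \<in> hcarrier V" and y: "y \<in> hcarrier V"
    obtain t where t: "t \<in> T" "hadd V (\<pi> x) t = x" using \<pi>_spec[OF x] by blast
    obtain t' where t': "t' \<in> T" "hadd V (\<pi> y) t' = y" using \<pi>_spec[OF y] by blast
    have \<pi>x: "\<pi> x \<in> W" "\<pi> y \<in> W" using \<pi>_range x y by auto
    have "hadd V x y = hadd V (hadd V (\<pi> x) t) (hadd V (\<pi> y) t')" using t(2) t'(2) by simp
    also have "\<dots> = hadd V (hadd V (\<pi> x) (\<pi> y)) (hadd V t t')"
      using \<pi>x t(1) t'(1) Tc Wc by (simp del: add_neg_left add_neg_right add: add_ac)
    finally show "\<pi> (hadd V x y) = hadd V (\<pi> x) (\<pi> y)"
      by (intro \<pi>_eq[of "hadd V x y" "hadd V (\<pi> x) (\<pi> y)" "hadd V t t'"])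
        (use x y \<pi>x t(1) t'(1) subspaceD(3)[OF W] subspaceD(3)[OF Ts] Wc Tc in auto)
  qed
  have \<pi>_scale: "\<forall>c. \<forall>x\<in>hcarrier V. \<pi> (hscale V c x) = hscale V c (\<pi> x)"
  proof (intro ballI allI)
    fix c x assume x: "x \<in> hcarrier V"
    obtain t where t: "t \<in> T" "hadd V (\<pi> x) t = x" using \<pi>_spec[OF x] by blast
    have \<pi>x: "\<pi> x \<in> W" using \<pi>_range x by auto
    have "hscale V c x = hadd V (hscale V c (\<pi> x)) (hscale V c t)"
      using t \<pi>x Tc Wc scale_add_right by metis
    then show "\<pi> (hscale V c x) = hscale V c (\<pi> x)"
      by (intro \<pi>_eq[of "hscale V c x" "hscale V c (\<pi> x)" "hscale V c t"])
        (use x \<pi>x t(1) subspaceD(4)[OF W] subspaceD(4)[OF Ts] Wc Tc in auto)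
  qed
  show ?thesis using \<pi>_range \<pi>_id \<pi>_add \<pi>_scale by blast
qed

lemma subspace_line: "x \<in> hcarrier V \<Longrightarrow> subspace V {hscale V c x | c. True}"
  unfolding subspace_def
proof (intro conjI ballI allI)
  assume x: "x \<in> hcarrier V"
  show "{hscale V c x | c. True} \<subseteq> hcarrier V" using x by auto
  have "hzero V = hscale V 0 x" using x by simp
  then show "hzero V \<in> {hscale V c x | c. True}" by blast
  fix a b assume "a \<in> {hscale V c x | c. True}" "b \<in> {hscale V c x | c. True}"
  then obtain c d where "a = hscale V c x" "b = hscale V d x" by blast
  then have "hadd V a b = hscale V (c + d) x" using x by (simp add: scale_add_left)
  then show "hadd V a b \<in> {hscale V c x | c. True}" by blast
next
  fix e a assume x: "x \<in> hcarrier V" and "a \<in> {hscale V c x | c. True}"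
  then obtain c where "a = hscale V c x" by blast
  then have "hscale V e a = hscale V (e * c) x" using x by simp
  then show "hscale V e a \<in> {hscale V c x | c. True}" by blast
qed

lemma linear_form_separates_nonzero:
  assumes x: "x \<in> hcarrier V" "x \<noteq> hzero V"
  shows "\<exists>\<phi>. linear_form V \<phi> \<and> \<phi> x = 1"
proof -
  define W where "W = {hscale V c x | c. True}"
  have Ws: "subspace V W" unfolding W_def by (rule subspace_line[OF x(1)])
  obtain \<pi> where \<pi>_range: "\<forall>v\<in>hcarrier V. \<pi> v \<in> W" and \<pi>_id: "\<forall>w\<in>W. \<pi> w = w"
    and \<pi>_add: "\<forall>a\<in>hcarrier V. \<forall>b\<in>hcarrier V. \<pi> (hadd V a b) = hadd V (\<pi> a) (\<pi> b)"
    and \<pi>_scale: "\<forall>c. \<forall>a\<in>hcarrier V. \<pi> (hscale V c a) = hscale V c (\<pi> a)"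
    using subspace_projection[OF Ws] by blast
  define \<phi> where "\<phi> v = (THE c. \<pi> v = hscale V c x)" for v
  have coord: "\<pi> v = hscale V (\<phi> v) x" if "v \<in> hcarrier V" for v
  proof -
    have "\<pi> v \<in> W" using \<pi>_range that by blast
    then obtain c where c: "\<pi> v = hscale V c x" unfolding W_def by blast
    have "(THE c. \<pi> v = hscale V c x) = c"
    proof (rule the_equality)
      show "\<pi> v = hscale V c x" by (rule c)
      fix c' assume "\<pi> v = hscale V c' x"
      then show "c' = c" using c scale_left_inj[OF x, of c' c] by simp
    qed
    then have "\<phi> v = c" unfolding \<phi>_def .
    then show ?thesis using c by simp
  qed
  have "linear_form V \<phi>" unfolding linear_form_def
  proof (intro conjI ballI allI)
    fix a b assume a: "a \<in> hcarrier V" and b: "b \<in> hcarrier V"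
    have "hscale V (\<phi> (hadd V a b)) x = hscale V (\<phi> a + \<phi> b) x"
      using coord[of "hadd V a b"] coord[OF a] coord[OF b] \<pi>_add a b x by (simp add: scale_add_left)
    then show "\<phi> (hadd V a b) = \<phi> a + \<phi> b" using scale_left_inj[OF x] by blast
  next
    fix c a assume a: "a \<in> hcarrier V"
    have "hscale V (\<phi> (hscale V c a)) x = hscale V (c * \<phi> a) x"
      using coord[of "hscale V c a"] coord[OF a] \<pi>_scale a x by simp
    then show "\<phi> (hscale V c a) = c * \<phi> a" using scale_left_inj[OF x] by blast
  qed
  moreover have "\<phi> x = 1"
  proof -
    have "x = hscale V 1 x" using x by simp
    then have "x \<in> W" unfolding W_def by blast
    then have "hscale V (\<phi> x) x = hscale V 1 x" using coord[OF x(1)] \<pi>_id x by simp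
    then show ?thesis using scale_left_inj[OF x] by blast
  qed
  ultimately show ?thesis by blast
qed

lemma eq_by_linear_forms:
  assumes "x \<in> hcarrier V" "y \<in> hcarrier V" "\<And>\<phi>. linear_form V \<phi> \<Longrightarrow> \<phi> x = \<phi> y"
  shows "x = y"
proof (rule ccontr)
  assume "x \<noteq> y"
  let ?d = "hadd V x (hscale V (-1) y)"
  have "?d \<noteq> hzero V" using eq_if_diff_zero assms(1,2) \<open>x \<noteq> y\<close> by blast
  moreover have "?d \<in> hcarrier V" using assms(1,2) by simp
  ultimately obtain \<phi> where \<phi>: "linear_form V \<phi>" "\<phi> ?d = 1"
    using linear_form_separates_nonzero by blast
  have "\<phi> ?d = \<phi> x - \<phi> y" using \<phi>(1) assms(1,2) by (simp add: linear_formD linear_form_neg)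
  then show False using \<phi> assms(3)[OF \<phi>(1)] by simp
qed

end

section \<open>Tensors as lists of pure tensors\<close>

definition pair_sum :: "('a \<Rightarrow> 'b \<Rightarrow> 'k::comm_monoid_add) \<Rightarrow> ('a \<times> 'b) list \<Rightarrow> 'k" where
  "pair_sum \<beta> xs = sum_list (map (\<lambda>(a,b). \<beta> a b) xs)"

lemma pair_sum_Nil[simp]: "pair_sum \<beta> [] = 0" by (simp add: pair_sum_def)
lemma pair_sum_Cons[simp]: "pair_sum \<beta> ((a,b) # xs) = \<beta> a b + pair_sum \<beta> xs" by (simp add: pair_sum_def)
lemma pair_sum_append[simp]: "pair_sum \<beta> (xs @ ys) = pair_sum \<beta> xs + pair_sum \<beta> ys" by (simp add: pair_sum_def)
lemma pair_sum_map_pair[simp]: "pair_sum \<beta> (map (\<lambda>(a,b). (f a b, g a b)) xs) =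
    pair_sum (\<lambda>a b. \<beta> (f a b) (g a b)) xs"
  by (induction xs) (auto simp: pair_sum_def)
lemma pair_sum_cong: "(\<And>a b. (a,b) \<in> set xs \<Longrightarrow> \<beta> a b = \<gamma> a b) \<Longrightarrow> pair_sum \<beta> xs = pair_sum \<gamma> xs"
  by (induction xs) (auto simp: pair_sum_def)
lemma pair_sum_add: "pair_sum (\<lambda>a b. \<beta> a b + \<gamma> a b) xs = pair_sum \<beta> xs + pair_sum \<gamma> xs"
  by (induction xs) (auto simp: pair_sum_def add_ac)
lemma pair_sum_cmult: "pair_sum (\<lambda>a b. (c::'k::comm_ring) * \<beta> a b) xs = c * pair_sum \<beta> xs"
  by (induction xs) (auto simp: pair_sum_def algebra_simps)
lemma pair_sum_cmult_right: "pair_sum (\<lambda>a b. \<beta> a b * (c::'k::comm_ring)) xs = pair_sum \<beta> xs * c"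
  by (induction xs) (auto simp: pair_sum_def algebra_simps)
lemma pair_sum_zero[simp]: "pair_sum (\<lambda>a b. 0) xs = 0"
  by (induction xs) (auto simp: pair_sum_def)
lemma pair_sum_commute: "pair_sum (\<lambda>a b. pair_sum (\<lambda>c d. f a b c d) ys) xs =
    pair_sum (\<lambda>c d. pair_sum (\<lambda>a b. f a b c d) xs) ys"
proof (induction xs)
  case Nil then show ?case by (simp add: pair_sum_def)
next
  case (Cons x xs) then show ?case by (cases x) (simp add: pair_sum_add)
qed
lemma pair_sum_concat_map: "pair_sum \<beta> (concat (map (\<lambda>(a,b). F a b) xs)) =
    pair_sum (\<lambda>a b. pair_sum \<beta> (F a b)) xs"
  by (induction xs) (auto simp: pair_sum_def)

lemma linear_form_add: "linear_form V \<phi> \<Longrightarrow> linear_form V \<psi> \<Longrightarrow> linear_form V (\<lambda>x. \<phi> x + \<psi> x)"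
  unfolding linear_form_def by (auto simp: algebra_simps)
lemma linear_form_cmult: "linear_form V \<phi> \<Longrightarrow> linear_form V (\<lambda>x. c * \<phi> x)"
  unfolding linear_form_def by (auto simp: algebra_simps)
lemma linear_form_cmult_right: "linear_form V \<phi> \<Longrightarrow> linear_form V (\<lambda>x. \<phi> x * c)"
  unfolding linear_form_def by (auto simp: algebra_simps)
lemma linear_form_zero_fun: "linear_form V (\<lambda>x. 0)"
  unfolding linear_form_def by auto
lemma linear_form_pair_sum: "(\<And>a b. (a,b) \<in> set t \<Longrightarrow> linear_form V (f a b)) \<Longrightarrow>
  linear_form V (\<lambda>x. pair_sum (\<lambda>a b. f a b x) t)"
proof (induction t)
  case Nil then show ?case by (simp add: linear_form_zero_fun)
next
  case (Cons a t) then show ?case by (cases a) (simp add: linear_form_add)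
qed
lemma linear_form_comp: "linear_form W \<phi> \<Longrightarrow> linear_map V W f \<Longrightarrow> linear_form V (\<lambda>x. \<phi> (f x))"
  unfolding linear_form_def linear_map_def by (auto simp: image_subset_iff)

lemma linear_mapD:
  assumes "linear_map V W f"
  shows "x \<in> hcarrier V \<Longrightarrow> f x \<in> hcarrier W"
    "x \<in> hcarrier V \<Longrightarrow> y \<in> hcarrier V \<Longrightarrow> f (hadd V x y) = hadd W (f x) (f y)"
    "x \<in> hcarrier V \<Longrightarrow> f (hscale V c x) = hscale W c (f x)"
  using assms unfolding linear_map_def by auto

lemma linear_map_comp: "linear_map U V g \<Longrightarrow> linear_map V W f \<Longrightarrow> linear_map U W (\<lambda>x. f (g x))"
  unfolding linear_map_def by (auto simp: image_subset_iff)

lemma bilinear_form_iff: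
  "bilinear_form V W \<beta> \<longleftrightarrow> (\<forall>y\<in>hcarrier W. linear_form V (\<lambda>x. \<beta> x y)) \<and> (\<forall>x\<in>hcarrier V. linear_form W (\<beta> x))"
  unfolding bilinear_form_def linear_form_def by auto

lemma bilinear_formI:
  "(\<And>y. y \<in> hcarrier W \<Longrightarrow> linear_form V (\<lambda>x. \<beta> x y)) \<Longrightarrow> (\<And>x. x \<in> hcarrier V \<Longrightarrow> linear_form W (\<lambda>y. \<beta> x y)) \<Longrightarrow>
    bilinear_form V W \<beta>"
  unfolding bilinear_form_iff by auto

lemma bilinear_formD:
  "bilinear_form V W \<beta> \<Longrightarrow> y \<in> hcarrier W \<Longrightarrow> linear_form V (\<lambda>x. \<beta> x y)"
  "bilinear_form V W \<beta> \<Longrightarrow> x \<in> hcarrier V \<Longrightarrow> linear_form W (\<lambda>y. \<beta> x y)"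
  unfolding bilinear_form_iff by auto

lemma trilinear_form_iff:
  "trilinear_form V \<tau> \<longleftrightarrow> (\<forall>y\<in>hcarrier V. \<forall>z\<in>hcarrier V. linear_form V (\<lambda>x. \<tau> x y z)) \<and>
     (\<forall>x\<in>hcarrier V. \<forall>z\<in>hcarrier V. linear_form V (\<lambda>y. \<tau> x y z)) \<and>
     (\<forall>x\<in>hcarrier V. \<forall>y\<in>hcarrier V. linear_form V (\<lambda>z. \<tau> x y z))"
  unfolding trilinear_form_def bilinear_form_iff by auto

lemma trilinear_formI:
  "(\<And>y z. y \<in> hcarrier V \<Longrightarrow> z \<in> hcarrier V \<Longrightarrow> linear_form V (\<lambda>x. \<tau> x y z)) \<Longrightarrow>
   (\<And>x z. x \<in> hcarrier V \<Longrightarrow> z \<in> hcarrier V \<Longrightarrow> linear_form V (\<lambda>y. \<tau> x y z)) \<Longrightarrow>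
   (\<And>x y. x \<in> hcarrier V \<Longrightarrow> y \<in> hcarrier V \<Longrightarrow> linear_form V (\<lambda>z. \<tau> x y z)) \<Longrightarrow> trilinear_form V \<tau>"
  unfolding trilinear_form_iff by auto

lemma bilinear_comp:
  assumes "bilinear_form V' W' \<beta>" "linear_map V V' f" "linear_map W W' g"
  shows "bilinear_form V W (\<lambda>a b. \<beta> (f a) (g b))"
  using assms unfolding bilinear_form_def linear_map_def by (auto simp: image_subset_iff)

lemma bilinear_prod:
  "linear_form V \<phi> \<Longrightarrow> linear_form W \<psi> \<Longrightarrow> bilinear_form V W (\<lambda>a b. \<phi> a * \<psi> b)"
  unfolding bilinear_form_def linear_form_def by (auto simp: algebra_simps)

lemma bilinear_swap: "bilinear_form V W \<beta> \<Longrightarrow> bilinear_form W V (\<lambda>a b. \<beta> b a)"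
  unfolding bilinear_form_def by auto

lemma bilinear_pair_sum:
  "(\<And>c d. (c,d) \<in> set t \<Longrightarrow> bilinear_form V W (f c d)) \<Longrightarrow> bilinear_form V W (\<lambda>a b. pair_sum (\<lambda>c d. f c d a b) t)"
  unfolding bilinear_form_iff by (auto intro!: linear_form_pair_sum)

lemma bilinear_cong: "vspace V \<Longrightarrow> vspace W \<Longrightarrow> (\<And>a b. a \<in> hcarrier V \<Longrightarrow> b \<in> hcarrier W \<Longrightarrow> \<beta> a b = \<beta>' a b) \<Longrightarrow>
  bilinear_form V W \<beta>' \<Longrightarrow> bilinear_form V W \<beta>"
  unfolding bilinear_form_def by (auto simp: vec_space.add_closed vec_space.scale_closed vec_space.intro)

lemma linear_form_cong: "(\<And>a. a \<in> hcarrier V \<Longrightarrow> \<phi> a = \<phi>' a) \<Longrightarrow> vspace V \<Longrightarrow> linear_form V \<phi>' \<Longrightarrow> linear_form V \<phi>"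
  unfolding linear_form_def by (auto simp: vec_space.add_closed vec_space.scale_closed vec_space.intro)

lemma tensor_eqD:
  assumes "tensor_eq V W xs ys"
  shows "set xs \<subseteq> hcarrier V \<times> hcarrier W" "set ys \<subseteq> hcarrier V \<times> hcarrier W"
    "bilinear_form V W \<beta> \<Longrightarrow> pair_sum \<beta> xs = pair_sum \<beta> ys"
  using assms unfolding tensor_eq_def pair_sum_def by auto

lemma tensor_eqI:
  "set xs \<subseteq> hcarrier V \<times> hcarrier W \<Longrightarrow> set ys \<subseteq> hcarrier V \<times> hcarrier W \<Longrightarrow>
   (\<And>\<beta>. bilinear_form V W \<beta> \<Longrightarrow> pair_sum \<beta> xs = pair_sum \<beta> ys) \<Longrightarrow> tensor_eq V W xs ys"
  unfolding tensor_eq_def pair_sum_def by auto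

lemma tensor_eq_refl: "set xs \<subseteq> hcarrier V \<times> hcarrier W \<Longrightarrow> tensor_eq V W xs xs"
  by (rule tensor_eqI) auto
lemma tensor_eq_sym: "tensor_eq V W xs ys \<Longrightarrow> tensor_eq V W ys xs"
  unfolding tensor_eq_def by auto
lemma tensor_eq_trans: "tensor_eq V W xs ys \<Longrightarrow> tensor_eq V W ys zs \<Longrightarrow> tensor_eq V W xs zs"
  unfolding tensor_eq_def by auto
lemma tensor_eq_append: assumes "tensor_eq V W xs ys" "tensor_eq V W xs' ys'"
  shows "tensor_eq V W (xs @ xs') (ys @ ys')"
proof (rule tensor_eqI)
  show "set (xs @ xs') \<subseteq> hcarrier V \<times> hcarrier W" using tensor_eqD(1)[OF assms(1)] tensor_eqD(1)[OF assms(2)]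
    by auto
  show "set (ys @ ys') \<subseteq> hcarrier V \<times> hcarrier W" using tensor_eqD(2)[OF assms(1)] tensor_eqD(2)[OF assms(2)]
    by auto
  fix \<beta> assume "bilinear_form V W \<beta>"
  then show "pair_sum \<beta> (xs @ xs') = pair_sum \<beta> (ys @ ys')"
    using tensor_eqD(3)[OF assms(1)] tensor_eqD(3)[OF assms(2)] by simp
qed

lemma tensor_eq_map:
  assumes "tensor_eq V W xs ys" "linear_map V V' f" "linear_map W W' g"
  shows "tensor_eq V' W' (map (\<lambda>(a,b). (f a, g b)) xs) (map (\<lambda>(a,b). (f a, g b)) ys)"
proof (rule tensor_eqI)
  show "set (map (\<lambda>(a,b). (f a, g b)) xs) \<subseteq> hcarrier V' \<times> hcarrier W'"
    using tensor_eqD(1)[OF assms(1)] assms(2,3) unfolding linear_map_def by auto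
  show "set (map (\<lambda>(a,b). (f a, g b)) ys) \<subseteq> hcarrier V' \<times> hcarrier W'"
    using tensor_eqD(2)[OF assms(1)] assms(2,3) unfolding linear_map_def by auto
  fix \<beta> assume "bilinear_form V' W' \<beta>"
  then show "pair_sum \<beta> (map (\<lambda>(a,b). (f a, g b)) xs) = pair_sum \<beta> (map (\<lambda>(a,b). (f a, g b)) ys)"
    using tensor_eqD(3)[OF assms(1) bilinear_comp[OF _ assms(2,3)]] by simp
qed

lemma tensor_eq_swap:
  assumes "tensor_eq V W xs ys"
  shows "tensor_eq W V (map (\<lambda>(a,b). (b,a)) xs) (map (\<lambda>(a,b). (b,a)) ys)"
proof (rule tensor_eqI)
  show "set (map (\<lambda>(a,b). (b,a)) xs) \<subseteq> hcarrier W \<times> hcarrier V"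
    using tensor_eqD(1)[OF assms(1)] by auto
  show "set (map (\<lambda>(a,b). (b,a)) ys) \<subseteq> hcarrier W \<times> hcarrier V"
    using tensor_eqD(2)[OF assms(1)] by auto
  fix \<beta> assume "bilinear_form W V \<beta>"
  then show "pair_sum \<beta> (map (\<lambda>(a,b). (b,a)) xs) = pair_sum \<beta> (map (\<lambda>(a,b). (b,a)) ys)"
    using tensor_eqD(3)[OF assms(1) bilinear_swap] by simp
qed

lemma linear_form_vsum_pair_sum:
  assumes U: "vspace U" "linear_form U \<phi>" "\<And>a b. (a,b) \<in> set xs \<Longrightarrow> F a b \<in> hcarrier U"
  shows "\<phi> (vsum U (map (\<lambda>(a,b). F a b) xs)) = pair_sum (\<lambda>a b. \<phi> (F a b)) xs"
proof -
  interpret U: vec_space U by (rule vec_space.intro[OF U(1)])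
  have sx: "set (map (\<lambda>(a,b). F a b) xs) \<subseteq> hcarrier U" using U(3) by auto
  show ?thesis using U.linear_form_vsum[OF U(2) sx] by (simp add: pair_sum_def comp_def case_prod_beta')
qed

lemma tensor_eq_vsum:
  assumes U: "vspace U" and F: "\<And>a b. a \<in> hcarrier V \<Longrightarrow> b \<in> hcarrier W \<Longrightarrow> F a b \<in> hcarrier U"
    and bl: "\<And>\<phi>. linear_form U \<phi> \<Longrightarrow> bilinear_form V W (\<lambda>a b. \<phi> (F a b))"
    and t: "tensor_eq V W xs ys"
  shows "vsum U (map (\<lambda>(a,b). F a b) xs) = vsum U (map (\<lambda>(a,b). F a b) ys)"
proof (rule vec_space.eq_by_linear_forms[OF vec_space.intro[OF U]])
  have "set (map (\<lambda>(a,b). F a b) xs) \<subseteq> hcarrier U" "set (map (\<lambda>(a,b). F a b) ys) \<subseteq> hcarrier U"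
    using tensor_eqD(1,2)[OF t] F by auto
  then show "vsum U (map (\<lambda>(a,b). F a b) xs) \<in> hcarrier U" "vsum U (map (\<lambda>(a,b). F a b) ys) \<in> hcarrier U"
    using vec_space.vsum_closed[OF vec_space.intro[OF U]] by blast+
  fix \<phi> assume \<phi>: "linear_form U \<phi>"
  have "\<phi> (vsum U (map (\<lambda>(a,b). F a b) xs)) = pair_sum (\<lambda>a b. \<phi> (F a b)) xs"
    by (rule linear_form_vsum_pair_sum[OF U \<phi>]) (use tensor_eqD(1)[OF t] F in auto)
  also have "\<dots> = pair_sum (\<lambda>a b. \<phi> (F a b)) ys" using tensor_eqD(3)[OF t bl[OF \<phi>]] .
  also have "\<dots> = \<phi> (vsum U (map (\<lambda>(a,b). F a b) ys))"
    by (rule linear_form_vsum_pair_sum[OF U \<phi>, symmetric]) (use tensor_eqD(2)[OF t] F in auto)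
  finally show "\<phi> (vsum U (map (\<lambda>(a,b). F a b) xs)) = \<phi> (vsum U (map (\<lambda>(a,b). F a b) ys))" .
qed

definition sub_vspace :: "('k::field,'a) hopf_alg \<Rightarrow> ('k,'a) hopf_alg \<Rightarrow> bool" where
  "sub_vspace V' V \<longleftrightarrow> subspace V (hcarrier V') \<and> hadd V' = hadd V \<and> hscale V' = hscale V \<and> hzero V' = hzero V"

lemma vspace_sub_vspace:
  assumes V: "vspace V" and sub: "sub_vspace V' V"
  shows "vspace V'"
proof -
  interpret vec_space V by (rule vec_space.intro[OF V])
  have S: "subspace V (hcarrier V')" and ops: "hadd V' = hadd V" "hscale V' = hscale V" "hzero V' = hzero V"
    using sub unfolding sub_vspace_def by auto
  note Sc = subspace_carrier[OF S]
  show ?thesis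
    unfolding vspace_def ops
  proof (intro conjI ballI allI)
    fix x assume x: "x \<in> hcarrier V'"
    have "hadd V x (hscale V (-1) x) = hzero V" using Sc[OF x] by simp
    then show "\<exists>y\<in>hcarrier V'. hadd V x y = hzero V" using subspaceD(4)[OF S x] by blast
  qed (use subspaceD[OF S] Sc in \<open>simp_all add: add_ac scale_add_right scale_add_left\<close>)
qed

lemma sub_vspace_retraction:
  assumes V: "vspace V" and sr: "sub_vspace V' V"
  shows "\<exists>\<pi>. linear_map V V' \<pi> \<and> (\<forall>a\<in>hcarrier V'. \<pi> a = a)"
proof -
  interpret V: vec_space V by (rule vec_space.intro[OF V])
  have s: "subspace V (hcarrier V')" and a: "hadd V' = hadd V" and c: "hscale V' = hscale V"
    using sr unfolding sub_vspace_def by auto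
  obtain \<pi> where \<pi>_range: "\<forall>v\<in>hcarrier V. \<pi> v \<in> hcarrier V'" and \<pi>_id: "\<forall>w\<in>hcarrier V'. \<pi> w = w"
    and \<pi>_add: "\<forall>x\<in>hcarrier V. \<forall>y\<in>hcarrier V. \<pi> (hadd V x y) = hadd V (\<pi> x) (\<pi> y)"
    and \<pi>_scale: "\<forall>c. \<forall>x\<in>hcarrier V. \<pi> (hscale V c x) = hscale V c (\<pi> x)"
    using V.subspace_projection[OF s] by blast
  have "linear_map V V' \<pi>" unfolding linear_map_def using \<pi>_range \<pi>_add \<pi>_scale a c by auto
  then show ?thesis using \<pi>_id by blast
qed

lemma tensor_eq_restrict:
  assumes V: "vspace V" and W: "vspace W" and sV: "sub_vspace V' V" and sW: "sub_vspace W' W"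
    and xs: "set xs \<subseteq> hcarrier V' \<times> hcarrier W'" and ys: "set ys \<subseteq> hcarrier V' \<times> hcarrier W'"
    and t: "tensor_eq V W xs ys"
  shows "tensor_eq V' W' xs ys"
proof (rule tensor_eqI[OF xs ys])
  fix \<beta> assume \<beta>: "bilinear_form V' W' \<beta>"
  obtain \<pi>1 where l1: "linear_map V V' \<pi>1" and i1: "\<forall>a\<in>hcarrier V'. \<pi>1 a = a"
    using sub_vspace_retraction[OF V sV] by blast
  obtain \<pi>2 where l2: "linear_map W W' \<pi>2" and i2: "\<forall>a\<in>hcarrier W'. \<pi>2 a = a"
    using sub_vspace_retraction[OF W sW] by blast
  have b: "bilinear_form V W (\<lambda>a b. \<beta> (\<pi>1 a) (\<pi>2 b))" by (rule bilinear_comp[OF \<beta> l1 l2])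
  have "pair_sum \<beta> xs = pair_sum (\<lambda>a b. \<beta> (\<pi>1 a) (\<pi>2 b)) xs" using xs i1 i2 by (intro pair_sum_cong) auto
  also have "\<dots> = pair_sum (\<lambda>a b. \<beta> (\<pi>1 a) (\<pi>2 b)) ys" using tensor_eqD(3)[OF t b] .
  also have "\<dots> = pair_sum \<beta> ys" using ys i1 i2 by (intro pair_sum_cong) auto
  finally show "pair_sum \<beta> xs = pair_sum \<beta> ys" .
qed

definition triple_sum :: "('a \<Rightarrow> 'a \<Rightarrow> 'a \<Rightarrow> 'k::comm_monoid_add) \<Rightarrow> ('a \<times> 'a \<times> 'a) list \<Rightarrow> 'k" where
  "triple_sum \<tau> xs = sum_list (map (\<lambda>(a,b,c). \<tau> a b c) xs)"

lemma tensor3_eqD: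
  assumes "tensor3_eq V xs ys"
  shows "set xs \<subseteq> hcarrier V \<times> hcarrier V \<times> hcarrier V" "set ys \<subseteq> hcarrier V \<times> hcarrier V \<times> hcarrier V"
    "trilinear_form V \<tau> \<Longrightarrow> triple_sum \<tau> xs = triple_sum \<tau> ys"
  using assms unfolding tensor3_eq_def triple_sum_def by auto

lemma tensor3_eqI:
  "set xs \<subseteq> hcarrier V \<times> hcarrier V \<times> hcarrier V \<Longrightarrow> set ys \<subseteq> hcarrier V \<times> hcarrier V \<times> hcarrier V \<Longrightarrow>
   (\<And>\<tau>. trilinear_form V \<tau> \<Longrightarrow> triple_sum \<tau> xs = triple_sum \<tau> ys) \<Longrightarrow> tensor3_eq V xs ys"
  unfolding tensor3_eq_def triple_sum_def by auto

lemma triple_sum_cong: "(\<And>a b c. (a,b,c) \<in> set xs \<Longrightarrow> \<tau> a b c = \<sigma> a b c) \<Longrightarrow> triple_sum \<tau> xs = triple_sum \<sigma> xs"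
  by (induction xs) (auto simp: triple_sum_def)

lemma tensor3_eq_restrict:
  assumes V: "vspace V" and sV: "sub_vspace V' V"
    and xs: "set xs \<subseteq> hcarrier V' \<times> hcarrier V' \<times> hcarrier V'" and ys: "set ys \<subseteq> hcarrier V' \<times> hcarrier V' \<times> hcarrier V'"
    and t: "tensor3_eq V xs ys"
  shows "tensor3_eq V' xs ys"
proof (rule tensor3_eqI[OF xs ys])
  fix \<tau> assume \<tau>: "trilinear_form V' \<tau>"
  obtain \<pi> where l: "linear_map V V' \<pi>" and i: "\<forall>a\<in>hcarrier V'. \<pi> a = a"
    using sub_vspace_retraction[OF V sV] by blast
  have pc: "x \<in> hcarrier V \<Longrightarrow> \<pi> x \<in> hcarrier V'" for x using linear_mapD(1)[OF l] .
  have b: "trilinear_form V (\<lambda>a b c. \<tau> (\<pi> a) (\<pi> b) (\<pi> c))"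
  proof (rule trilinear_formI)
    fix y z assume "y \<in> hcarrier V" "z \<in> hcarrier V"
    then have "linear_form V' (\<lambda>x. \<tau> x (\<pi> y) (\<pi> z))" using \<tau> pc unfolding trilinear_form_iff by blast
    then show "linear_form V (\<lambda>x. \<tau> (\<pi> x) (\<pi> y) (\<pi> z))" by (rule linear_form_comp[OF _ l])
  next
    fix x z assume "x \<in> hcarrier V" "z \<in> hcarrier V"
    then have "linear_form V' (\<lambda>y. \<tau> (\<pi> x) y (\<pi> z))" using \<tau> pc unfolding trilinear_form_iff by blast
    then show "linear_form V (\<lambda>y. \<tau> (\<pi> x) (\<pi> y) (\<pi> z))" by (rule linear_form_comp[OF _ l])
  next
    fix x y assume "x \<in> hcarrier V" "y \<in> hcarrier V"
    then have "linear_form V' (\<lambda>z. \<tau> (\<pi> x) (\<pi> y) z)" using \<tau> pc unfolding trilinear_form_iff by blast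
    then show "linear_form V (\<lambda>z. \<tau> (\<pi> x) (\<pi> y) (\<pi> z))" by (rule linear_form_comp[OF _ l])
  qed
  have "triple_sum \<tau> xs = triple_sum (\<lambda>a b c. \<tau> (\<pi> a) (\<pi> b) (\<pi> c)) xs" using xs i
    by (intro triple_sum_cong) auto
  also have "\<dots> = triple_sum (\<lambda>a b c. \<tau> (\<pi> a) (\<pi> b) (\<pi> c)) ys" using tensor3_eqD(3)[OF t b] .
  also have "\<dots> = triple_sum \<tau> ys" using ys i by (intro triple_sum_cong) auto
  finally show "triple_sum \<tau> xs = triple_sum \<tau> ys" .
qed

lemma triple_sum_append[simp]: "triple_sum \<tau> (xs @ ys) = triple_sum \<tau> xs + triple_sum \<tau> ys"
  by (simp add: triple_sum_def)

lemma triple_sum_concat_left: "triple_sum \<tau> (concat (map (\<lambda>(u,v). map (\<lambda>(a,b). (a,b,v)) (F u)) xs)) =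
   pair_sum (\<lambda>u v. pair_sum (\<lambda>a b. \<tau> a b v) (F u)) xs"
proof (induction xs)
  case (Cons x xs)
  have "triple_sum \<tau> (map (\<lambda>(a,b). (a,b,v)) t) = pair_sum (\<lambda>a b. \<tau> a b v) t" for t v
    by (induction t) (auto simp: triple_sum_def)
  then show ?case using Cons by (cases x) simp
qed (simp add: triple_sum_def)

lemma triple_sum_concat_right: "triple_sum \<tau> (concat (map (\<lambda>(u,v). map (\<lambda>(a,b). (u,a,b)) (F v)) xs)) =
   pair_sum (\<lambda>u v. pair_sum (\<lambda>a b. \<tau> u a b) (F v)) xs"
proof (induction xs)
  case (Cons x xs)
  have "triple_sum \<tau> (map (\<lambda>(a,b). (u,a,b)) t) = pair_sum (\<lambda>a b. \<tau> u a b) t" for t u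
    by (induction t) (auto simp: triple_sum_def)
  then show ?case using Cons by (cases x) simp
qed (simp add: triple_sum_def)

lemma set_concat_assoc_left:
  "set xs \<subseteq> S \<times> S \<Longrightarrow> (\<And>u. u \<in> S \<Longrightarrow> set (F u) \<subseteq> S \<times> S) \<Longrightarrow>
   set (concat (map (\<lambda>(u,v). map (\<lambda>(a,b). (a,b,v)) (F u)) xs)) \<subseteq> S \<times> S \<times> S"
  by (induction xs) (auto, blast+)

lemma set_concat_assoc_right:
  "set xs \<subseteq> S \<times> S \<Longrightarrow> (\<And>v. v \<in> S \<Longrightarrow> set (F v) \<subseteq> S \<times> S) \<Longrightarrow>
   set (concat (map (\<lambda>(u,v). map (\<lambda>(a,b). (u,a,b)) (F v)) xs)) \<subseteq> S \<times> S \<times> S"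
  by (induction xs) (auto, blast+)

section \<open>Hopf algebras\<close>

definition tensor_mult :: "('k,'a) hopf_alg \<Rightarrow> ('a \<times> 'a) list \<Rightarrow> ('a \<times> 'a) list \<Rightarrow> ('a \<times> 'a) list" where
  "tensor_mult H t t' = concat (map (\<lambda>(u,v). map (\<lambda>(u',v'). (hmult H u u', hmult H v v')) t') t)"

lemma pair_sum_tensor_mult: "pair_sum \<gamma> (tensor_mult H t t') =
    pair_sum (\<lambda>a b. pair_sum (\<lambda>a' b'. \<gamma> (hmult H a a') (hmult H b b')) t') t"
  unfolding tensor_mult_def by (simp add: pair_sum_concat_map)

locale hopf_algebra =
  fixes H :: "('k::field,'a) hopf_alg"
  assumes hopf: "hopf H"
begin

lemma algebra: "k_algebra H" and coalgebra: "k_coalgebra H" using hopf unfolding hopf_def by auto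

sublocale vec_space H using algebra unfolding k_algebra_def by (simp add: vec_space.intro)

lemma one_closed[simp]: "hone H \<in> hcarrier H" using algebra unfolding k_algebra_def by auto
lemma mult_closed[simp]: "x \<in> hcarrier H \<Longrightarrow> y \<in> hcarrier H \<Longrightarrow> hmult H x y \<in> hcarrier H"
  using algebra unfolding k_algebra_def by auto
lemma mult_assoc: "x \<in> hcarrier H \<Longrightarrow> y \<in> hcarrier H \<Longrightarrow> z \<in> hcarrier H \<Longrightarrow>
  hmult H (hmult H x y) z = hmult H x (hmult H y z)"
  using algebra unfolding k_algebra_def by auto
lemma one_mult[simp]: "x \<in> hcarrier H \<Longrightarrow> hmult H (hone H) x = x"
  using algebra unfolding k_algebra_def by auto
lemma mult_one[simp]: "x \<in> hcarrier H \<Longrightarrow> hmult H x (hone H) = x"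
  using algebra unfolding k_algebra_def by auto
lemma add_mult_distrib: "x \<in> hcarrier H \<Longrightarrow> y \<in> hcarrier H \<Longrightarrow> z \<in> hcarrier H \<Longrightarrow>
  hmult H (hadd H x y) z = hadd H (hmult H x z) (hmult H y z)"
  using algebra unfolding k_algebra_def by auto
lemma mult_add_distrib: "x \<in> hcarrier H \<Longrightarrow> y \<in> hcarrier H \<Longrightarrow> z \<in> hcarrier H \<Longrightarrow>
  hmult H z (hadd H x y) = hadd H (hmult H z x) (hmult H z y)"
  using algebra unfolding k_algebra_def by auto
lemma mult_scale_left: "x \<in> hcarrier H \<Longrightarrow> y \<in> hcarrier H \<Longrightarrow>
  hmult H (hscale H c x) y = hscale H c (hmult H x y)"
  using algebra unfolding k_algebra_def by auto
lemma mult_scale_right: "x \<in> hcarrier H \<Longrightarrow> y \<in> hcarrier H \<Longrightarrow>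
  hmult H x (hscale H c y) = hscale H c (hmult H x y)"
  using algebra unfolding k_algebra_def by auto

lemma comult_set: "x \<in> hcarrier H \<Longrightarrow> set (hcomult H x) \<subseteq> hcarrier H \<times> hcarrier H"
  using coalgebra unfolding k_coalgebra_def by auto
lemma comult_mem: "x \<in> hcarrier H \<Longrightarrow> (u,v) \<in> set (hcomult H x) \<Longrightarrow> u \<in> hcarrier H \<and> v \<in> hcarrier H"
  using comult_set by blast
lemma comult_add: "x \<in> hcarrier H \<Longrightarrow> y \<in> hcarrier H \<Longrightarrow>
  tensor_eq H H (hcomult H (hadd H x y)) (hcomult H x @ hcomult H y)"
  using coalgebra unfolding k_coalgebra_def by auto
lemma comult_scale: "x \<in> hcarrier H \<Longrightarrow>
  tensor_eq H H (hcomult H (hscale H c x)) (map (\<lambda>(u,v). (hscale H c u, v)) (hcomult H x))"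
  using coalgebra unfolding k_coalgebra_def by auto
lemma counit_add: "x \<in> hcarrier H \<Longrightarrow> y \<in> hcarrier H \<Longrightarrow> hcounit H (hadd H x y) = hcounit H x + hcounit H y"
  using coalgebra unfolding k_coalgebra_def by auto
lemma counit_scale: "x \<in> hcarrier H \<Longrightarrow> hcounit H (hscale H c x) = c * hcounit H x"
  using coalgebra unfolding k_coalgebra_def by auto
lemma coassoc: "x \<in> hcarrier H \<Longrightarrow> tensor3_eq H
        (concat (map (\<lambda>(u,v). map (\<lambda>(u1,u2). (u1,u2,v)) (hcomult H u)) (hcomult H x)))
        (concat (map (\<lambda>(u,v). map (\<lambda>(v1,v2). (u,v1,v2)) (hcomult H v)) (hcomult H x)))"
  using coalgebra unfolding k_coalgebra_def by auto
lemma counit_left: "x \<in> hcarrier H \<Longrightarrow> vsum H (map (\<lambda>(u,v). hscale H (hcounit H u) v) (hcomult H x)) = x"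
  using coalgebra unfolding k_coalgebra_def by auto
lemma counit_right: "x \<in> hcarrier H \<Longrightarrow> vsum H (map (\<lambda>(u,v). hscale H (hcounit H v) u) (hcomult H x)) = x"
  using coalgebra unfolding k_coalgebra_def by auto
lemma comult_mult: "x \<in> hcarrier H \<Longrightarrow> y \<in> hcarrier H \<Longrightarrow>
  tensor_eq H H (hcomult H (hmult H x y)) (tensor_mult H (hcomult H x) (hcomult H y))"
  using hopf unfolding hopf_def tensor_mult_def by auto
lemma comult_one: "tensor_eq H H (hcomult H (hone H)) [(hone H, hone H)]"
  using hopf unfolding hopf_def by auto
lemma counit_mult: "x \<in> hcarrier H \<Longrightarrow> y \<in> hcarrier H \<Longrightarrow> hcounit H (hmult H x y) = hcounit H x * hcounit H y"
  using hopf unfolding hopf_def by auto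
lemma counit_one[simp]: "hcounit H (hone H) = 1"
  using hopf unfolding hopf_def by auto
lemma antipode_linear: "linear_map H H (hantipode H)"
  using hopf unfolding hopf_def by auto
lemma antipode_left: "x \<in> hcarrier H \<Longrightarrow>
  vsum H (map (\<lambda>(u,v). hmult H (hantipode H u) v) (hcomult H x)) = hscale H (hcounit H x) (hone H)"
  using hopf unfolding hopf_def by auto
lemma antipode_right: "x \<in> hcarrier H \<Longrightarrow>
  vsum H (map (\<lambda>(u,v). hmult H u (hantipode H v)) (hcomult H x)) = hscale H (hcounit H x) (hone H)"
  using hopf unfolding hopf_def by auto

lemma antipode_closed[simp]: "x \<in> hcarrier H \<Longrightarrow> hantipode H x \<in> hcarrier H"
  using linear_mapD(1)[OF antipode_linear] .
lemma antipode_add: "x \<in> hcarrier H \<Longrightarrow> y \<in> hcarrier H \<Longrightarrow>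
  hantipode H (hadd H x y) = hadd H (hantipode H x) (hantipode H y)"
  using linear_mapD(2)[OF antipode_linear] .
lemma antipode_scale: "x \<in> hcarrier H \<Longrightarrow> hantipode H (hscale H c x) = hscale H c (hantipode H x)"
  using linear_mapD(3)[OF antipode_linear] .

lemma linear_form_counit: "linear_form H (hcounit H)"
  unfolding linear_form_def using counit_add counit_scale by auto

lemma linear_map_mult_left: "c \<in> hcarrier H \<Longrightarrow> linear_map H H (\<lambda>x. hmult H c x)"
  unfolding linear_map_def using mult_add_distrib mult_scale_right by auto
lemma linear_map_mult_right: "c \<in> hcarrier H \<Longrightarrow> linear_map H H (\<lambda>x. hmult H x c)"
  unfolding linear_map_def using add_mult_distrib mult_scale_left by auto
lemma linear_map_id: "linear_map H H (\<lambda>x. x)"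
  unfolding linear_map_def by auto

lemma linear_form_mult_left: "linear_form H \<phi> \<Longrightarrow> c \<in> hcarrier H \<Longrightarrow> linear_form H (\<lambda>x. \<phi> (hmult H c x))"
  by (rule linear_form_comp[OF _ linear_map_mult_left])
lemma linear_form_mult_right: "linear_form H \<phi> \<Longrightarrow> c \<in> hcarrier H \<Longrightarrow> linear_form H (\<lambda>x. \<phi> (hmult H x c))"
  by (rule linear_form_comp[OF _ linear_map_mult_right])
lemma linear_form_antipode: "linear_form H \<phi> \<Longrightarrow> linear_form H (\<lambda>x. \<phi> (hantipode H x))"
  by (rule linear_form_comp[OF _ antipode_linear])

lemma linear_form_pair_sum_comult: "bilinear_form H H \<gamma> \<Longrightarrow> linear_form H (\<lambda>x. pair_sum \<gamma> (hcomult H x))"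
  unfolding linear_form_def
proof (intro conjI ballI allI)
  assume g: "bilinear_form H H \<gamma>"
  fix x y assume x: "x \<in> hcarrier H" and y: "y \<in> hcarrier H"
  show "pair_sum \<gamma> (hcomult H (hadd H x y)) = pair_sum \<gamma> (hcomult H x) + pair_sum \<gamma> (hcomult H y)"
    using tensor_eqD(3)[OF comult_add[OF x y] g] by simp
next
  assume g: "bilinear_form H H \<gamma>"
  fix c x assume x: "x \<in> hcarrier H"
  have "pair_sum \<gamma> (hcomult H (hscale H c x)) = pair_sum (\<lambda>u v. \<gamma> (hscale H c u) v) (hcomult H x)"
    using tensor_eqD(3)[OF comult_scale[OF x] g] by simp
  also have "\<dots> = pair_sum (\<lambda>u v. c * \<gamma> u v) (hcomult H x)"
    using comult_set[OF x] g unfolding bilinear_form_def by (intro pair_sum_cong) auto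
  finally show "pair_sum \<gamma> (hcomult H (hscale H c x)) = c * pair_sum \<gamma> (hcomult H x)"
    by (simp add: pair_sum_cmult)
qed

lemma pair_sum_counit_left: "linear_form H \<phi> \<Longrightarrow> x \<in> hcarrier H \<Longrightarrow>
  pair_sum (\<lambda>u v. hcounit H u * \<phi> v) (hcomult H x) = \<phi> x"
proof -
  assume \<phi>: "linear_form H \<phi>" and x: "x \<in> hcarrier H"
  have "\<phi> x = \<phi> (vsum H (map (\<lambda>(u,v). hscale H (hcounit H u) v) (hcomult H x)))" using counit_left[OF x] by simp
  also have "\<dots> = pair_sum (\<lambda>u v. \<phi> (hscale H (hcounit H u) v)) (hcomult H x)"
    by (rule linear_form_vsum_pair_sum[OF vspace \<phi>]) (use comult_set[OF x] in auto)
  also have "\<dots> = pair_sum (\<lambda>u v. hcounit H u * \<phi> v) (hcomult H x)"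
    using comult_set[OF x] linear_formD(2)[OF \<phi>] by (intro pair_sum_cong) auto
  finally show ?thesis by simp
qed

lemma pair_sum_counit_right: "linear_form H \<phi> \<Longrightarrow> x \<in> hcarrier H \<Longrightarrow>
  pair_sum (\<lambda>u v. \<phi> u * hcounit H v) (hcomult H x) = \<phi> x"
proof -
  assume \<phi>: "linear_form H \<phi>" and x: "x \<in> hcarrier H"
  have "\<phi> x = \<phi> (vsum H (map (\<lambda>(u,v). hscale H (hcounit H v) u) (hcomult H x)))" using counit_right[OF x]
    by simp
  also have "\<dots> = pair_sum (\<lambda>u v. \<phi> (hscale H (hcounit H v) u)) (hcomult H x)"
    by (rule linear_form_vsum_pair_sum[OF vspace \<phi>]) (use comult_set[OF x] in auto)
  also have "\<dots> = pair_sum (\<lambda>u v. \<phi> u * hcounit H v) (hcomult H x)"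
    using comult_set[OF x] linear_formD(2)[OF \<phi>] by (intro pair_sum_cong) (auto simp: mult.commute)
  finally show ?thesis by simp
qed

lemma pair_sum_antipode_left: "linear_form H \<phi> \<Longrightarrow> x \<in> hcarrier H \<Longrightarrow>
  pair_sum (\<lambda>u v. \<phi> (hmult H (hantipode H u) v)) (hcomult H x) = hcounit H x * \<phi> (hone H)"
proof -
  assume \<phi>: "linear_form H \<phi>" and x: "x \<in> hcarrier H"
  have "pair_sum (\<lambda>u v. \<phi> (hmult H (hantipode H u) v)) (hcomult H x) =
      \<phi> (vsum H (map (\<lambda>(u,v). hmult H (hantipode H u) v) (hcomult H x)))"
    by (rule linear_form_vsum_pair_sum[OF vspace \<phi>, symmetric]) (use comult_set[OF x] in auto)
  also have "\<dots> = hcounit H x * \<phi> (hone H)" using antipode_left[OF x] linear_formD(2)[OF \<phi>] by simp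
  finally show ?thesis .
qed

lemma pair_sum_antipode_right: "linear_form H \<phi> \<Longrightarrow> x \<in> hcarrier H \<Longrightarrow>
  pair_sum (\<lambda>u v. \<phi> (hmult H u (hantipode H v))) (hcomult H x) = hcounit H x * \<phi> (hone H)"
proof -
  assume \<phi>: "linear_form H \<phi>" and x: "x \<in> hcarrier H"
  have "pair_sum (\<lambda>u v. \<phi> (hmult H u (hantipode H v))) (hcomult H x) =
      \<phi> (vsum H (map (\<lambda>(u,v). hmult H u (hantipode H v)) (hcomult H x)))"
    by (rule linear_form_vsum_pair_sum[OF vspace \<phi>, symmetric]) (use comult_set[OF x] in auto)
  also have "\<dots> = hcounit H x * \<phi> (hone H)" using antipode_right[OF x] linear_formD(2)[OF \<phi>] by simp
  finally show ?thesis .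
qed

lemma pair_sum_coassoc: "trilinear_form H \<tau> \<Longrightarrow> x \<in> hcarrier H \<Longrightarrow>
  pair_sum (\<lambda>u v. pair_sum (\<lambda>a b. \<tau> a b v) (hcomult H u)) (hcomult H x) =
  pair_sum (\<lambda>u v. pair_sum (\<lambda>a b. \<tau> u a b) (hcomult H v)) (hcomult H x)"
  using tensor3_eqD(3)[OF coassoc] triple_sum_concat_left triple_sum_concat_right by metis

lemma pair_sum_comult_mult: "bilinear_form H H \<gamma> \<Longrightarrow> x \<in> hcarrier H \<Longrightarrow> y \<in> hcarrier H \<Longrightarrow>
  pair_sum \<gamma> (hcomult H (hmult H x y)) =
      pair_sum (\<lambda>a b. pair_sum (\<lambda>a' b'. \<gamma> (hmult H a a') (hmult H b b')) (hcomult H y)) (hcomult H x)"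
  using tensor_eqD(3)[OF comult_mult] pair_sum_tensor_mult by metis

lemma pair_sum_comult_one: "bilinear_form H H \<gamma> \<Longrightarrow> pair_sum \<gamma> (hcomult H (hone H)) = \<gamma> (hone H) (hone H)"
  using tensor_eqD(3)[OF comult_one] by simp

lemma linear_map_scale: "linear_map H H (\<lambda>x. hscale H c x)"
  unfolding linear_map_def by (auto simp: scale_add_right mult.commute)

lemma tensor_mult_set: "set t \<subseteq> hcarrier H \<times> hcarrier H \<Longrightarrow> set t' \<subseteq> hcarrier H \<times> hcarrier H \<Longrightarrow>
  set (tensor_mult H t t') \<subseteq> hcarrier H \<times> hcarrier H"
  unfolding tensor_mult_def by fastforce

lemma bilinear_mult_right_both: "bilinear_form H H \<gamma> \<Longrightarrow> a' \<in> hcarrier H \<Longrightarrow> b' \<in> hcarrier H \<Longrightarrow>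
  bilinear_form H H (\<lambda>a b. \<gamma> (hmult H a a') (hmult H b b'))"
  by (rule bilinear_comp[OF _ linear_map_mult_right linear_map_mult_right])
lemma bilinear_mult_left_both: "bilinear_form H H \<gamma> \<Longrightarrow> a \<in> hcarrier H \<Longrightarrow> b \<in> hcarrier H \<Longrightarrow>
  bilinear_form H H (\<lambda>a' b'. \<gamma> (hmult H a a') (hmult H b b'))"
  by (rule bilinear_comp[OF _ linear_map_mult_left linear_map_mult_left])

lemma tensor_eq_tensor_mult:
  assumes t1: "tensor_eq H H t1 t1'" and t2: "tensor_eq H H t2 t2'"
  shows "tensor_eq H H (tensor_mult H t1 t2) (tensor_mult H t1' t2')"
proof (rule tensor_eqI)
  show "set (tensor_mult H t1 t2) \<subseteq> hcarrier H \<times> hcarrier H"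
    using tensor_eqD(1)[OF t1] tensor_eqD(1)[OF t2] tensor_mult_set by blast
  show "set (tensor_mult H t1' t2') \<subseteq> hcarrier H \<times> hcarrier H"
    using tensor_eqD(2)[OF t1] tensor_eqD(2)[OF t2] tensor_mult_set by blast
  fix \<gamma> assume g: "bilinear_form H H \<gamma>"
  have "pair_sum \<gamma> (tensor_mult H t1 t2) =
      pair_sum (\<lambda>a b. pair_sum (\<lambda>a' b'. \<gamma> (hmult H a a') (hmult H b b')) t2) t1"
    by (rule pair_sum_tensor_mult)
  also have "\<dots> = pair_sum (\<lambda>a b. pair_sum (\<lambda>a' b'. \<gamma> (hmult H a a') (hmult H b b')) t2) t1'"
   
      by (rule tensor_eqD(3)[OF t1], rule bilinear_pair_sum, use bilinear_mult_right_both[OF g] tensor_eqD(1)[OF t2] in auto)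
  also have "\<dots> = pair_sum (\<lambda>a' b'. pair_sum (\<lambda>a b. \<gamma> (hmult H a a') (hmult H b b')) t1') t2"
    by (rule pair_sum_commute)
  also have "\<dots> = pair_sum (\<lambda>a' b'. pair_sum (\<lambda>a b. \<gamma> (hmult H a a') (hmult H b b')) t1') t2'"
   
      by (rule tensor_eqD(3)[OF t2], rule bilinear_pair_sum, use bilinear_mult_left_both[OF g] tensor_eqD(2)[OF t1] in auto)
  also have "\<dots> = pair_sum (\<lambda>a b. pair_sum (\<lambda>a' b'. \<gamma> (hmult H a a') (hmult H b b')) t2') t1'"
    by (rule pair_sum_commute[symmetric])
  also have "\<dots> = pair_sum \<gamma> (tensor_mult H t1' t2')" by (rule pair_sum_tensor_mult[symmetric])
  finally show "pair_sum \<gamma> (tensor_mult H t1 t2) = pair_sum \<gamma> (tensor_mult H t1' t2')" .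
qed

lemma bilinear_counit_scale: "bilinear_form H H (\<lambda>a b. \<phi> (hscale H (hcounit H a) b))" if "linear_form H \<phi>"
  by (rule bilinear_cong[OF vspace vspace, of _ "\<lambda>a b. hcounit H a * \<phi> b"])
     (use that linear_form_counit in \<open>auto simp: linear_formD intro: bilinear_prod\<close>)

lemma bilinear_scale_right:
  "linear_form H \<psi> \<Longrightarrow> linear_form H \<phi> \<Longrightarrow> bilinear_form H H (\<lambda>a b. \<phi> (hscale H (\<psi> b) a))"
 
    by (rule bilinear_cong[OF vspace vspace _ bilinear_prod[of H \<phi> H \<psi>]]) (simp_all add: linear_formD mult.commute)

lemma trilinear_bilinear_12: "trilinear_form H \<tau> \<Longrightarrow> v \<in> hcarrier H \<Longrightarrow> bilinear_form H H (\<lambda>a b. \<tau> a b v)"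
  unfolding trilinear_form_def by blast
lemma trilinear_bilinear_23: "trilinear_form H \<tau> \<Longrightarrow> u \<in> hcarrier H \<Longrightarrow> bilinear_form H H (\<lambda>a b. \<tau> u a b)"
  unfolding trilinear_form_def by blast
lemma bilinear_pair_sum_comult_left: "trilinear_form H \<tau> \<Longrightarrow>
  bilinear_form H H (\<lambda>u v. pair_sum (\<lambda>a b. \<tau> a b v) (hcomult H u))"
proof (rule bilinear_formI)
  assume t: "trilinear_form H \<tau>"
  fix y assume "y \<in> hcarrier H" then show "linear_form H (\<lambda>x. pair_sum (\<lambda>a b. \<tau> a b y) (hcomult H x))"
    using linear_form_pair_sum_comult[OF trilinear_bilinear_12[OF t]] by blast
next
  assume t: "trilinear_form H \<tau>"
  fix x assume x: "x \<in> hcarrier H" then show "linear_form H (\<lambda>y. pair_sum (\<lambda>a b. \<tau> a b y) (hcomult H x))"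
    using comult_set[OF x] t unfolding trilinear_form_iff by (intro linear_form_pair_sum) auto
qed
lemma bilinear_pair_sum_comult_right: "trilinear_form H \<tau> \<Longrightarrow>
  bilinear_form H H (\<lambda>u v. pair_sum (\<lambda>a b. \<tau> u a b) (hcomult H v))"
proof (rule bilinear_formI)
  assume t: "trilinear_form H \<tau>"
  fix y assume y: "y \<in> hcarrier H" then show "linear_form H (\<lambda>x. pair_sum (\<lambda>a b. \<tau> x a b) (hcomult H y))"
    using comult_set[OF y] t unfolding trilinear_form_iff by (intro linear_form_pair_sum) auto
next
  assume t: "trilinear_form H \<tau>"
  fix x assume "x \<in> hcarrier H" then show "linear_form H (\<lambda>y. pair_sum (\<lambda>a b. \<tau> x a b) (hcomult H y))"
    using linear_form_pair_sum_comult[OF trilinear_bilinear_23[OF t]] by blast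
qed

lemma bilinear_antipode_mult: "bilinear_form H H (\<lambda>a b. \<phi> (hmult H (hantipode H a) b))" if "linear_form H \<phi>"
proof (rule bilinear_formI)
  fix y assume "y \<in> hcarrier H"
  then show "linear_form H (\<lambda>x. \<phi> (hmult H (hantipode H x) y))"
    using linear_form_antipode[OF linear_form_mult_right[OF that]] by blast
next
  fix x assume "x \<in> hcarrier H"
  then show "linear_form H (\<lambda>y. \<phi> (hmult H (hantipode H x) y))" using linear_form_mult_left[OF that] by simp
qed

lemma bilinear_mult_antipode: "bilinear_form H H (\<lambda>a b. \<phi> (hmult H a (hantipode H b)))" if "linear_form H \<phi>"
proof (rule bilinear_formI)
  fix y assume "y \<in> hcarrier H"
  then show "linear_form H (\<lambda>x. \<phi> (hmult H x (hantipode H y)))" using linear_form_mult_right[OF that] by simp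
next
  fix x assume "x \<in> hcarrier H"
  then show "linear_form H (\<lambda>y. \<phi> (hmult H x (hantipode H y)))"
    using linear_form_antipode[OF linear_form_mult_left[OF that]] by blast
qed

end

locale cocomm_hopf_algebra = hopf_algebra +
  assumes cocomm: "\<forall>x\<in>hcarrier H. tensor_eq H H (hcomult H x) (map (\<lambda>(u,v). (v,u)) (hcomult H x))"
begin
lemma pair_sum_cocomm: "bilinear_form H H \<gamma> \<Longrightarrow> x \<in> hcarrier H \<Longrightarrow>
  pair_sum \<gamma> (hcomult H x) = pair_sum (\<lambda>a b. \<gamma> b a) (hcomult H x)"
  using tensor_eqD(3)[OF cocomm[rule_format]] by simp
end

lemma sub_hopf_simps[simp]:
  "hcarrier (sub_hopf H S) = S" "hadd (sub_hopf H S) = hadd H" "hzero (sub_hopf H S) = hzero H"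
  "hscale (sub_hopf H S) = hscale H" "hmult (sub_hopf H S) = hmult H" "hone (sub_hopf H S) = hone H"
  "hcounit (sub_hopf H S) = hcounit H" "hantipode (sub_hopf H S) = hantipode H"
  unfolding sub_hopf_def by simp_all

lemma vsum_sub_hopf[simp]: "vsum (sub_hopf H S) = vsum H"
  unfolding vsum_def by (simp add: fun_eq_iff)

lemma hopf_subalgD:
  assumes "hopf_subalg H S"
  shows "S \<subseteq> hcarrier H" "hzero H \<in> S" "x \<in> S \<Longrightarrow> y \<in> S \<Longrightarrow> hadd H x y \<in> S"
    "x \<in> S \<Longrightarrow> hscale H c x \<in> S" "hone H \<in> S" "x \<in> S \<Longrightarrow> y \<in> S \<Longrightarrow> hmult H x y \<in> S"
    "x \<in> S \<Longrightarrow> hantipode H x \<in> S"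
  using assms unfolding hopf_subalg_def by auto

lemma subspace_hopf_subalg: "hopf_subalg H S \<Longrightarrow> subspace H S"
  unfolding hopf_subalg_def subspace_def by blast

lemma sub_hopf_comult:
  assumes "hopf_subalg H S" "x \<in> S"
  shows "set (hcomult (sub_hopf H S) x) \<subseteq> S \<times> S"
    and "tensor_eq H H (hcomult H x) (hcomult (sub_hopf H S) x)"
proof -
  have "set (hcomult (sub_hopf H S) x) \<subseteq> S \<times> S \<and> tensor_eq H H (hcomult H x) (hcomult (sub_hopf H S) x)"
    unfolding sub_hopf_def by simp (rule someI_ex, use assms in \<open>auto simp: hopf_subalg_def\<close>)
  then show "set (hcomult (sub_hopf H S) x) \<subseteq> S \<times> S"
    and "tensor_eq H H (hcomult H x) (hcomult (sub_hopf H S) x)" by auto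
qed

lemma sub_vspace_sub_hopf: "hopf_subalg H S \<Longrightarrow> sub_vspace (sub_hopf H S) H"
  unfolding sub_vspace_def using subspace_hopf_subalg by simp

locale hopf_subalgebra = hopf_algebra +
  fixes S
  assumes subalg: "hopf_subalg H S"
begin

abbreviation "SH \<equiv> sub_hopf H S"

lemma sub_carrier: "x \<in> S \<Longrightarrow> x \<in> hcarrier H"
  using hopf_subalgD(1)[OF subalg] by blast

lemma sub_comult_set: "x \<in> S \<Longrightarrow> set (hcomult SH x) \<subseteq> S \<times> S"
  and tensor_eq_sub_comult: "x \<in> S \<Longrightarrow> tensor_eq H H (hcomult H x) (hcomult SH x)"
  using sub_hopf_comult[OF subalg] by blast+

lemma tensor_eq_sub_hopf:
  "set xs \<subseteq> S \<times> S \<Longrightarrow> set ys \<subseteq> S \<times> S \<Longrightarrow> tensor_eq H H xs ys \<Longrightarrow> tensor_eq SH SH xs ys"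
  using tensor_eq_restrict[OF vspace vspace sub_vspace_sub_hopf[OF subalg] sub_vspace_sub_hopf[OF subalg]]
  by simp

lemma sub_comult_tensor_eq:
  assumes x: "x \<in> S" and t: "tensor_eq H H (hcomult H x) t" and tS: "set t \<subseteq> S \<times> S"
  shows "tensor_eq SH SH (hcomult SH x) t"
  using tensor_eq_sub_hopf[OF sub_comult_set[OF x] tS] tensor_eq_trans[OF tensor_eq_sym[OF tensor_eq_sub_comult[OF x]] t]
  by blast

lemma vspace_sub_hopf: "vspace SH"
  by (rule vspace_sub_vspace[OF vspace sub_vspace_sub_hopf[OF subalg]])

lemma k_algebra_sub_hopf: "k_algebra SH"
  unfolding k_algebra_def
  using vspace_sub_hopf hopf_subalgD(5,6)[OF subalg] sub_carrier
    mult_assoc add_mult_distrib mult_add_distrib mult_scale_left mult_scale_right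
  by simp

lemma sub_hopf_coassoc:
  assumes x: "x \<in> S"
  shows "tensor3_eq SH
    (concat (map (\<lambda>(u,v). map (\<lambda>(u1,u2). (u1,u2,v)) (hcomult SH u)) (hcomult SH x)))
    (concat (map (\<lambda>(u,v). map (\<lambda>(v1,v2). (u,v1,v2)) (hcomult SH v)) (hcomult SH x)))"
    (is "tensor3_eq SH ?l ?r")
proof -
  have mem: "u \<in> S" "v \<in> S" if "(u,v) \<in> set (hcomult SH x)" for u v
    using that sub_comult_set[OF x] by auto
  have sets: "set ?l \<subseteq> S \<times> S \<times> S" "set ?r \<subseteq> S \<times> S \<times> S"
    using set_concat_assoc_left[OF sub_comult_set[OF x] sub_comult_set]
      set_concat_assoc_right[OF sub_comult_set[OF x] sub_comult_set] by simp_all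
  have SSS: "S \<times> S \<times> S \<subseteq> hcarrier H \<times> hcarrier H \<times> hcarrier H"
    using hopf_subalgD(1)[OF subalg] by auto
  have eqH: "tensor3_eq H ?l ?r"
  proof (rule tensor3_eqI)
    show "set ?l \<subseteq> hcarrier H \<times> hcarrier H \<times> hcarrier H" "set ?r \<subseteq> hcarrier H \<times> hcarrier H \<times> hcarrier H"
      using order_trans[OF sets(1) SSS] order_trans[OF sets(2) SSS] .
    fix \<tau> assume t: "trilinear_form H \<tau>"
    have "triple_sum \<tau> ?l = pair_sum (\<lambda>u v. pair_sum (\<lambda>a b. \<tau> a b v) (hcomult SH u)) (hcomult SH x)"
      by (rule triple_sum_concat_left)
    also have "\<dots> = pair_sum (\<lambda>u v. pair_sum (\<lambda>a b. \<tau> a b v) (hcomult H u)) (hcomult SH x)"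
    proof (rule pair_sum_cong)
      fix u v assume "(u,v) \<in> set (hcomult SH x)"
      then show "pair_sum (\<lambda>a b. \<tau> a b v) (hcomult SH u) = pair_sum (\<lambda>a b. \<tau> a b v) (hcomult H u)"
        using tensor_eqD(3)[OF tensor_eq_sub_comult trilinear_bilinear_12[OF t sub_carrier]] mem by simp
    qed
    also have "\<dots> = pair_sum (\<lambda>u v. pair_sum (\<lambda>a b. \<tau> a b v) (hcomult H u)) (hcomult H x)"
      using tensor_eqD(3)[OF tensor_eq_sub_comult[OF x] bilinear_pair_sum_comult_left[OF t]] by simp
    also have "\<dots> = pair_sum (\<lambda>u v. pair_sum (\<lambda>a b. \<tau> u a b) (hcomult H v)) (hcomult H x)"
      by (rule pair_sum_coassoc[OF t sub_carrier[OF x]])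
    also have "\<dots> = pair_sum (\<lambda>u v. pair_sum (\<lambda>a b. \<tau> u a b) (hcomult H v)) (hcomult SH x)"
      using tensor_eqD(3)[OF tensor_eq_sub_comult[OF x] bilinear_pair_sum_comult_right[OF t]] by simp
    also have "\<dots> = pair_sum (\<lambda>u v. pair_sum (\<lambda>a b. \<tau> u a b) (hcomult SH v)) (hcomult SH x)"
    proof (rule pair_sum_cong)
      fix u v assume "(u,v) \<in> set (hcomult SH x)"
      then show "pair_sum (\<lambda>a b. \<tau> u a b) (hcomult H v) = pair_sum (\<lambda>a b. \<tau> u a b) (hcomult SH v)"
        using tensor_eqD(3)[OF tensor_eq_sub_comult trilinear_bilinear_23[OF t sub_carrier]] mem by simp
    qed
    also have "\<dots> = triple_sum \<tau> ?r"
      by (rule triple_sum_concat_right[symmetric])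
    finally show "triple_sum \<tau> ?l = triple_sum \<tau> ?r" .
  qed
  show ?thesis
    using tensor3_eq_restrict[OF vspace sub_vspace_sub_hopf[OF subalg] _ _ eqH] sets by simp
qed

lemma sub_hopf_vsum_comult:
  assumes x: "x \<in> S" and F: "\<And>a b. a \<in> hcarrier H \<Longrightarrow> b \<in> hcarrier H \<Longrightarrow> F a b \<in> hcarrier H"
    and bl: "\<And>\<phi>. linear_form H \<phi> \<Longrightarrow> bilinear_form H H (\<lambda>a b. \<phi> (F a b))"
  shows "vsum H (map (\<lambda>(a,b). F a b) (hcomult SH x)) = vsum H (map (\<lambda>(a,b). F a b) (hcomult H x))"
  by (rule tensor_eq_vsum[OF vspace _ _ tensor_eq_sym[OF tensor_eq_sub_comult[OF x]]]) (use F bl in auto)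

lemma k_coalgebra_sub_hopf: "k_coalgebra SH"
  unfolding k_coalgebra_def
proof (simp only: sub_hopf_simps vsum_sub_hopf, intro conjI ballI allI vspace_sub_hopf sub_hopf_coassoc)
  fix x assume x: "x \<in> S"
  show "set (hcomult SH x) \<subseteq> S \<times> S" using sub_comult_set[OF x] .
  show "vsum H (map (\<lambda>(u,v). hscale H (hcounit H u) v) (hcomult SH x)) = x"
    using sub_hopf_vsum_comult[OF x, of "\<lambda>u v. hscale H (hcounit H u) v"] counit_left[OF sub_carrier[OF x]]
      bilinear_counit_scale by simp
  show "vsum H (map (\<lambda>(u,v). hscale H (hcounit H v) u) (hcomult SH x)) = x"
    using sub_hopf_vsum_comult[OF x, of "\<lambda>u v. hscale H (hcounit H v) u"] counit_right[OF sub_carrier[OF x]]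
      bilinear_swap[OF bilinear_counit_scale] by simp
next
  fix x y assume x: "x \<in> S" and y: "y \<in> S"
  have "tensor_eq H H (hcomult H (hadd H x y)) (hcomult SH x @ hcomult SH y)"
    using tensor_eq_trans[OF comult_add[OF sub_carrier[OF x] sub_carrier[OF y]]
        tensor_eq_append[OF tensor_eq_sub_comult[OF x] tensor_eq_sub_comult[OF y]]] .
  then show "tensor_eq SH SH (hcomult SH (hadd H x y)) (hcomult SH x @ hcomult SH y)"
    using sub_comult_tensor_eq hopf_subalgD(3)[OF subalg x y] sub_comult_set[OF x] sub_comult_set[OF y] by simp
  show "hcounit H (hadd H x y) = hcounit H x + hcounit H y"
    using counit_add[OF sub_carrier[OF x] sub_carrier[OF y]] .
next
  fix c x assume x: "x \<in> S"
  let ?sc = "map (\<lambda>(u,v). (hscale H c u, v))"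
  have "tensor_eq H H (hcomult H (hscale H c x)) (?sc (hcomult SH x))"
    using tensor_eq_trans[OF comult_scale[OF sub_carrier[OF x]]
        tensor_eq_map[OF tensor_eq_sub_comult[OF x] linear_map_scale linear_map_id]] by simp
  moreover have "set (?sc (hcomult SH x)) \<subseteq> S \<times> S"
    using sub_comult_set[OF x] hopf_subalgD(4)[OF subalg] by auto
  ultimately show "tensor_eq SH SH (hcomult SH (hscale H c x)) (?sc (hcomult SH x))"
    using sub_comult_tensor_eq hopf_subalgD(4)[OF subalg x] by blast
  show "hcounit H (hscale H c x) = c * hcounit H x"
    using counit_scale[OF sub_carrier[OF x]] .
qed

lemma hopf_sub_hopf: "hopf SH"
  unfolding hopf_def
proof (simp only: sub_hopf_simps vsum_sub_hopf, intro conjI ballI allI k_algebra_sub_hopf k_coalgebra_sub_hopf)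
  fix x y assume x: "x \<in> S" and y: "y \<in> S"
  have "tensor_eq H H (hcomult H (hmult H x y)) (tensor_mult H (hcomult SH x) (hcomult SH y))"
    using tensor_eq_trans[OF comult_mult[OF sub_carrier[OF x] sub_carrier[OF y]]
        tensor_eq_tensor_mult[OF tensor_eq_sub_comult[OF x] tensor_eq_sub_comult[OF y]]] .
  moreover have "set (tensor_mult H (hcomult SH x) (hcomult SH y)) \<subseteq> S \<times> S"
    using sub_comult_set[OF x] sub_comult_set[OF y] hopf_subalgD(6)[OF subalg]
    unfolding tensor_mult_def by fastforce
  ultimately show "tensor_eq SH SH (hcomult SH (hmult H x y))
      (concat (map (\<lambda>(u,v). map (\<lambda>(u',v'). (hmult H u u', hmult H v v')) (hcomult SH y)) (hcomult SH x)))"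
    using sub_comult_tensor_eq hopf_subalgD(6)[OF subalg x y] unfolding tensor_mult_def by blast
  show "hcounit H (hmult H x y) = hcounit H x * hcounit H y"
    using counit_mult[OF sub_carrier[OF x] sub_carrier[OF y]] .
next
  show "tensor_eq SH SH (hcomult SH (hone H)) [(hone H, hone H)]"
    using sub_comult_tensor_eq[OF _ comult_one] hopf_subalgD(5)[OF subalg] by simp
  show "hcounit H (hone H) = 1" by simp
  show "linear_map SH SH (hantipode H)" unfolding linear_map_def
    using hopf_subalgD(7)[OF subalg] antipode_add antipode_scale sub_carrier by auto
next
  fix x assume x: "x \<in> S"
  show "vsum H (map (\<lambda>(u,v). hmult H (hantipode H u) v) (hcomult SH x)) = hscale H (hcounit H x) (hone H)"
    using sub_hopf_vsum_comult[OF x, of "\<lambda>u v. hmult H (hantipode H u) v"] antipode_left[OF sub_carrier[OF x]]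
      bilinear_antipode_mult by simp
  show "vsum H (map (\<lambda>(u,v). hmult H u (hantipode H v)) (hcomult SH x)) = hscale H (hcounit H x) (hone H)"
    using sub_hopf_vsum_comult[OF x, of "\<lambda>u v. hmult H u (hantipode H v)"] antipode_right[OF sub_carrier[OF x]]
      bilinear_mult_antipode by simp
qed

end

lemma sub_hopf_hopf: "hopf H \<Longrightarrow> hopf_subalg H S \<Longrightarrow> hopf (sub_hopf H S)"
  using hopf_subalgebra.hopf_sub_hopf[of H S]
  by (simp add: hopf_subalgebra_def hopf_subalgebra_axioms_def hopf_algebra_def)

lemma (in cocomm_hopf_algebra) cocomm_hopf_sub_hopf:
  assumes "hopf_subalg H S"
  shows "cocomm_hopf (sub_hopf H S)"
proof -
  interpret hopf_subalgebra H S by unfold_locales (rule assms)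
  have "tensor_eq SH SH (hcomult SH x) (map (\<lambda>(u,v). (v,u)) (hcomult SH x))" if x: "x \<in> S" for x
  proof (rule sub_comult_tensor_eq[OF x])
    show "tensor_eq H H (hcomult H x) (map (\<lambda>(u,v). (v,u)) (hcomult SH x))"
      using tensor_eq_trans[OF cocomm[rule_format, OF sub_carrier[OF x]] tensor_eq_swap[OF tensor_eq_sub_comult[OF x]]] .
    show "set (map (\<lambda>(u,v). (v,u)) (hcomult SH x)) \<subseteq> S \<times> S" using sub_comult_set[OF x] by auto
  qed
  then show ?thesis unfolding cocomm_hopf_def using hopf_sub_hopf by simp
qed

lemma hopf_hom_id: "hopf H \<Longrightarrow> hopf_hom H H id"
  unfolding hopf_hom_def linear_map_def
  using hopf_algebra.comult_set[of H] by (auto intro!: tensor_eq_refl simp: hopf_algebra_def)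

lemma hopf_hom_restrict:
  assumes p: "hopf_hom A B p" and S: "hopf_subalg A S"
  shows "hopf_hom (sub_hopf A S) B p"
proof -
  have lin: "linear_map A B p" using p unfolding hopf_hom_def by simp
  have "tensor_eq B B (hcomult B (p x)) (map (\<lambda>(u,v). (p u, p v)) (hcomult (sub_hopf A S) x))"
    if x: "x \<in> S" for x
  proof -
    have xA: "x \<in> hcarrier A" using hopf_subalgD(1)[OF S] x by blast
    have "tensor_eq B B (hcomult B (p x)) (map (\<lambda>(u,v). (p u, p v)) (hcomult A x))"
      using p xA unfolding hopf_hom_def by blast
    moreover have "tensor_eq B B (map (\<lambda>(u,v). (p u, p v)) (hcomult A x))
        (map (\<lambda>(u,v). (p u, p v)) (hcomult (sub_hopf A S) x))"
      using tensor_eq_map[OF sub_hopf_comult(2)[OF S x] lin lin] by simp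
    ultimately show ?thesis using tensor_eq_trans by blast
  qed
  then show ?thesis
    using p hopf_subalgD(1)[OF S] unfolding hopf_hom_def linear_map_def by (auto simp: subset_iff)
qed

lemma hopf_hom_corestrict:
  assumes D: "hopf D" and B: "hopf B" and f: "hopf_hom D B f" and S: "hopf_subalg B S"
    and fS: "f ` hcarrier D \<subseteq> S"
  shows "hopf_hom D (sub_hopf B S) f"
proof -
  interpret D: hopf_algebra D by unfold_locales (rule D)
  interpret B: hopf_subalgebra B S by unfold_locales (rule B, rule S)
  have "tensor_eq B.SH B.SH (hcomult B.SH (f x)) (map (\<lambda>(u,v). (f u, f v)) (hcomult D x))"
    if x: "x \<in> hcarrier D" for x
  proof (rule B.sub_comult_tensor_eq)
    show "f x \<in> S" using fS x by blast
    show "tensor_eq B B (hcomult B (f x)) (map (\<lambda>(u,v). (f u, f v)) (hcomult D x))"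
      using f x unfolding hopf_hom_def by blast
    show "set (map (\<lambda>(u,v). (f u, f v)) (hcomult D x)) \<subseteq> S \<times> S"
      using D.comult_set[OF x] fS by auto
  qed
  then show ?thesis using f fS unfolding hopf_hom_def linear_map_def by auto
qed

section \<open>The antipode\<close>

context hopf_algebra
begin

lemma antipode_one: "hantipode H (hone H) = hone H"
proof -
  have "vsum H (map (\<lambda>(u,v). hmult H (hantipode H u) v) (hcomult H (hone H))) =
        vsum H (map (\<lambda>(u,v). hmult H (hantipode H u) v) [(hone H, hone H)])"
    by (rule tensor_eq_vsum[OF vspace _ bilinear_antipode_mult comult_one]) auto
  then show ?thesis using antipode_left[OF one_closed] by simp
qed

lemma counit_antipode: assumes x: "x \<in> hcarrier H" shows "hcounit H (hantipode H x) = hcounit H x"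
proof -
  have "hcounit H x = pair_sum (\<lambda>u v. hcounit H (hmult H (hantipode H u) v)) (hcomult H x)"
    using pair_sum_antipode_left[OF linear_form_counit x] by simp
  also have "\<dots> = pair_sum (\<lambda>u v. hcounit H (hantipode H u) * hcounit H v) (hcomult H x)"
    using comult_set[OF x] by (intro pair_sum_cong) (auto simp: counit_mult)
  also have "\<dots> = hcounit H (hantipode H x)"
    by (rule pair_sum_counit_right[OF linear_form_antipode[OF linear_form_counit] x])
  finally show ?thesis by simp
qed

lemma tensor_mult_append_left: "tensor_mult H (xs @ ys) t = tensor_mult H xs t @ tensor_mult H ys t"
  unfolding tensor_mult_def by simp

lemma pair_sum_tensor_mult_append_right:
  "pair_sum \<gamma> (tensor_mult H t (ys @ zs)) = pair_sum \<gamma> (tensor_mult H t ys) + pair_sum \<gamma> (tensor_mult H t zs)"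
  unfolding pair_sum_tensor_mult by (simp add: pair_sum_add)

lemma pair_sum_tensor_mult_assoc:
  assumes "set t1 \<subseteq> hcarrier H \<times> hcarrier H" "set t2 \<subseteq> hcarrier H \<times> hcarrier H" "set t3 \<subseteq> hcarrier H \<times> hcarrier H"
  shows "pair_sum \<gamma> (tensor_mult H (tensor_mult H t1 t2) t3) =
      pair_sum \<gamma> (tensor_mult H t1 (tensor_mult H t2 t3))"
proof -
  have "pair_sum \<gamma> (tensor_mult H (tensor_mult H t1 t2) t3) =
      pair_sum (\<lambda>a1 b1. pair_sum (\<lambda>a2 b2. pair_sum (\<lambda>a3 b3.
      \<gamma> (hmult H (hmult H a1 a2) a3) (hmult H (hmult H b1 b2) b3)) t3) t2) t1"
    unfolding pair_sum_tensor_mult[of \<gamma>] by (simp add: pair_sum_tensor_mult)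
  also have "\<dots> = pair_sum (\<lambda>a1 b1. pair_sum (\<lambda>a2 b2. pair_sum (\<lambda>a3 b3.
      \<gamma> (hmult H a1 (hmult H a2 a3)) (hmult H b1 (hmult H b2 b3))) t3) t2) t1"
    by (intro pair_sum_cong) (use assms in \<open>auto simp: mult_assoc subset_iff\<close>)
  also have "\<dots> = pair_sum \<gamma> (tensor_mult H t1 (tensor_mult H t2 t3))"
    unfolding pair_sum_tensor_mult[of \<gamma> _ "tensor_mult H t2 t3"] by (simp add: pair_sum_tensor_mult)
  finally show ?thesis .
qed

definition tensor_linear :: "('a \<Rightarrow> ('a \<times> 'a) list) \<Rightarrow> bool" where
  "tensor_linear F \<longleftrightarrow> (\<forall>x\<in>hcarrier H. set (F x) \<subseteq> hcarrier H \<times> hcarrier H) \<and>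
     (\<forall>\<gamma>. bilinear_form H H \<gamma> \<longrightarrow> linear_form H (\<lambda>x. pair_sum \<gamma> (F x)))"

definition tensor_eq_fun :: "('a \<Rightarrow> ('a \<times> 'a) list) \<Rightarrow> ('a \<Rightarrow> ('a \<times> 'a) list) \<Rightarrow> bool" where
  "tensor_eq_fun F G \<longleftrightarrow> (\<forall>x\<in>hcarrier H. tensor_eq H H (F x) (G x))"

definition conv :: "('a \<Rightarrow> ('a \<times> 'a) list) \<Rightarrow> ('a \<Rightarrow> ('a \<times> 'a) list) \<Rightarrow> 'a \<Rightarrow> ('a \<times> 'a) list" where
  "conv F G x = concat (map (\<lambda>(a,b). tensor_mult H (F a) (G b)) (hcomult H x))"

definition conv_unit :: "'a \<Rightarrow> ('a \<times> 'a) list" where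
  "conv_unit x = [(hscale H (hcounit H x) (hone H), hone H)]"

lemma tensor_linearD:
  "tensor_linear F \<Longrightarrow> x \<in> hcarrier H \<Longrightarrow> set (F x) \<subseteq> hcarrier H \<times> hcarrier H"
  "tensor_linear F \<Longrightarrow> bilinear_form H H \<gamma> \<Longrightarrow> linear_form H (\<lambda>x. pair_sum \<gamma> (F x))"
  unfolding tensor_linear_def by auto

lemma tensor_linear_mem:
  "tensor_linear F \<Longrightarrow> x \<in> hcarrier H \<Longrightarrow> (u,v) \<in> set (F x) \<Longrightarrow> u \<in> hcarrier H \<and> v \<in> hcarrier H"
  using tensor_linearD(1) by blast

lemma tensor_eq_funI:
  assumes "tensor_linear F" "tensor_linear G"
    and "\<And>x \<gamma>. x \<in> hcarrier H \<Longrightarrow> bilinear_form H H \<gamma> \<Longrightarrow> pair_sum \<gamma> (F x) = pair_sum \<gamma> (G x)"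
  shows "tensor_eq_fun F G"
  unfolding tensor_eq_fun_def using assms by (auto intro!: tensor_eqI dest: tensor_linearD(1))

lemma tensor_eq_fun_refl: "tensor_linear F \<Longrightarrow> tensor_eq_fun F F"
  unfolding tensor_eq_fun_def using tensor_linearD(1) tensor_eq_refl by blast

lemma tensor_eq_fun_sym: "tensor_eq_fun F G \<Longrightarrow> tensor_eq_fun G F"
  unfolding tensor_eq_fun_def using tensor_eq_sym by blast

lemma tensor_eq_fun_trans: "tensor_eq_fun F G \<Longrightarrow> tensor_eq_fun G K \<Longrightarrow> tensor_eq_fun F K"
  unfolding tensor_eq_fun_def using tensor_eq_trans by blast

lemma pair_sum_conv:
  "pair_sum \<gamma> (conv F G x) = pair_sum (\<lambda>a b. pair_sum \<gamma> (tensor_mult H (F a) (G b))) (hcomult H x)"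
  unfolding conv_def by (simp add: pair_sum_concat_map)

lemma pair_sum_tensor_mult_conv_left:
  "pair_sum \<gamma> (tensor_mult H (conv F G u) t) =
   pair_sum (\<lambda>a b. pair_sum \<gamma> (tensor_mult H (tensor_mult H (F a) (G b)) t)) (hcomult H u)"
proof -
  have "pair_sum \<gamma> (tensor_mult H (concat (map (\<lambda>(a,b). tensor_mult H (F a) (G b)) xs)) t) =
      pair_sum (\<lambda>a b. pair_sum \<gamma> (tensor_mult H (tensor_mult H (F a) (G b)) t)) xs" for xs
  proof (induction xs)
    case (Cons p xs) then show ?case by (cases p) (simp add: tensor_mult_append_left)
  qed (simp add: tensor_mult_def)
  then show ?thesis unfolding conv_def .
qed

lemma pair_sum_tensor_mult_conv_right:
  "pair_sum \<gamma> (tensor_mult H t (conv F G u)) =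
   pair_sum (\<lambda>a b. pair_sum \<gamma> (tensor_mult H t (tensor_mult H (F a) (G b)))) (hcomult H u)"
proof -
  have "pair_sum \<gamma> (tensor_mult H t (concat (map (\<lambda>(a,b). tensor_mult H (F a) (G b)) xs))) =
      pair_sum (\<lambda>a b. pair_sum \<gamma> (tensor_mult H t (tensor_mult H (F a) (G b)))) xs" for xs
  proof (induction xs)
    case (Cons p xs) then show ?case by (cases p) (simp add: pair_sum_tensor_mult_append_right)
  qed (simp add: pair_sum_tensor_mult)
  then show ?thesis unfolding conv_def .
qed

lemma bilinear_pair_sum_tensor_mult:
  assumes F: "tensor_linear F" and G: "tensor_linear G" and g: "bilinear_form H H \<gamma>"
  shows "bilinear_form H H (\<lambda>a b. pair_sum \<gamma> (tensor_mult H (F a) (G b)))"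
proof (rule bilinear_formI)
  fix b assume b: "b \<in> hcarrier H"
  have "bilinear_form H H (\<lambda>u v. pair_sum (\<lambda>u' v'. \<gamma> (hmult H u u') (hmult H v v')) (G b))"
    by (rule bilinear_pair_sum) (use bilinear_mult_right_both[OF g] tensor_linear_mem[OF G b] in auto)
  from tensor_linearD(2)[OF F this] show "linear_form H (\<lambda>a. pair_sum \<gamma> (tensor_mult H (F a) (G b)))"
    by (simp add: pair_sum_tensor_mult)
next
  fix a assume a: "a \<in> hcarrier H"
  have "bilinear_form H H (\<lambda>u' v'. pair_sum (\<lambda>u v. \<gamma> (hmult H u u') (hmult H v v')) (F a))"
    by (rule bilinear_pair_sum) (use bilinear_mult_left_both[OF g] tensor_linear_mem[OF F a] in auto)
  from tensor_linearD(2)[OF G this] show "linear_form H (\<lambda>b. pair_sum \<gamma> (tensor_mult H (F a) (G b)))"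
    by (simp add: pair_sum_tensor_mult pair_sum_commute[of _ _ "F a"])
qed

lemma tensor_linear_conv:
  assumes F: "tensor_linear F" and G: "tensor_linear G"
  shows "tensor_linear (conv F G)"
  unfolding tensor_linear_def
proof (intro conjI ballI allI impI)
  fix x assume x: "x \<in> hcarrier H"
  show "set (conv F G x) \<subseteq> hcarrier H \<times> hcarrier H"
  proof
    fix z assume "z \<in> set (conv F G x)"
    then obtain a b where ab: "(a,b) \<in> set (hcomult H x)" and z: "z \<in> set (tensor_mult H (F a) (G b))"
      unfolding conv_def by auto
    have "a \<in> hcarrier H" "b \<in> hcarrier H" using comult_mem[OF x ab] by auto
    then have "set (tensor_mult H (F a) (G b)) \<subseteq> hcarrier H \<times> hcarrier H"
      using tensor_mult_set tensor_linearD(1)[OF F] tensor_linearD(1)[OF G] by blast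
    then show "z \<in> hcarrier H \<times> hcarrier H" using z by blast
  qed
next
  fix \<gamma> assume g: "bilinear_form H H \<gamma>"
  show "linear_form H (\<lambda>x. pair_sum \<gamma> (conv F G x))"
    unfolding pair_sum_conv by (rule linear_form_pair_sum_comult[OF bilinear_pair_sum_tensor_mult[OF F G g]])
qed

lemma conv_cong:
  assumes F: "tensor_linear F" "tensor_linear F'" "tensor_eq_fun F F'"
    and G: "tensor_linear G" "tensor_linear G'" "tensor_eq_fun G G'"
  shows "tensor_eq_fun (conv F G) (conv F' G')"
proof (rule tensor_eq_funI[OF tensor_linear_conv[OF F(1) G(1)] tensor_linear_conv[OF F(2) G(2)]])
  fix x \<gamma> assume x: "x \<in> hcarrier H" and g: "bilinear_form H H \<gamma>"
  show "pair_sum \<gamma> (conv F G x) = pair_sum \<gamma> (conv F' G' x)"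
    unfolding pair_sum_conv
  proof (rule pair_sum_cong)
    fix a b assume "(a,b) \<in> set (hcomult H x)"
    then have "tensor_eq H H (F a) (F' a)" "tensor_eq H H (G b) (G' b)"
      using comult_mem[OF x] F(3) G(3) unfolding tensor_eq_fun_def by auto
    from tensor_eqD(3)[OF tensor_eq_tensor_mult[OF this] g]
    show "pair_sum \<gamma> (tensor_mult H (F a) (G b)) = pair_sum \<gamma> (tensor_mult H (F' a) (G' b))" .
  qed
qed

lemma linear_form_pair_sum_tensor_mult_right:
  assumes K: "tensor_linear K" and T: "set T \<subseteq> hcarrier H \<times> hcarrier H" and g: "bilinear_form H H \<gamma>"
  shows "linear_form H (\<lambda>v. pair_sum \<gamma> (tensor_mult H T (K v)))"
proof -
  have "bilinear_form H H (\<lambda>a3 b3. pair_sum (\<lambda>u w. \<gamma> (hmult H u a3) (hmult H w b3)) T)"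
    by (rule bilinear_pair_sum) (use bilinear_mult_left_both[OF g] T in auto)
  from tensor_linearD(2)[OF K this] show ?thesis
    by (simp add: pair_sum_tensor_mult pair_sum_commute[of _ _ T])
qed

lemma trilinear_tensor_mult3:
  assumes F: "tensor_linear F" and G: "tensor_linear G" and K: "tensor_linear K"
    and g: "bilinear_form H H \<gamma>"
  shows "trilinear_form H (\<lambda>a b v. pair_sum \<gamma> (tensor_mult H (tensor_mult H (F a) (G b)) (K v)))"
proof -
  have bl: "bilinear_form H H (\<lambda>a b. pair_sum \<gamma> (tensor_mult H (tensor_mult H (F a) (G b)) (K v)))"
    if v: "v \<in> hcarrier H" for v
  proof -
    have "bilinear_form H H (\<lambda>u w. pair_sum (\<lambda>a3 b3. \<gamma> (hmult H u a3) (hmult H w b3)) (K v))"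
      by (rule bilinear_pair_sum) (use bilinear_mult_right_both[OF g] tensor_linear_mem[OF K v] in auto)
    from bilinear_pair_sum_tensor_mult[OF F G this] show ?thesis
      by (simp add: pair_sum_tensor_mult[of \<gamma>])
  qed
  have lin: "linear_form H (\<lambda>v. pair_sum \<gamma> (tensor_mult H (tensor_mult H (F a) (G b)) (K v)))"
    if a: "a \<in> hcarrier H" and b: "b \<in> hcarrier H" for a b
    using linear_form_pair_sum_tensor_mult_right[OF K _ g]
      tensor_mult_set[OF tensor_linearD(1)[OF F a] tensor_linearD(1)[OF G b]] by blast
  show ?thesis
    by (rule trilinear_formI) (use bilinear_formD[OF bl] lin in auto)
qed

lemma conv_assoc:
  assumes F: "tensor_linear F" and G: "tensor_linear G" and K: "tensor_linear K"
  shows "tensor_eq_fun (conv (conv F G) K) (conv F (conv G K))"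
proof (rule tensor_eq_funI)
  show "tensor_linear (conv (conv F G) K)" "tensor_linear (conv F (conv G K))"
    using tensor_linear_conv F G K by blast+
  fix x \<gamma> assume x: "x \<in> hcarrier H" and g: "bilinear_form H H \<gamma>"
  let ?\<tau> = "\<lambda>a b v. pair_sum \<gamma> (tensor_mult H (tensor_mult H (F a) (G b)) (K v))"
  have "pair_sum \<gamma> (conv (conv F G) K x) =
      pair_sum (\<lambda>u v. pair_sum (\<lambda>a b. ?\<tau> a b v) (hcomult H u)) (hcomult H x)"
    unfolding pair_sum_conv pair_sum_tensor_mult_conv_left ..
  also have "\<dots> = pair_sum (\<lambda>u v. pair_sum (\<lambda>a b. ?\<tau> u a b) (hcomult H v)) (hcomult H x)"
    by (rule pair_sum_coassoc[OF trilinear_tensor_mult3[OF F G K g] x])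
  also have "\<dots> = pair_sum (\<lambda>u v. pair_sum \<gamma> (tensor_mult H (F u) (conv G K v))) (hcomult H x)"
  proof (rule pair_sum_cong)
    fix u v assume "(u,v) \<in> set (hcomult H x)"
    then have u: "u \<in> hcarrier H" and v: "v \<in> hcarrier H" using comult_mem[OF x] by auto
    show "pair_sum (\<lambda>a b. ?\<tau> u a b) (hcomult H v) = pair_sum \<gamma> (tensor_mult H (F u) (conv G K v))"
      unfolding pair_sum_tensor_mult_conv_right
      by (rule pair_sum_cong, rule pair_sum_tensor_mult_assoc)
         (use tensor_linearD(1)[OF F u] tensor_linearD(1)[OF G] tensor_linearD(1)[OF K] comult_mem[OF v] in auto)
  qed
  also have "\<dots> = pair_sum \<gamma> (conv F (conv G K) x)" by (rule pair_sum_conv[symmetric])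
  finally show "pair_sum \<gamma> (conv (conv F G) K x) = pair_sum \<gamma> (conv F (conv G K) x)" .
qed

lemma pair_sum_conv_unit:
  "bilinear_form H H \<gamma> \<Longrightarrow> x \<in> hcarrier H \<Longrightarrow> pair_sum \<gamma> (conv_unit x) = hcounit H x * \<gamma> (hone H) (hone H)"
  unfolding conv_unit_def bilinear_form_def by simp

lemma pair_sum_tensor_mult_conv_unit:
  assumes t: "set t \<subseteq> hcarrier H \<times> hcarrier H" and g: "bilinear_form H H \<gamma>" and b: "b \<in> hcarrier H"
  shows "pair_sum \<gamma> (tensor_mult H t (conv_unit b)) = hcounit H b * pair_sum \<gamma> t"
    and "pair_sum \<gamma> (tensor_mult H (conv_unit b) t) = hcounit H b * pair_sum \<gamma> t"
proof -
  have "pair_sum \<gamma> (tensor_mult H t (conv_unit b)) = pair_sum (\<lambda>u v. hcounit H b * \<gamma> u v) t"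
    unfolding conv_unit_def pair_sum_tensor_mult using t g unfolding bilinear_form_def
    by (intro pair_sum_cong) (auto simp: mult_scale_right)
  then show "pair_sum \<gamma> (tensor_mult H t (conv_unit b)) = hcounit H b * pair_sum \<gamma> t"
    by (simp add: pair_sum_cmult)
  have "pair_sum \<gamma> (tensor_mult H (conv_unit b) t) = pair_sum (\<lambda>u v. hcounit H b * \<gamma> u v) t"
    unfolding conv_unit_def pair_sum_tensor_mult using t g unfolding bilinear_form_def
    by (simp add: mult_scale_left pair_sum_cmult[symmetric]) (intro pair_sum_cong, auto simp: mult_scale_left)
  then show "pair_sum \<gamma> (tensor_mult H (conv_unit b) t) = hcounit H b * pair_sum \<gamma> t"
    by (simp add: pair_sum_cmult)
qed

lemma tensor_linear_conv_unit: "tensor_linear conv_unit"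
  unfolding tensor_linear_def
proof (intro conjI ballI allI impI)
  fix x assume "x \<in> hcarrier H"
  then show "set (conv_unit x) \<subseteq> hcarrier H \<times> hcarrier H" unfolding conv_unit_def by simp
next
  fix \<gamma> assume g: "bilinear_form H H \<gamma>"
  show "linear_form H (\<lambda>x. pair_sum \<gamma> (conv_unit x))"
    by (rule linear_form_cong[OF _ vspace linear_form_cmult_right[OF linear_form_counit]])
       (use pair_sum_conv_unit[OF g] in blast)
qed

lemma conv_unit_right:
  assumes F: "tensor_linear F"
  shows "tensor_eq_fun (conv F conv_unit) F"
proof (rule tensor_eq_funI[OF tensor_linear_conv[OF F tensor_linear_conv_unit] F])
  fix x \<gamma> assume x: "x \<in> hcarrier H" and g: "bilinear_form H H \<gamma>"
  have "pair_sum \<gamma> (conv F conv_unit x) = pair_sum (\<lambda>a b. pair_sum \<gamma> (F a) * hcounit H b) (hcomult H x)"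
    unfolding pair_sum_conv using comult_mem[OF x]
   
      by (intro pair_sum_cong) (auto simp: pair_sum_tensor_mult_conv_unit(1)[OF tensor_linearD(1)[OF F] g] mult.commute)
  also have "\<dots> = pair_sum \<gamma> (F x)" by (rule pair_sum_counit_right[OF tensor_linearD(2)[OF F g] x])
  finally show "pair_sum \<gamma> (conv F conv_unit x) = pair_sum \<gamma> (F x)" .
qed

lemma conv_unit_left:
  assumes F: "tensor_linear F"
  shows "tensor_eq_fun (conv conv_unit F) F"
proof (rule tensor_eq_funI[OF tensor_linear_conv[OF tensor_linear_conv_unit F] F])
  fix x \<gamma> assume x: "x \<in> hcarrier H" and g: "bilinear_form H H \<gamma>"
  have "pair_sum \<gamma> (conv conv_unit F x) = pair_sum (\<lambda>a b. hcounit H a * pair_sum \<gamma> (F b)) (hcomult H x)"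
    unfolding pair_sum_conv using comult_mem[OF x]
    by (intro pair_sum_cong) (auto simp: pair_sum_tensor_mult_conv_unit(2)[OF tensor_linearD(1)[OF F] g])
  also have "\<dots> = pair_sum \<gamma> (F x)" by (rule pair_sum_counit_left[OF tensor_linearD(2)[OF F g] x])
  finally show "pair_sum \<gamma> (conv conv_unit F x) = pair_sum \<gamma> (F x)" .
qed

lemma tensor_linear_comult: "tensor_linear (hcomult H)"
  unfolding tensor_linear_def using comult_set linear_form_pair_sum_comult by blast

lemma tensor_linear_comult_antipode: "tensor_linear (\<lambda>x. hcomult H (hantipode H x))"
  unfolding tensor_linear_def
  using comult_set linear_form_pair_sum_comult linear_form_comp[OF _ antipode_linear] by auto

lemma tensor_linear_antipode_comult:
  "tensor_linear (\<lambda>x. map (\<lambda>(a,b). (hantipode H a, hantipode H b)) (hcomult H x))"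
  unfolding tensor_linear_def
proof (intro conjI ballI allI impI)
  fix x assume x: "x \<in> hcarrier H"
  then show "set (map (\<lambda>(a,b). (hantipode H a, hantipode H b)) (hcomult H x)) \<subseteq> hcarrier H \<times> hcarrier H"
    using comult_set[OF x] by auto
next
  fix \<gamma> assume g: "bilinear_form H H \<gamma>"
  show "linear_form H (\<lambda>x. pair_sum \<gamma> (map (\<lambda>(a,b). (hantipode H a, hantipode H b)) (hcomult H x)))"
    using linear_form_pair_sum_comult[OF bilinear_comp[OF g antipode_linear antipode_linear]] by simp
qed

lemma conv_comult_antipode_comult: "tensor_eq_fun (conv (\<lambda>x. hcomult H (hantipode H x)) (hcomult H)) conv_unit"
proof (rule tensor_eq_funI[OF tensor_linear_conv[OF tensor_linear_comult_antipode tensor_linear_comult]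
      tensor_linear_conv_unit])
  fix x \<gamma> assume x: "x \<in> hcarrier H" and g: "bilinear_form H H \<gamma>"
  have "pair_sum \<gamma> (conv (\<lambda>x. hcomult H (hantipode H x)) (hcomult H) x) =
      pair_sum (\<lambda>a b. pair_sum \<gamma> (hcomult H (hmult H (hantipode H a) b))) (hcomult H x)"
    unfolding pair_sum_conv
  proof (rule pair_sum_cong)
    fix a b assume "(a,b) \<in> set (hcomult H x)"
    then have a: "a \<in> hcarrier H" and b: "b \<in> hcarrier H" using comult_mem[OF x] by auto
    show "pair_sum \<gamma> (tensor_mult H (hcomult H (hantipode H a)) (hcomult H b)) =
        pair_sum \<gamma> (hcomult H (hmult H (hantipode H a) b))"
      using tensor_eqD(3)[OF comult_mult[OF antipode_closed[OF a] b] g] by simp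
  qed
  also have "\<dots> = hcounit H x * pair_sum \<gamma> (hcomult H (hone H))"
    by (rule pair_sum_antipode_left[OF linear_form_pair_sum_comult[OF g] x])
  also have "\<dots> = pair_sum \<gamma> (conv_unit x)"
    using pair_sum_conv_unit[OF g x] pair_sum_comult_one[OF g] by simp
  finally show "pair_sum \<gamma> (conv (\<lambda>x. hcomult H (hantipode H x)) (hcomult H) x) = pair_sum \<gamma> (conv_unit x)" .
qed

end

context cocomm_hopf_algebra
begin

lemma linear_map_mult_antipode: "a \<in> hcarrier H \<Longrightarrow> linear_map H H (\<lambda>c. hmult H a (hantipode H c))"
  by (rule linear_map_comp[OF antipode_linear linear_map_mult_left])

lemma pair_sum_mult_antipode_comult:
  assumes a: "a \<in> hcarrier H" and b: "b \<in> hcarrier H" and g: "bilinear_form H H \<gamma>"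
  shows "pair_sum (\<lambda>b1 b2. pair_sum (\<lambda>c1 c2. \<gamma> (hmult H a (hantipode H c1)) (hmult H b1 (hantipode H c2)))
      (hcomult H b2)) (hcomult H b) = \<gamma> (hmult H a (hantipode H b)) (hone H)"
proof -
  note mS = linear_map_mult_antipode
  define \<tau> where "\<tau> d1 c1 c2 = \<gamma> (hmult H a (hantipode H c2)) (hmult H d1 (hantipode H c1))" for d1 c1 c2
  have tri: "trilinear_form H \<tau>"
  proof (rule trilinear_formI)
    fix c1 c2 assume "c1 \<in> hcarrier H" "c2 \<in> hcarrier H"
    then show "linear_form H (\<lambda>d1. \<tau> d1 c1 c2)" unfolding \<tau>_def
      by (intro linear_form_comp[OF _ linear_map_mult_right] bilinear_formD(2)[OF g]) (use a in auto)
  next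
    fix d1 c2 assume "d1 \<in> hcarrier H" "c2 \<in> hcarrier H"
    then show "linear_form H (\<lambda>c1. \<tau> d1 c1 c2)" unfolding \<tau>_def
      by (intro linear_form_comp[OF _ mS] bilinear_formD(2)[OF g]) (use a in auto)
  next
    fix d1 c1 assume "d1 \<in> hcarrier H" "c1 \<in> hcarrier H"
    then show "linear_form H (\<lambda>c2. \<tau> d1 c1 c2)" unfolding \<tau>_def
      by (intro linear_form_comp[OF _ mS[OF a]] bilinear_formD(1)[OF g]) auto
  qed
  have "pair_sum (\<lambda>b1 b2. pair_sum (\<lambda>c1 c2. \<gamma> (hmult H a (hantipode H c1)) (hmult H b1 (hantipode H c2)))
      (hcomult H b2)) (hcomult H b) =
          pair_sum (\<lambda>b1 b2. pair_sum (\<lambda>c1 c2. \<tau> b1 c1 c2) (hcomult H b2)) (hcomult H b)"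
  proof (rule pair_sum_cong)
    fix b1 b2 assume "(b1,b2) \<in> set (hcomult H b)"
    then have b1: "b1 \<in> hcarrier H" and b2: "b2 \<in> hcarrier H" using comult_mem[OF b] by auto
    show "pair_sum (\<lambda>c1 c2. \<gamma> (hmult H a (hantipode H c1)) (hmult H b1 (hantipode H c2))) (hcomult H b2) =
        pair_sum (\<lambda>c1 c2. \<tau> b1 c1 c2) (hcomult H b2)"
      unfolding \<tau>_def using pair_sum_cocomm[OF bilinear_comp[OF g mS[OF a] mS[OF b1]] b2] by simp
  qed
  also have "\<dots> = pair_sum (\<lambda>b1 b2. pair_sum (\<lambda>d1 d2. \<tau> d1 d2 b2) (hcomult H b1)) (hcomult H b)"
    by (rule pair_sum_coassoc[OF tri b, symmetric])
  also have "\<dots> = pair_sum (\<lambda>b1 b2. hcounit H b1 * \<gamma> (hmult H a (hantipode H b2)) (hone H)) (hcomult H b)"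
  proof (rule pair_sum_cong)
    fix b1 b2 assume "(b1,b2) \<in> set (hcomult H b)"
    then have b1: "b1 \<in> hcarrier H" and b2: "b2 \<in> hcarrier H" using comult_mem[OF b] by auto
    show "pair_sum (\<lambda>d1 d2. \<tau> d1 d2 b2) (hcomult H b1) = hcounit H b1 * \<gamma> (hmult H a (hantipode H b2)) (hone H)"
      unfolding \<tau>_def by (rule pair_sum_antipode_right[OF bilinear_formD(2)[OF g] b1]) (use a b2 in simp)
  qed
  also have "\<dots> = \<gamma> (hmult H a (hantipode H b)) (hone H)"
    by (rule pair_sum_counit_left[OF linear_form_comp[OF bilinear_formD(1)[OF g] mS[OF a]] b]) simp
  finally show ?thesis .
qed

lemma conv_comult_antipode_tensor:
  "tensor_eq_fun (conv (hcomult H) (\<lambda>x. map (\<lambda>(a,b). (hantipode H a, hantipode H b)) (hcomult H x))) conv_unit"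
proof (rule tensor_eq_funI[OF tensor_linear_conv[OF tensor_linear_comult tensor_linear_antipode_comult]
      tensor_linear_conv_unit])
  let ?R = "\<lambda>x. map (\<lambda>(a,b). (hantipode H a, hantipode H b)) (hcomult H x)"
  fix x \<gamma> assume x: "x \<in> hcarrier H" and g: "bilinear_form H H \<gamma>"
  define \<tau> where "\<tau> a1 a2 b =
    pair_sum (\<lambda>c1 c2. \<gamma> (hmult H a1 (hantipode H c1)) (hmult H a2 (hantipode H c2))) (hcomult H b)" for a1 a2 b
  have tri: "trilinear_form H \<tau>"
  proof (rule trilinear_formI)
    fix a2 b assume a2: "a2 \<in> hcarrier H" and b: "b \<in> hcarrier H"
    show "linear_form H (\<lambda>a1. \<tau> a1 a2 b)" unfolding \<tau>_def
     
        by (rule linear_form_pair_sum, rule linear_form_comp[OF _ linear_map_mult_right], rule bilinear_formD(1)[OF g])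
         (use comult_mem[OF b] a2 in auto)
  next
    fix a1 b assume a1: "a1 \<in> hcarrier H" and b: "b \<in> hcarrier H"
    show "linear_form H (\<lambda>a2. \<tau> a1 a2 b)" unfolding \<tau>_def
     
        by (rule linear_form_pair_sum, rule linear_form_comp[OF _ linear_map_mult_right], rule bilinear_formD(2)[OF g])
         (use comult_mem[OF b] a1 in auto)
  next
    fix a1 a2 assume a1: "a1 \<in> hcarrier H" and a2: "a2 \<in> hcarrier H"
    show "linear_form H (\<lambda>b. \<tau> a1 a2 b)" unfolding \<tau>_def
      by (rule linear_form_pair_sum_comult[OF bilinear_comp[OF g linear_map_mult_antipode[OF a1]
            linear_map_mult_antipode[OF a2]]])
  qed
  have "pair_sum \<gamma> (conv (hcomult H) ?R x) =
      pair_sum (\<lambda>a b. pair_sum (\<lambda>a1 a2. \<tau> a1 a2 b) (hcomult H a)) (hcomult H x)"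
    unfolding pair_sum_conv \<tau>_def by (simp add: pair_sum_tensor_mult)
  also have "\<dots> = pair_sum (\<lambda>a b. pair_sum (\<lambda>b1 b2. \<tau> a b1 b2) (hcomult H b)) (hcomult H x)"
    by (rule pair_sum_coassoc[OF tri x])
  also have "\<dots> = pair_sum (\<lambda>a b. \<gamma> (hmult H a (hantipode H b)) (hone H)) (hcomult H x)"
    unfolding \<tau>_def using comult_mem[OF x] pair_sum_mult_antipode_comult[OF _ _ g]
    by (intro pair_sum_cong) auto
  also have "\<dots> = hcounit H x * \<gamma> (hone H) (hone H)"
    by (rule pair_sum_antipode_right[OF bilinear_formD(1)[OF g one_closed] x])
  also have "\<dots> = pair_sum \<gamma> (conv_unit x)" using pair_sum_conv_unit[OF g x] by simp
  finally show "pair_sum \<gamma> (conv (hcomult H) ?R x) = pair_sum \<gamma> (conv_unit x)" .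
qed

text \<open>In the convolution monoid of tensor-valued linear maps, \<open>\<Delta> \<circ> S\<close> is a left inverse and
  \<open>(S \<otimes> S) \<circ> \<Delta>\<close> a right inverse of \<open>\<Delta>\<close> (the latter by cocommutativity), so the two coincide.\<close>

lemma pair_sum_comult_antipode:
  assumes x: "x \<in> hcarrier H" and g: "bilinear_form H H \<gamma>"
  shows "pair_sum \<gamma> (hcomult H (hantipode H x)) =
    pair_sum (\<lambda>a b. \<gamma> (hantipode H a) (hantipode H b)) (hcomult H x)"
proof -
  let ?L = "\<lambda>x. hcomult H (hantipode H x)"
  let ?R = "\<lambda>x. map (\<lambda>(a,b). (hantipode H a, hantipode H b)) (hcomult H x)"
  note L = tensor_linear_comult_antipode and R = tensor_linear_antipode_comult
    and D = tensor_linear_comult and E = tensor_linear_conv_unit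
  have "tensor_eq_fun ?L (conv ?L conv_unit)" by (rule tensor_eq_fun_sym[OF conv_unit_right[OF L]])
  also have "tensor_eq_fun (conv ?L conv_unit) (conv ?L (conv (hcomult H) ?R))"
    by (rule conv_cong[OF L L tensor_eq_fun_refl[OF L] E tensor_linear_conv[OF D R]
          tensor_eq_fun_sym[OF conv_comult_antipode_tensor]])
  moreover have "tensor_eq_fun (conv ?L (conv (hcomult H) ?R)) (conv (conv ?L (hcomult H)) ?R)"
    by (rule tensor_eq_fun_sym[OF conv_assoc[OF L D R]])
  moreover have "tensor_eq_fun (conv (conv ?L (hcomult H)) ?R) (conv conv_unit ?R)"
   
      by (rule conv_cong[OF tensor_linear_conv[OF L D] E conv_comult_antipode_comult R R tensor_eq_fun_refl[OF R]])
  moreover have "tensor_eq_fun (conv conv_unit ?R) ?R" by (rule conv_unit_left[OF R])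
  ultimately have "tensor_eq_fun ?L ?R" using tensor_eq_fun_trans by meson
  then have "tensor_eq H H (?L x) (?R x)" unfolding tensor_eq_fun_def using x by blast
  from tensor_eqD(3)[OF this g] show ?thesis by simp
qed

end

locale hopf_morphism = A: hopf_algebra A + B: hopf_algebra B
  for A :: "('k::field,'a) hopf_alg" and B :: "('k,'b) hopf_alg" +
  fixes p :: "'a \<Rightarrow> 'b"
  assumes hom: "hopf_hom A B p"
begin

lemma p_linear: "linear_map A B p" using hom unfolding hopf_hom_def by auto
lemma p_closed[simp]: "x \<in> hcarrier A \<Longrightarrow> p x \<in> hcarrier B" using linear_mapD(1)[OF p_linear] .
lemma p_mult: "x \<in> hcarrier A \<Longrightarrow> y \<in> hcarrier A \<Longrightarrow> p (hmult A x y) = hmult B (p x) (p y)"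
  using hom unfolding hopf_hom_def by auto
lemma p_one[simp]: "p (hone A) = hone B" using hom unfolding hopf_hom_def by auto
lemma p_comult: "x \<in> hcarrier A \<Longrightarrow> tensor_eq B B (hcomult B (p x)) (map (\<lambda>(u,v). (p u, p v)) (hcomult A x))"
  using hom unfolding hopf_hom_def by auto
lemma p_counit: "x \<in> hcarrier A \<Longrightarrow> hcounit B (p x) = hcounit A x"
  using hom unfolding hopf_hom_def by auto

lemma linear_map_p_antipode: "linear_map A B (\<lambda>a. p (hantipode A a))"
  by (rule linear_map_comp[OF A.antipode_linear p_linear])

lemma p_antipode_expand:
  assumes \<phi>: "linear_form B \<phi>" and a: "a \<in> hcarrier A" and b: "b \<in> hcarrier A"
  shows "\<phi> (p (hantipode A a)) * hcounit A b =
    pair_sum (\<lambda>b1 b2. \<phi> (hmult B (p (hantipode A a)) (hmult B (p b1) (hantipode B (p b2))))) (hcomult A b)"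
proof -
  let ?z = "p (hantipode A a)"
  have z: "?z \<in> hcarrier B" using a by simp
  have lz: "linear_form B (\<lambda>w. \<phi> (hmult B ?z w))" by (rule B.linear_form_mult_left[OF \<phi> z])
  have "\<phi> ?z * hcounit A b = hcounit B (p b) * \<phi> (hmult B ?z (hone B))"
    using z b by (simp add: p_counit)
  also have "\<dots> = pair_sum (\<lambda>c1 c2. \<phi> (hmult B ?z (hmult B c1 (hantipode B c2)))) (hcomult B (p b))"
    by (rule B.pair_sum_antipode_right[OF lz, symmetric]) (use b in simp)
  also have "\<dots> = pair_sum (\<lambda>c1 c2. \<phi> (hmult B ?z (hmult B c1 (hantipode B c2))))
      (map (\<lambda>(u,v). (p u, p v)) (hcomult A b))"
    by (rule tensor_eqD(3)[OF p_comult[OF b] B.bilinear_mult_antipode[OF lz]])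
  finally show ?thesis by simp
qed

lemma p_antipode_contract:
  assumes \<phi>: "linear_form B \<phi>" and a: "a \<in> hcarrier A" and b: "b \<in> hcarrier A"
  shows "pair_sum (\<lambda>a1 a2. \<phi> (hmult B (p (hantipode A a1)) (hmult B (p a2) (hantipode B (p b))))) (hcomult A a) =
    hcounit A a * \<phi> (hantipode B (p b))"
proof -
  let ?w = "hantipode B (p b)"
  have w: "?w \<in> hcarrier B" using b by simp
  have lw: "linear_form A (\<lambda>z. \<phi> (hmult B (p z) ?w))"
    by (rule linear_form_comp[OF B.linear_form_mult_right[OF \<phi> w] p_linear])
  have "pair_sum (\<lambda>a1 a2. \<phi> (hmult B (p (hantipode A a1)) (hmult B (p a2) ?w))) (hcomult A a) =
      pair_sum (\<lambda>a1 a2. \<phi> (hmult B (p (hmult A (hantipode A a1) a2)) ?w)) (hcomult A a)"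
    using A.comult_mem[OF a] w by (intro pair_sum_cong) (auto simp: p_mult B.mult_assoc)
  also have "\<dots> = hcounit A a * \<phi> (hmult B (p (hone A)) ?w)"
    by (rule A.pair_sum_antipode_left[OF lw a])
  finally show ?thesis using w by simp
qed

text \<open>Both sides equal the pairing with \<open>p(S x\<^sub>1) p(x\<^sub>2) S(p x\<^sub>3)\<close>, contracting either the
  last two or the first two factors.\<close>

lemma p_antipode:
  assumes x: "x \<in> hcarrier A"
  shows "p (hantipode A x) = hantipode B (p x)"
proof (rule B.eq_by_linear_forms)
  show "p (hantipode A x) \<in> hcarrier B" "hantipode B (p x) \<in> hcarrier B" using x by simp_all
  fix \<phi> assume \<phi>: "linear_form B \<phi>"
  define \<tau> where "\<tau> a b1 b2 = \<phi> (hmult B (p (hantipode A a)) (hmult B (p b1) (hantipode B (p b2))))" for a b1 b2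
  have tri: "trilinear_form A \<tau>"
  proof (rule trilinear_formI)
    fix b1 b2 assume "b1 \<in> hcarrier A" "b2 \<in> hcarrier A"
    then show "linear_form A (\<lambda>a. \<tau> a b1 b2)" unfolding \<tau>_def
      by (intro linear_form_comp[OF B.linear_form_mult_right[OF \<phi>] linear_map_p_antipode]) simp
  next
    fix a b2 assume "a \<in> hcarrier A" "b2 \<in> hcarrier A"
    then show "linear_form A (\<lambda>b1. \<tau> a b1 b2)" unfolding \<tau>_def
     
        by (intro linear_form_comp[OF B.linear_form_mult_right[OF B.linear_form_mult_left[OF \<phi>]] p_linear]) simp_all
  next
    fix a b1 assume "a \<in> hcarrier A" "b1 \<in> hcarrier A"
    then show "linear_form A (\<lambda>b2. \<tau> a b1 b2)" unfolding \<tau>_def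
     
        by (intro linear_form_comp[OF B.linear_form_antipode[OF B.linear_form_mult_left[OF B.linear_form_mult_left[OF \<phi>]]]
            p_linear]) simp_all
  qed
  have "\<phi> (p (hantipode A x)) = pair_sum (\<lambda>a b. \<phi> (p (hantipode A a)) * hcounit A b) (hcomult A x)"
    by (rule A.pair_sum_counit_right[OF linear_form_comp[OF \<phi> linear_map_p_antipode] x, symmetric])
  also have "\<dots> = pair_sum (\<lambda>a b. pair_sum (\<lambda>b1 b2. \<tau> a b1 b2) (hcomult A b)) (hcomult A x)"
    unfolding \<tau>_def using A.comult_mem[OF x] p_antipode_expand[OF \<phi>] by (intro pair_sum_cong) auto
  also have "\<dots> = pair_sum (\<lambda>a b. pair_sum (\<lambda>a1 a2. \<tau> a1 a2 b) (hcomult A a)) (hcomult A x)"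
    by (rule A.pair_sum_coassoc[OF tri x, symmetric])
  also have "\<dots> = pair_sum (\<lambda>a b. hcounit A a * \<phi> (hantipode B (p b))) (hcomult A x)"
    unfolding \<tau>_def using A.comult_mem[OF x] p_antipode_contract[OF \<phi>] by (intro pair_sum_cong) auto
  also have "\<dots> = \<phi> (hantipode B (p x))"
    by (rule A.pair_sum_counit_left[OF linear_form_comp[OF B.linear_form_antipode[OF \<phi>] p_linear] x])
  finally show "\<phi> (p (hantipode A x)) = \<phi> (hantipode B (p x))" .
qed

end

section \<open>Tensors with linearly independent second legs\<close>

definition lin_comb :: "('k::field,'a) hopf_alg \<Rightarrow> 'k list \<Rightarrow> 'a list \<Rightarrow> 'a" where
  "lin_comb V cs ws = vsum V (map (\<lambda>(c,v). hscale V c v) (zip cs ws))"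

definition span_list :: "('k::field,'a) hopf_alg \<Rightarrow> 'a list \<Rightarrow> 'a set" where
  "span_list V ws = {lin_comb V cs ws | cs. length cs = length ws}"

definition snd_dual_family :: "('k::field,'b) hopf_alg \<Rightarrow> ('a \<times> 'b) list \<Rightarrow> bool" where
  "snd_dual_family W ys \<longleftrightarrow> (\<forall>j<length ys. \<exists>\<psi>. linear_form W \<psi> \<and> \<psi> (snd (ys!j)) = 1 \<and>
      (\<forall>i<length ys. i \<noteq> j \<longrightarrow> \<psi> (snd (ys!i)) = 0))"

lemma lin_comb_Nil1[simp]: "lin_comb V [] ws = hzero V" by (simp add: lin_comb_def vsum_def)
lemma lin_comb_Nil2[simp]: "lin_comb V cs [] = hzero V" by (simp add: lin_comb_def vsum_def)
lemma lin_comb_Cons[simp]: "lin_comb V (c # cs) (v # ws) = hadd V (hscale V c v) (lin_comb V cs ws)"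
  by (simp add: lin_comb_def vsum_def)

context vec_space begin

lemma lin_comb_closed[simp]: "set ws \<subseteq> hcarrier V \<Longrightarrow> lin_comb V cs ws \<in> hcarrier V"
proof (induction ws arbitrary: cs)
  case (Cons v ws) then show ?case by (cases cs) auto
qed simp

lemma lin_comb_zero: "set ws \<subseteq> hcarrier V \<Longrightarrow> lin_comb V (replicate (length ws) 0) ws = hzero V"
  by (induction ws) auto

lemma lin_comb_add: "set ws \<subseteq> hcarrier V \<Longrightarrow> length cs = length ws \<Longrightarrow> length ds = length ws \<Longrightarrow>
  hadd V (lin_comb V cs ws) (lin_comb V ds ws) = lin_comb V (map2 (+) cs ds) ws"
proof (induction ws arbitrary: cs ds)
  case Nil then show ?case by simp
next
  case (Cons v ws)
  obtain c cs' where c: "cs = c # cs'" using Cons(3) by (cases cs) auto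
  obtain d ds' where d: "ds = d # ds'" using Cons(4) by (cases ds) auto
  have v: "v \<in> hcarrier V" and ws: "set ws \<subseteq> hcarrier V" using Cons(2) by auto
  have ih: "hadd V (lin_comb V cs' ws) (lin_comb V ds' ws) = lin_comb V (map2 (+) cs' ds') ws"
    using Cons c d by auto
  have "hadd V (lin_comb V cs (v # ws)) (lin_comb V ds (v # ws)) =
      hadd V (hadd V (hscale V c v) (hscale V d v)) (hadd V (lin_comb V cs' ws) (lin_comb V ds' ws))"
    unfolding c d using v ws by (simp del: add_neg_left add_neg_right add: add_ac)
  also have "\<dots> = lin_comb V (map2 (+) cs ds) (v # ws)"
    unfolding ih c d using v by (simp add: scale_add_left)
  finally show ?case .
qed

lemma lin_comb_scale: "set ws \<subseteq> hcarrier V \<Longrightarrow> hscale V e (lin_comb V cs ws) = lin_comb V (map ((*) e) cs) ws"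
proof (induction ws arbitrary: cs)
  case (Cons v ws) then show ?case by (cases cs) (auto simp: scale_add_right)
qed simp

lemma subspace_span_list: assumes "set ws \<subseteq> hcarrier V" shows "subspace V (span_list V ws)"
  unfolding subspace_def span_list_def
proof (intro conjI ballI allI)
  show "{lin_comb V cs ws |cs. length cs = length ws} \<subseteq> hcarrier V" using assms by auto
  have "hzero V = lin_comb V (replicate (length ws) 0) ws" "length (replicate (length ws) (0::'k)) = length ws"
    using lin_comb_zero[OF assms] by simp_all
  then show "hzero V \<in> {lin_comb V cs ws |cs. length cs = length ws}" by blast
next
  fix x y assume "x \<in> {lin_comb V cs ws |cs. length cs = length ws}" "y \<in> {lin_comb V cs ws |cs. length cs =
      length ws}"
  then obtain cs ds where "x = lin_comb V cs ws" "length cs = length ws" "y = lin_comb V ds ws" "length ds =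
      length ws" by blast
  then have "hadd V x y = lin_comb V (map2 (+) cs ds) ws" "length (map2 (+) cs ds) = length ws"
    using lin_comb_add[OF assms] by simp_all
  then show "hadd V x y \<in> {lin_comb V cs ws |cs. length cs = length ws}" by blast
next
  fix c x assume "x \<in> {lin_comb V cs ws |cs. length cs = length ws}"
  then obtain cs where "x = lin_comb V cs ws" "length cs = length ws" by blast
  then have "hscale V c x = lin_comb V (map ((*) c) cs) ws" "length (map ((*) c) cs) = length ws"
    using lin_comb_scale[OF assms] by simp_all
  then show "hscale V c x \<in> {lin_comb V cs ws |cs. length cs = length ws}" by blast
qed

lemma span_list_superset: "set ws \<subseteq> hcarrier V \<Longrightarrow> set ws \<subseteq> span_list V ws"
proof (induction ws)
  case Nil then show ?case by simp
next
  case (Cons w ws)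
  have w: "w \<in> hcarrier V" and ws: "set ws \<subseteq> hcarrier V" using Cons(2) by auto
  have "w = lin_comb V (1 # replicate (length ws) 0) (w # ws)" using w lin_comb_zero[OF ws] by simp
  moreover have "length (1 # replicate (length ws) (0::'k)) = length (w # ws)" by simp
  ultimately have "w \<in> span_list V (w # ws)" unfolding span_list_def by blast
  moreover have "u \<in> span_list V (w # ws)" if uin: "u \<in> set ws" for u
  proof -
    have "u \<in> span_list V ws" using Cons(1)[OF ws] uin by blast
    then obtain cs where "u = lin_comb V cs ws" "length cs = length ws" unfolding span_list_def by blast
    then have "u = lin_comb V (0 # cs) (w # ws)" "length (0 # cs) = length (w # ws)" using w ws by simp_all
    then show ?thesis unfolding span_list_def by blast
  qed
  ultimately show ?case by auto
qed

lemma in_span_list_if_no_separating_form: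
  assumes ws: "set ws \<subseteq> hcarrier V" and v: "v \<in> hcarrier V"
    and no_form: "\<nexists>\<psi>. linear_form V \<psi> \<and> \<psi> v = 1 \<and> (\<forall>w\<in>set ws. \<psi> w = 0)"
  shows "v \<in> span_list V ws"
proof (rule ccontr)
  assume nv: "v \<notin> span_list V ws"
  let ?U = "span_list V ws"
  obtain \<pi> where \<pi>: "\<forall>y\<in>hcarrier V. \<pi> y \<in> ?U" and \<pi>_id: "\<forall>w\<in>?U. \<pi> w = w"
    and \<pi>_add: "\<forall>x\<in>hcarrier V. \<forall>y\<in>hcarrier V. \<pi> (hadd V x y) = hadd V (\<pi> x) (\<pi> y)"
    and \<pi>_scale: "\<forall>c. \<forall>x\<in>hcarrier V. \<pi> (hscale V c x) = hscale V c (\<pi> x)"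
    using subspace_projection[OF subspace_span_list[OF ws]] by blast
  have Uc: "?U \<subseteq> hcarrier V" using subspaceD(1)[OF subspace_span_list[OF ws]] .
  have \<pi>_lin: "linear_map V V \<pi>" unfolding linear_map_def using \<pi> \<pi>_add \<pi>_scale Uc by blast
  have \<pi>v: "\<pi> v \<in> hcarrier V" using \<pi> Uc v by blast
  let ?z = "hadd V v (hscale V (-1) (\<pi> v))"
  have "?z \<noteq> hzero V" using eq_if_diff_zero[OF v \<pi>v] nv \<pi> v by metis
  then obtain \<phi> where \<phi>: "linear_form V \<phi>" "\<phi> ?z = 1"
    using linear_form_separates_nonzero v \<pi>v by (meson add_closed scale_closed)
  define \<psi> where "\<psi> y = \<phi> y + (-1) * \<phi> (\<pi> y)" for y
  have "linear_form V \<psi>"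
    unfolding \<psi>_def by (rule linear_form_add[OF \<phi>(1) linear_form_cmult[OF linear_form_comp[OF \<phi>(1) \<pi>_lin]]])
  moreover have "\<psi> v = 1" using \<phi> v \<pi>v unfolding \<psi>_def by (simp add: linear_formD linear_form_neg)
  moreover have "\<psi> w = 0" if "w \<in> set ws" for w
    using that span_list_superset[OF ws] \<pi>_id unfolding \<psi>_def by auto
  ultimately show False using no_form by blast
qed

end

lemma pair_sum_absorb_snd:
  assumes V: "vspace V" and W: "vspace W" and \<beta>: "bilinear_form V W \<beta>"
    and u: "u \<in> hcarrier V" and rest: "set rest \<subseteq> hcarrier V \<times> hcarrier W" and len: "length cs = length rest"
  shows "\<beta> u (lin_comb W cs (map snd rest)) + pair_sum \<beta> rest =
    pair_sum \<beta> (map (\<lambda>(c,(a,b)). (hadd V a (hscale V c u), b)) (zip cs rest))"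
  using len rest
proof (induction cs rest rule: list_induct2)
  case Nil
  then show ?case
    using vec_space.linear_form_zero[OF vec_space.intro[OF W] bilinear_formD(2)[OF \<beta> u]] by simp
next
  case (Cons c cs r rest)
  obtain a b where r: "r = (a,b)" by (cases r)
  have ab: "a \<in> hcarrier V" "b \<in> hcarrier W" and rest': "set rest \<subseteq> hcarrier V \<times> hcarrier W"
    using Cons.prems r by auto
  have "set (map snd rest) \<subseteq> hcarrier W" using rest' by auto
  then have "lin_comb W cs (map snd rest) \<in> hcarrier W"
    by (rule vec_space.lin_comb_closed[OF vec_space.intro[OF W]])
  then show ?case
    using Cons.IH[OF rest'] \<beta> u ab vec_space.scale_closed[OF vec_space.intro[OF V] u]
      vec_space.scale_closed[OF vec_space.intro[OF W] ab(2)]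
    unfolding r bilinear_form_def by (simp add: algebra_simps)
qed

lemma tensor_eq_absorb_snd:
  assumes V: "vspace V" and W: "vspace W" and u: "u \<in> hcarrier V"
    and ys: "set (ys @ zs) \<subseteq> hcarrier V \<times> hcarrier W" and len: "length cs = length (ys @ zs)"
    and v: "v = lin_comb W cs (map snd (ys @ zs))" and vW: "v \<in> hcarrier W"
  shows "tensor_eq V W (ys @ (u,v) # zs) (map (\<lambda>(c,(a,b)). (hadd V a (hscale V c u), b)) (zip cs (ys @ zs)))"
proof (rule tensor_eqI)
  show "set (ys @ (u,v) # zs) \<subseteq> hcarrier V \<times> hcarrier W" using ys u vW by auto
  show "set (map (\<lambda>(c,(a,b)). (hadd V a (hscale V c u), b)) (zip cs (ys @ zs))) \<subseteq> hcarrier V \<times> hcarrier W"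
    using ys u vec_space.add_closed[OF vec_space.intro[OF V]] vec_space.scale_closed[OF vec_space.intro[OF V]]
    by (fastforce dest!: set_zip_rightD)
  fix \<beta> assume \<beta>: "bilinear_form V W \<beta>"
  have "pair_sum \<beta> (ys @ (u,v) # zs) = \<beta> u v + pair_sum \<beta> (ys @ zs)" by (simp add: algebra_simps)
  then show "pair_sum \<beta> (ys @ (u,v) # zs) =
      pair_sum \<beta> (map (\<lambda>(c,(a,b)). (hadd V a (hscale V c u), b)) (zip cs (ys @ zs)))"
    unfolding v using pair_sum_absorb_snd[OF V W \<beta> u ys len] by (simp add: algebra_simps)
qed

lemma (in vec_space) snd_in_span_if_not_snd_dual_family:
  assumes xs: "set xs \<subseteq> X \<times> hcarrier V" and not_dual: "\<not> snd_dual_family V xs"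
  shows "\<exists>j<length xs. snd (xs!j) \<in> span_list V (map snd (take j xs @ drop (Suc j) xs))"
proof -
  obtain j where j: "j < length xs" and no_form: "\<nexists>\<psi>. linear_form V \<psi> \<and> \<psi> (snd (xs!j)) = 1 \<and>
      (\<forall>i<length xs. i \<noteq> j \<longrightarrow> \<psi> (snd (xs!i)) = 0)"
    using not_dual unfolding snd_dual_family_def by blast
  let ?rest = "take j xs @ drop (Suc j) xs"
  have in_rest: "xs ! i \<in> set ?rest" if "i < length xs" "i \<noteq> j" for i
  proof (cases "i < j")
    case True
    then have "xs ! i = take j xs ! i" "i < length (take j xs)" using that by simp_all
    then show ?thesis by (metis UnCI nth_mem set_append)
  next
    case False
    then have "xs ! i = drop (Suc j) xs ! (i - Suc j)" "i - Suc j < length (drop (Suc j) xs)"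
      using that by simp_all
    then show ?thesis by (metis UnCI nth_mem set_append)
  qed
  have no_form': "\<nexists>\<psi>. linear_form V \<psi> \<and> \<psi> (snd (xs!j)) = 1 \<and> (\<forall>w\<in>set (map snd ?rest). \<psi> w = 0)"
  proof
    assume "\<exists>\<psi>. linear_form V \<psi> \<and> \<psi> (snd (xs!j)) = 1 \<and> (\<forall>w\<in>set (map snd ?rest). \<psi> w = 0)"
    then obtain \<psi> where \<psi>: "linear_form V \<psi>" "\<psi> (snd (xs!j)) = 1" "\<forall>w\<in>set (map snd ?rest). \<psi> w = 0"
      by blast
    have "\<forall>i<length xs. i \<noteq> j \<longrightarrow> \<psi> (snd (xs!i)) = 0" using \<psi>(3) in_rest by auto
    then have "\<exists>\<psi>. linear_form V \<psi> \<and> \<psi> (snd (xs!j)) = 1 \<and> (\<forall>i<length xs. i \<noteq> j \<longrightarrow> \<psi> (snd (xs!i)) = 0)"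
      using \<psi>(1,2) by (intro exI[of _ \<psi>]) simp
    with no_form show False by contradiction
  qed
  have "set (map snd ?rest) \<subseteq> hcarrier V" using xs set_take_subset set_drop_subset by fastforce
  moreover have "snd (xs!j) \<in> hcarrier V" using xs j nth_mem by fastforce
  ultimately show ?thesis using in_span_list_if_no_separating_form no_form' j by blast
qed

lemma tensor_eq_snd_dual_family:
  assumes V: "vspace V" and W: "vspace W" and xs: "set xs \<subseteq> hcarrier V \<times> hcarrier W"
  shows "\<exists>ys. tensor_eq V W xs ys \<and> set (map snd ys) \<subseteq> set (map snd xs) \<and> snd_dual_family W ys"
  using xs
proof (induction "length xs" arbitrary: xs rule: less_induct)
  case less
  show ?case
  proof (cases "snd_dual_family W xs")
    case True
    then show ?thesis using tensor_eq_refl[OF less.prems] by blast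
  next
    case False
    then obtain j where j: "j < length xs"
      and span: "snd (xs!j) \<in> span_list W (map snd (take j xs @ drop (Suc j) xs))"
      using vec_space.snd_in_span_if_not_snd_dual_family[OF vec_space.intro[OF W] less.prems] by blast
    define rest where "rest = take j xs @ drop (Suc j) xs"
    obtain u v where uv: "xs ! j = (u,v)" by (cases "xs!j")
    have xs_j: "xs = take j xs @ (u,v) # drop (Suc j) xs" using id_take_nth_drop[OF j] uv by simp
    have rest_xs: "set rest \<subseteq> set xs" unfolding rest_def using set_take_subset set_drop_subset by fastforce
    have "(u,v) \<in> set xs" using uv j nth_mem by metis
    then have u: "u \<in> hcarrier V" and v: "v \<in> hcarrier W" using less.prems by auto
    obtain cs where cs: "v = lin_comb W cs (map snd rest)" "length cs = length rest"
      using span uv unfolding span_list_def rest_def length_map by auto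
    define rest' where "rest' = map (\<lambda>(c,(a,b)). (hadd V a (hscale V c u), b)) (zip cs rest)"
    have "tensor_eq V W xs rest'"
      using tensor_eq_absorb_snd[OF V W u _ _ _ v, of "take j xs" "drop (Suc j) xs" cs] less.prems rest_xs cs
      unfolding rest'_def rest_def by (subst xs_j) auto
    moreover have "map snd rest' = map snd rest"
      unfolding rest'_def using cs(2) by (induction cs rest rule: list_induct2) auto
    then have snd_rest': "set (map snd rest') \<subseteq> set (map snd xs)"
      using rest_xs by (simp add: image_mono)
    moreover have "length rest' < length xs" unfolding rest'_def rest_def using cs(2) j by (simp add: rest_def)
    moreover have "set rest' \<subseteq> hcarrier V \<times> hcarrier W" using tensor_eqD(2)[OF calculation(1)] .
    ultimately show ?thesis using less.hyps tensor_eq_trans by (metis order_trans)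
  qed
qed

lemma pair_sum_sum_nth: "pair_sum \<beta> ys = (\<Sum>i<length ys. \<beta> (fst (ys ! i)) (snd (ys ! i)))"
  unfolding pair_sum_def by (simp add: sum_list_sum_nth case_prod_beta atLeast0LessThan)

lemma vsum_snd_dual_eq_fst:
  assumes V: "vspace V" and ys: "set ys \<subseteq> hcarrier V \<times> hcarrier W" and \<psi>: "linear_form W \<psi>"
    and j: "j < length ys" and d1: "\<psi> (snd (ys!j)) = 1" and d0: "\<forall>i<length ys. i \<noteq> j \<longrightarrow> \<psi> (snd (ys!i)) = 0"
  shows "vsum V (map (\<lambda>(a,b). hscale V (\<psi> b) a) ys) = fst (ys!j)"
proof -
  interpret V: vec_space V by (rule vec_space.intro[OF V])
  have mem: "ys ! i \<in> hcarrier V \<times> hcarrier W" if "i < length ys" for i using ys that nth_mem by blast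
  have sc: "set (map (\<lambda>(a,b). hscale V (\<psi> b) a) ys) \<subseteq> hcarrier V" using ys by auto
  show ?thesis
  proof (rule V.eq_by_linear_forms)
    show "vsum V (map (\<lambda>(a,b). hscale V (\<psi> b) a) ys) \<in> hcarrier V" using sc by simp
    show "fst (ys!j) \<in> hcarrier V" using mem[OF j] by auto
    fix \<phi> assume \<phi>: "linear_form V \<phi>"
    have "\<phi> (vsum V (map (\<lambda>(a,b). hscale V (\<psi> b) a) ys)) = pair_sum (\<lambda>a b. \<phi> (hscale V (\<psi> b) a)) ys"
      by (rule linear_form_vsum_pair_sum[OF V \<phi>]) (use ys in auto)
    also have "\<dots> = (\<Sum>i<length ys. \<phi> (hscale V (\<psi> (snd (ys!i))) (fst (ys!i))))" by (rule pair_sum_sum_nth)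
    also have "\<dots> = (\<Sum>i<length ys. \<psi> (snd (ys!i)) * \<phi> (fst (ys!i)))"
    proof (rule sum.cong)
      fix i assume "i \<in> {..<length ys}"
      then have "fst (ys!i) \<in> hcarrier V" using mem by (simp add: mem_Times_iff)
      then show "\<phi> (hscale V (\<psi> (snd (ys!i))) (fst (ys!i))) = \<psi> (snd (ys!i)) * \<phi> (fst (ys!i))"
        using linear_formD(2)[OF \<phi>] by blast
    qed simp
    also have "\<dots> = \<psi> (snd (ys!j)) * \<phi> (fst (ys!j)) + (\<Sum>i\<in>{..<length ys} - {j}. \<psi> (snd (ys!i)) * \<phi> (fst (ys!i)))"
      using j by (simp add: sum.remove)
    also have "(\<Sum>i\<in>{..<length ys} - {j}. \<psi> (snd (ys!i)) * \<phi> (fst (ys!i))) = 0"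
      using d0 by (intro sum.neutral) auto
    finally show "\<phi> (vsum V (map (\<lambda>(a,b). hscale V (\<psi> b) a) ys)) = \<phi> (fst (ys!j))" using d1 by simp
  qed
qed

section \<open>The h-inverse of a Hopf subalgebra\<close>

context hopf_algebra
begin

definition slice :: "('a \<Rightarrow> 'k) \<Rightarrow> 'a \<Rightarrow> 'a" where
  "slice \<psi> y = vsum H (map (\<lambda>(u,v). hscale H (\<psi> v) u) (hcomult H y))"

lemma slice_closed: assumes "y \<in> hcarrier H" shows "slice \<psi> y \<in> hcarrier H"
  unfolding slice_def using comult_mem[OF assms] by (intro vsum_closed) auto

lemma linear_form_slice:
  assumes \<psi>: "linear_form H \<psi>" and \<phi>: "linear_form H \<phi>" and y: "y \<in> hcarrier H"
  shows "\<phi> (slice \<psi> y) = pair_sum (\<lambda>u v. \<phi> u * \<psi> v) (hcomult H y)"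
proof -
  have "\<phi> (slice \<psi> y) = pair_sum (\<lambda>u v. \<phi> (hscale H (\<psi> v) u)) (hcomult H y)"
    unfolding slice_def by (rule linear_form_vsum_pair_sum[OF vspace \<phi>]) (use comult_mem[OF y] in auto)
  also have "\<dots> = pair_sum (\<lambda>u v. \<phi> u * \<psi> v) (hcomult H y)"
    using comult_mem[OF y] linear_formD(2)[OF \<phi>] by (intro pair_sum_cong) (auto simp: mult.commute)
  finally show ?thesis .
qed

lemma slice_linear:
  assumes \<psi>: "linear_form H \<psi>"
  shows "linear_map H H (slice \<psi>)"
  unfolding linear_map_def
proof (intro conjI ballI allI)
  show "slice \<psi> ` hcarrier H \<subseteq> hcarrier H" using slice_closed by blast
next
  fix x y assume x: "x \<in> hcarrier H" and y: "y \<in> hcarrier H"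
  show "slice \<psi> (hadd H x y) = hadd H (slice \<psi> x) (slice \<psi> y)"
  proof (rule eq_by_linear_forms)
    show "slice \<psi> (hadd H x y) \<in> hcarrier H" "hadd H (slice \<psi> x) (slice \<psi> y) \<in> hcarrier H"
      using x y slice_closed by simp_all
    fix \<phi> assume \<phi>: "linear_form H \<phi>"
    show "\<phi> (slice \<psi> (hadd H x y)) = \<phi> (hadd H (slice \<psi> x) (slice \<psi> y))"
      using linear_form_slice[OF \<psi> \<phi>] x y slice_closed linear_formD(1)[OF \<phi>]
        linear_formD(1)[OF linear_form_pair_sum_comult[OF bilinear_prod[OF \<phi> \<psi>]] x y] by simp
  qed
next
  fix c x assume x: "x \<in> hcarrier H"
  show "slice \<psi> (hscale H c x) = hscale H c (slice \<psi> x)"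
  proof (rule eq_by_linear_forms)
    show "slice \<psi> (hscale H c x) \<in> hcarrier H" "hscale H c (slice \<psi> x) \<in> hcarrier H"
      using x slice_closed by simp_all
    fix \<phi> assume \<phi>: "linear_form H \<phi>"
    show "\<phi> (slice \<psi> (hscale H c x)) = \<phi> (hscale H c (slice \<psi> x))"
      using linear_form_slice[OF \<psi> \<phi>] x slice_closed linear_formD(2)[OF \<phi>]
        linear_formD(2)[OF linear_form_pair_sum_comult[OF bilinear_prod[OF \<phi> \<psi>]] x] by simp
  qed
qed

end

lemma mem_hplus_iff: "c \<in> hplus H S \<longleftrightarrow> c \<in> S \<and> hcounit H c = 0"
  unfolding hplus_def by simp

locale h_inverse_setting = hopf_morphism A B p + A: cocomm_hopf_algebra A
  for A :: "('k::field,'a) hopf_alg" and B :: "('k,'b) hopf_alg" and p +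
  fixes C :: "'b set"
  assumes C: "hopf_subalg B C"
begin

abbreviation hinv :: "'a set" where "hinv \<equiv> h_inverse A B p C"

lemma C_carrier: "c \<in> C \<Longrightarrow> c \<in> hcarrier B"
  using hopf_subalgD(1)[OF C] by blast

definition hinv_witness :: "'a \<Rightarrow> ('b \<times> 'a) list \<Rightarrow> bool" where
  "hinv_witness x l \<longleftrightarrow> set l \<subseteq> hplus B C \<times> hcarrier A \<and>
     (\<forall>\<gamma>. bilinear_form B A \<gamma> \<longrightarrow>
        pair_sum (\<lambda>a b. \<gamma> (p a) b) (hcomult A x) = \<gamma> (hone B) x + pair_sum \<gamma> l)"

lemma hinv_witness_set: "hinv_witness x l \<Longrightarrow> (c,a) \<in> set l \<Longrightarrow> c \<in> C \<and> hcounit B c = 0 \<and> a \<in> hcarrier A"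
  unfolding hinv_witness_def hplus_def by blast

lemma bilinear_neg_one_left:
  "bilinear_form B A \<gamma> \<Longrightarrow> x \<in> hcarrier A \<Longrightarrow> \<gamma> (hscale B (-1) (hone B)) x = - \<gamma> (hone B) x"
  unfolding bilinear_form_def by simp

lemma h_inverse_iff: "x \<in> hinv \<longleftrightarrow> x \<in> hcarrier A \<and> (\<exists>l. hinv_witness x l)"
proof
  assume "x \<in> hinv"
  then obtain l where x: "x \<in> hcarrier A" and l: "set l \<subseteq> hplus B C \<times> hcarrier A"
    and t: "tensor_eq B A (map (\<lambda>(u,v). (p u, v)) (hcomult A x) @ [(hscale B (-1) (hone B), x)]) l"
    unfolding h_inverse_def by auto
  have "pair_sum (\<lambda>a b. \<gamma> (p a) b) (hcomult A x) = \<gamma> (hone B) x + pair_sum \<gamma> l"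
    if g: "bilinear_form B A \<gamma>" for \<gamma>
    using tensor_eqD(3)[OF t g] bilinear_neg_one_left[OF g x] by (simp add: algebra_simps)
  then show "x \<in> hcarrier A \<and> (\<exists>l. hinv_witness x l)" using x l unfolding hinv_witness_def by blast
next
  assume "x \<in> hcarrier A \<and> (\<exists>l. hinv_witness x l)"
  then obtain l where x: "x \<in> hcarrier A" and w: "hinv_witness x l" by blast
  have "tensor_eq B A (map (\<lambda>(u,v). (p u, v)) (hcomult A x) @ [(hscale B (-1) (hone B), x)]) l"
  proof (rule tensor_eqI)
    show "set (map (\<lambda>(u,v). (p u, v)) (hcomult A x) @ [(hscale B (-1) (hone B), x)]) \<subseteq> hcarrier B \<times> hcarrier A"
      using A.comult_set[OF x] x by auto
    show "set l \<subseteq> hcarrier B \<times> hcarrier A" using hinv_witness_set[OF w] C_carrier by auto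
    fix \<gamma> assume g: "bilinear_form B A \<gamma>"
    then show "pair_sum \<gamma> (map (\<lambda>(u,v). (p u, v)) (hcomult A x) @ [(hscale B (-1) (hone B), x)]) = pair_sum \<gamma> l"
      using w bilinear_neg_one_left[OF g x] unfolding hinv_witness_def by simp
  qed
  then show "x \<in> hinv" using x w unfolding h_inverse_def hinv_witness_def by blast
qed

lemma hinv_witnessD:
  "hinv_witness x l \<Longrightarrow> bilinear_form B A \<gamma> \<Longrightarrow>
    pair_sum (\<lambda>a b. \<gamma> (p a) b) (hcomult A x) = \<gamma> (hone B) x + pair_sum \<gamma> l"
  unfolding hinv_witness_def by blast

lemma hinv_witness_comp:
  assumes w: "hinv_witness x l" and F: "linear_map B B F" and G: "linear_map A A G" and g: "bilinear_form B A \<gamma>"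
  shows "pair_sum (\<lambda>a b. \<gamma> (F (p a)) (G b)) (hcomult A x) =
    \<gamma> (F (hone B)) (G x) + pair_sum (\<lambda>c d. \<gamma> (F c) (G d)) l"
  using hinv_witnessD[OF w bilinear_comp[OF g F G]] by simp

lemma bilinear_p_left: "bilinear_form B A \<gamma> \<Longrightarrow> bilinear_form A A (\<lambda>a b. \<gamma> (p a) b)"
  using bilinear_comp[OF _ p_linear A.linear_map_id] by simp

lemma hinv_witness_zero: "hinv_witness (hzero A) []"
  unfolding hinv_witness_def
  using A.linear_form_zero[OF A.linear_form_pair_sum_comult[OF bilinear_p_left]]
    A.linear_form_zero[OF bilinear_formD(2)[OF _ B.one_closed]] by simp

lemma hinv_witness_one: "hinv_witness (hone A) []"
  unfolding hinv_witness_def using A.pair_sum_comult_one[OF bilinear_p_left] by simp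

lemma hinv_witness_add:
  assumes x: "x \<in> hcarrier A" "hinv_witness x lx" and y: "y \<in> hcarrier A" "hinv_witness y ly"
  shows "hinv_witness (hadd A x y) (lx @ ly)"
  unfolding hinv_witness_def
proof (intro conjI allI impI)
  show "set (lx @ ly) \<subseteq> hplus B C \<times> hcarrier A" using x(2) y(2) unfolding hinv_witness_def by auto
  fix \<gamma> assume g: "bilinear_form B A \<gamma>"
  show "pair_sum (\<lambda>a b. \<gamma> (p a) b) (hcomult A (hadd A x y)) = \<gamma> (hone B) (hadd A x y) + pair_sum \<gamma> (lx @ ly)"
    using linear_formD(1)[OF A.linear_form_pair_sum_comult[OF bilinear_p_left[OF g]] x(1) y(1)]
      linear_formD(1)[OF bilinear_formD(2)[OF g B.one_closed] x(1) y(1)]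
      x(2) y(2) g unfolding hinv_witness_def by simp
qed

lemma hinv_witness_map_right:
  assumes w: "hinv_witness x l" and G: "linear_map A A G"
    and G_comult: "\<And>\<gamma>. bilinear_form B A \<gamma> \<Longrightarrow>
      pair_sum (\<lambda>a b. \<gamma> (p a) b) (hcomult A (G x)) = pair_sum (\<lambda>a b. \<gamma> (p a) (G b)) (hcomult A x)"
  shows "hinv_witness (G x) (map (\<lambda>(c,a). (c, G a)) l)"
  unfolding hinv_witness_def
proof (intro conjI allI impI)
  show "set (map (\<lambda>(c,a). (c, G a)) l) \<subseteq> hplus B C \<times> hcarrier A"
    using w linear_mapD(1)[OF G] unfolding hinv_witness_def by auto
  fix \<gamma> assume g: "bilinear_form B A \<gamma>"
  show "pair_sum (\<lambda>a b. \<gamma> (p a) b) (hcomult A (G x)) = \<gamma> (hone B) (G x) + pair_sum \<gamma> (map (\<lambda>(c,a). (c, G a)) l)"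
    using G_comult[OF g] hinv_witness_comp[OF w B.linear_map_id G g] by simp
qed

lemma hinv_witness_scale:
  assumes x: "x \<in> hcarrier A" and w: "hinv_witness x l"
  shows "hinv_witness (hscale A k x) (map (\<lambda>(c,a). (c, hscale A k a)) l)"
proof (rule hinv_witness_map_right[OF w A.linear_map_scale])
  fix \<gamma> assume g: "bilinear_form B A \<gamma>"
  have "pair_sum (\<lambda>a b. \<gamma> (p a) b) (hcomult A (hscale A k x)) = k * pair_sum (\<lambda>a b. \<gamma> (p a) b) (hcomult A x)"
    using linear_formD(2)[OF A.linear_form_pair_sum_comult[OF bilinear_p_left[OF g]] x] .
  also have "\<dots> = pair_sum (\<lambda>a b. \<gamma> (p a) (hscale A k b)) (hcomult A x)"
    unfolding pair_sum_cmult[symmetric] using A.comult_mem[OF x] g unfolding bilinear_form_def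
    by (intro pair_sum_cong) auto
  finally show "pair_sum (\<lambda>a b. \<gamma> (p a) b) (hcomult A (hscale A k x)) =
      pair_sum (\<lambda>a b. \<gamma> (p a) (hscale A k b)) (hcomult A x)" .
qed

lemma hinv_witness_slice:
  assumes x: "x \<in> hcarrier A" and w: "hinv_witness x l" and \<psi>: "linear_form A \<psi>"
  shows "hinv_witness (A.slice \<psi> x) (map (\<lambda>(c,a). (c, A.slice \<psi> a)) l)"
proof (rule hinv_witness_map_right[OF w A.slice_linear[OF \<psi>]])
  fix \<gamma> assume g: "bilinear_form B A \<gamma>"
  let ?G = "\<lambda>y. pair_sum (\<lambda>a b. \<gamma> (p a) b) (hcomult A y)"
  define \<tau> where "\<tau> a1 a2 v = \<gamma> (p a1) a2 * \<psi> v" for a1 a2 v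
  have tri: "trilinear_form A \<tau>"
  proof (rule trilinear_formI)
    fix a2 v assume "a2 \<in> hcarrier A" "v \<in> hcarrier A"
    then show "linear_form A (\<lambda>a1. \<tau> a1 a2 v)" unfolding \<tau>_def
      by (intro linear_form_cmult_right linear_form_comp[OF _ p_linear] bilinear_formD(1)[OF g])
  next
    fix a1 v assume "a1 \<in> hcarrier A" "v \<in> hcarrier A"
    then show "linear_form A (\<lambda>a2. \<tau> a1 a2 v)" unfolding \<tau>_def
      by (intro linear_form_cmult_right bilinear_formD(2)[OF g]) simp
  next
    fix a1 a2 assume "a1 \<in> hcarrier A" "a2 \<in> hcarrier A"
    then show "linear_form A (\<lambda>v. \<tau> a1 a2 v)" unfolding \<tau>_def by (intro linear_form_cmult \<psi>)
  qed
  have "?G (A.slice \<psi> x) = pair_sum (\<lambda>u v. ?G u * \<psi> v) (hcomult A x)"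
    by (rule A.linear_form_slice[OF \<psi> A.linear_form_pair_sum_comult[OF bilinear_p_left[OF g]] x])
  also have "\<dots> = pair_sum (\<lambda>u v. pair_sum (\<lambda>a1 a2. \<tau> a1 a2 v) (hcomult A u)) (hcomult A x)"
    unfolding \<tau>_def by (simp add: pair_sum_cmult_right)
  also have "\<dots> = pair_sum (\<lambda>u v. pair_sum (\<lambda>v1 v2. \<tau> u v1 v2) (hcomult A v)) (hcomult A x)"
    by (rule A.pair_sum_coassoc[OF tri x])
  also have "\<dots> = pair_sum (\<lambda>u v. \<gamma> (p u) (A.slice \<psi> v)) (hcomult A x)"
  proof (rule pair_sum_cong)
    fix u v assume "(u,v) \<in> set (hcomult A x)"
    then have u: "u \<in> hcarrier A" and v: "v \<in> hcarrier A" using A.comult_mem[OF x] by auto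
    show "pair_sum (\<lambda>v1 v2. \<tau> u v1 v2) (hcomult A v) = \<gamma> (p u) (A.slice \<psi> v)"
      unfolding \<tau>_def using A.linear_form_slice[OF \<psi> bilinear_formD(2)[OF g p_closed[OF u]] v] by simp
  qed
  finally show "?G (A.slice \<psi> x) = pair_sum (\<lambda>a b. \<gamma> (p a) (A.slice \<psi> b)) (hcomult A x)" .
qed

lemma hinv_witness_antipode:
  assumes x: "x \<in> hcarrier A" and w: "hinv_witness x l"
  shows "hinv_witness (hantipode A x) (map (\<lambda>(c,a). (hantipode B c, hantipode A a)) l)"
  unfolding hinv_witness_def
proof (intro conjI allI impI)
  show "set (map (\<lambda>(c,a). (hantipode B c, hantipode A a)) l) \<subseteq> hplus B C \<times> hcarrier A"
    using hinv_witness_set[OF w] hopf_subalgD(7)[OF C] B.counit_antipode C_carrier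
    by (auto simp: mem_hplus_iff)
  fix \<gamma> assume g: "bilinear_form B A \<gamma>"
  have "pair_sum (\<lambda>a b. \<gamma> (p a) b) (hcomult A (hantipode A x)) =
      pair_sum (\<lambda>a b. \<gamma> (p (hantipode A a)) (hantipode A b)) (hcomult A x)"
    using A.pair_sum_comult_antipode[OF x bilinear_p_left[OF g]] .
  also have "\<dots> = pair_sum (\<lambda>a b. \<gamma> (hantipode B (p a)) (hantipode A b)) (hcomult A x)"
    using A.comult_mem[OF x] by (intro pair_sum_cong) (auto simp: p_antipode)
  also have "\<dots> = \<gamma> (hone B) (hantipode A x) + pair_sum \<gamma> (map (\<lambda>(c,a). (hantipode B c, hantipode A a)) l)"
    using hinv_witness_comp[OF w B.antipode_linear A.antipode_linear g] B.antipode_one by simp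
  finally show "pair_sum (\<lambda>a b. \<gamma> (p a) b) (hcomult A (hantipode A x)) =
      \<gamma> (hone B) (hantipode A x) + pair_sum \<gamma> (map (\<lambda>(c,a). (hantipode B c, hantipode A a)) l)" .
qed

lemma hinv_witness_mult_set:
  assumes x: "x \<in> hcarrier A" "hinv_witness x lx" and y: "y \<in> hcarrier A" "hinv_witness y ly"
  shows "set (map (\<lambda>(c',d'). (c', hmult A x d')) ly @ map (\<lambda>(c,d). (c, hmult A d y)) lx @
      concat (map (\<lambda>(c,d). map (\<lambda>(c',d'). (hmult B c c', hmult A d d')) ly) lx)) \<subseteq> hplus B C \<times> hcarrier A"
proof -
  have "hmult B c c' \<in> hplus B C" if "(c,d) \<in> set lx" "(c',d') \<in> set ly" for c d c' d'
    using hinv_witness_set[OF x(2) that(1)] hinv_witness_set[OF y(2) that(2)] hopf_subalgD(6)[OF C]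
      B.counit_mult C_carrier by (simp add: mem_hplus_iff)
  then show ?thesis
    using hinv_witness_set[OF x(2)] hinv_witness_set[OF y(2)] x(1) y(1) by (force simp: mem_hplus_iff)
qed

text \<open>Multiplying \<open>(p \<otimes> id)\<Delta>x = 1 \<otimes> x + l\<^sub>x\<close> and \<open>(p \<otimes> id)\<Delta>y = 1 \<otimes> y + l\<^sub>y\<close>:
  the three products other than \<open>1 \<otimes> xy\<close> form the witness for \<open>xy\<close>.\<close>

lemma hinv_witness_mult:
  assumes x: "x \<in> hcarrier A" "hinv_witness x lx" and y: "y \<in> hcarrier A" "hinv_witness y ly"
  shows "hinv_witness (hmult A x y) (map (\<lambda>(c',d'). (c', hmult A x d')) ly @ map (\<lambda>(c,d). (c, hmult A d y)) lx @
      concat (map (\<lambda>(c,d). map (\<lambda>(c',d'). (hmult B c c', hmult A d d')) ly) lx))"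
  unfolding hinv_witness_def
proof (intro conjI allI impI hinv_witness_mult_set[OF x y])
  fix \<gamma> assume g: "bilinear_form B A \<gamma>"
  have "pair_sum (\<lambda>a b. \<gamma> (p a) b) (hcomult A (hmult A x y)) =
      pair_sum (\<lambda>a b. pair_sum (\<lambda>a' b'. \<gamma> (hmult B (p a) (p a')) (hmult A b b')) (hcomult A y)) (hcomult A x)"
    using A.pair_sum_comult_mult[OF bilinear_p_left[OF g] x(1) y(1)] A.comult_mem[OF x(1)] A.comult_mem[OF y(1)]
    by (auto simp: p_mult intro!: pair_sum_cong)
  also have "\<dots> =
      pair_sum (\<lambda>a' b'. pair_sum (\<lambda>a b. \<gamma> (hmult B (p a) (p a')) (hmult A b b')) (hcomult A x)) (hcomult A y)"
    by (rule pair_sum_commute)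
  also have "\<dots> = pair_sum (\<lambda>a' b'. \<gamma> (p a') (hmult A x b') +
      pair_sum (\<lambda>c d. \<gamma> (hmult B c (p a')) (hmult A d b')) lx) (hcomult A y)"
    using A.comult_mem[OF y(1)]
      hinv_witness_comp[OF x(2) B.linear_map_mult_right A.linear_map_mult_right g]
    by (intro pair_sum_cong) auto
  also have "\<dots> = pair_sum (\<lambda>a' b'. \<gamma> (p a') (hmult A x b')) (hcomult A y) +
      pair_sum (\<lambda>c d. pair_sum (\<lambda>a' b'. \<gamma> (hmult B c (p a')) (hmult A d b')) (hcomult A y)) lx"
    by (simp add: pair_sum_add pair_sum_commute[of _ lx])
  also have "pair_sum (\<lambda>a' b'. \<gamma> (p a') (hmult A x b')) (hcomult A y) =
      \<gamma> (hone B) (hmult A x y) + pair_sum (\<lambda>c' d'. \<gamma> c' (hmult A x d')) ly"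
    using hinv_witness_comp[OF y(2) B.linear_map_id A.linear_map_mult_left[OF x(1)] g] by simp
  also have "pair_sum (\<lambda>c d. pair_sum (\<lambda>a' b'. \<gamma> (hmult B c (p a')) (hmult A d b')) (hcomult A y)) lx =
      pair_sum (\<lambda>c d. \<gamma> c (hmult A d y) + pair_sum (\<lambda>c' d'. \<gamma> (hmult B c c') (hmult A d d')) ly) lx"
    using hinv_witness_set[OF x(2)] C_carrier
      hinv_witness_comp[OF y(2) B.linear_map_mult_left A.linear_map_mult_left g]
    by (intro pair_sum_cong) auto
  finally show "pair_sum (\<lambda>a b. \<gamma> (p a) b) (hcomult A (hmult A x y)) = \<gamma> (hone B) (hmult A x y) +
      pair_sum \<gamma> (map (\<lambda>(c',d'). (c', hmult A x d')) ly @ map (\<lambda>(c,d). (c, hmult A d y)) lx @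
        concat (map (\<lambda>(c,d). map (\<lambda>(c',d'). (hmult B c c', hmult A d d')) ly) lx))"
    by (simp add: pair_sum_add pair_sum_concat_map algebra_simps)
qed

lemma p_h_inverse:
  assumes x: "x \<in> hinv"
  shows "p x \<in> C"
proof -
  obtain l where xA: "x \<in> hcarrier A" and w: "hinv_witness x l" using x h_inverse_iff by blast
  let ?c = "hadd B (hscale B (hcounit A x) (hone B)) (vsum B (map (\<lambda>(c,a). hscale B (hcounit A a) c) l))"
  have l: "c \<in> C" "a \<in> hcarrier A" if "(c,a) \<in> set l" for c a using hinv_witness_set[OF w that] by auto
  have sum_C: "vsum B (map (\<lambda>(c,a). hscale B (hcounit A a) c) l) \<in> C"
    using l hopf_subalgD(4)[OF C] by (intro B.vsum_in_subspace[OF subspace_hopf_subalg[OF C]]) auto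
  have "p x = ?c"
  proof (rule B.eq_by_linear_forms)
    show "p x \<in> hcarrier B" "?c \<in> hcarrier B" using xA sum_C C_carrier by simp_all
    fix \<phi> assume \<phi>: "linear_form B \<phi>"
    have "\<phi> (p x) = pair_sum (\<lambda>a b. \<phi> (p a) * hcounit A b) (hcomult A x)"
      by (rule A.pair_sum_counit_right[OF linear_form_comp[OF \<phi> p_linear] xA, symmetric])
    also have "\<dots> = \<phi> (hone B) * hcounit A x + pair_sum (\<lambda>c a. \<phi> c * hcounit A a) l"
      using hinv_witnessD[OF w bilinear_prod[OF \<phi> A.linear_form_counit]] by simp
    also have "\<dots> = \<phi> ?c"
      using linear_formD[OF \<phi>] linear_form_vsum_pair_sum[OF B.vspace \<phi>, of l "\<lambda>c a. hscale B (hcounit A a) c"]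
        sum_C C_carrier l by (simp add: mult.commute cong: pair_sum_cong)
    finally show "\<phi> (p x) = \<phi> ?c" .
  qed
  then show ?thesis using sum_C hopf_subalgD(3,4,5)[OF C] by simp
qed

text \<open>The dual family \<open>\<psi>\<^sub>j\<close> of the second legs recovers the \<open>j\<close>-th first leg as the slice \<open>(id \<otimes> \<psi>\<^sub>j)\<Delta>x\<close>.\<close>

lemma h_inverse_fst:
  assumes x: "x \<in> hinv" and ys: "tensor_eq A A (hcomult A x) ys" "snd_dual_family A ys"
    and z: "z \<in> set ys"
  shows "fst z \<in> hinv"
proof -
  obtain l where xA: "x \<in> hcarrier A" and w: "hinv_witness x l" using x h_inverse_iff by blast
  obtain j where j: "j < length ys" "z = ys ! j" using z by (auto simp: in_set_conv_nth)
  obtain \<psi> where \<psi>: "linear_form A \<psi>" "\<psi> (snd (ys!j)) = 1" "\<forall>i<length ys. i \<noteq> j \<longrightarrow> \<psi> (snd (ys!i)) = 0"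
    using ys(2) j(1) unfolding snd_dual_family_def by blast
  have "fst z = vsum A (map (\<lambda>(a,b). hscale A (\<psi> b) a) ys)"
    using vsum_snd_dual_eq_fst[OF A.vspace tensor_eqD(2)[OF ys(1)] \<psi>(1) j(1) \<psi>(2,3)] j(2) by simp
  also have "\<dots> = A.slice \<psi> x"
    unfolding A.slice_def
    by (rule tensor_eq_vsum[OF A.vspace _ _ ys(1), symmetric]) (auto intro: A.bilinear_scale_right[OF \<psi>(1)])
  finally show ?thesis
    using h_inverse_iff A.slice_closed[OF xA] hinv_witness_slice[OF xA w \<psi>(1)] by auto
qed

lemma h_inverse_comult:
  assumes x: "x \<in> hinv"
  shows "\<exists>l. set l \<subseteq> hinv \<times> hinv \<and> tensor_eq A A (hcomult A x) l"
proof -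
  have xA: "x \<in> hcarrier A" using x h_inverse_iff by blast
  obtain ys1 where t1: "tensor_eq A A (hcomult A x) ys1" and d1: "snd_dual_family A ys1"
    using tensor_eq_snd_dual_family[OF A.vspace A.vspace A.comult_set[OF xA]] by blast
  let ?L = "map (\<lambda>(a,b). (b,a)) ys1"
  have t1': "tensor_eq A A (hcomult A x) ?L"
    using tensor_eq_trans[OF A.cocomm[rule_format, OF xA] tensor_eq_swap[OF t1]] .
  have snd_L: "set (map snd ?L) \<subseteq> hinv" using h_inverse_fst[OF x t1 d1] by auto
  obtain ys2 where t2: "tensor_eq A A ?L ys2" and s2: "set (map snd ys2) \<subseteq> set (map snd ?L)"
    and d2: "snd_dual_family A ys2"
    using tensor_eq_snd_dual_family[OF A.vspace A.vspace tensor_eqD(2)[OF t1']] by blast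
  have t: "tensor_eq A A (hcomult A x) ys2" using tensor_eq_trans[OF t1' t2] .
  have "set ys2 \<subseteq> hinv \<times> hinv"
  proof
    fix z assume z: "z \<in> set ys2"
    then have "snd z \<in> hinv" using s2 snd_L by auto
    moreover have "fst z \<in> hinv" using h_inverse_fst[OF x t d2 z] .
    ultimately show "z \<in> hinv \<times> hinv" by (cases z) auto
  qed
  then show ?thesis using t by blast
qed

lemma hopf_subalg_h_inverse: "hopf_subalg A hinv"
  unfolding hopf_subalg_def
proof (intro conjI ballI allI h_inverse_comult)
  show "hinv \<subseteq> hcarrier A" using h_inverse_iff by blast
  show "hzero A \<in> hinv" "hone A \<in> hinv"
    using h_inverse_iff hinv_witness_zero hinv_witness_one by auto
  fix x y assume "x \<in> hinv" "y \<in> hinv"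
  then show "hadd A x y \<in> hinv" "hmult A x y \<in> hinv"
    using h_inverse_iff hinv_witness_add hinv_witness_mult by (meson A.add_closed A.mult_closed)+
next
  fix c x assume "x \<in> hinv"
  then show "hscale A c x \<in> hinv" using h_inverse_iff hinv_witness_scale by (meson A.scale_closed)
next
  fix x assume "x \<in> hinv"
  then show "hantipode A x \<in> hinv" using h_inverse_iff hinv_witness_antipode by (meson A.antipode_closed)
qed

lemma hom_into_h_inverse:
  assumes D: "hopf D" and f: "hopf_hom D A f" and g: "hopf_hom D (sub_hopf B C) g"
    and pf: "\<forall>x\<in>hcarrier D. p (f x) = g x" and x: "x \<in> hcarrier D"
  shows "f x \<in> hinv"
proof -
  interpret D: hopf_algebra D by unfold_locales (rule D)
  interpret F: hopf_morphism D A f by unfold_locales (rule f)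
  have gC: "g u \<in> C" and g_counit: "hcounit B (g u) = hcounit D u" if "u \<in> hcarrier D" for u
    using g that unfolding hopf_hom_def linear_map_def by auto
  let ?e = "\<lambda>u. hadd B (g u) (hscale B (- hcounit D u) (hone B))"
  have e: "?e u \<in> hplus B C" if "u \<in> hcarrier D" for u
    using hopf_subalgD(3,4,5)[OF C] gC[OF that] g_counit[OF that] C_carrier[OF gC[OF that]]
    by (simp add: mem_hplus_iff B.counit_add B.counit_scale)
  have "hinv_witness (f x) (map (\<lambda>(u,v). (?e u, f v)) (hcomult D x))"
    unfolding hinv_witness_def
  proof (intro conjI allI impI)
    show "set (map (\<lambda>(u,v). (?e u, f v)) (hcomult D x)) \<subseteq> hplus B C \<times> hcarrier A"
      using D.comult_mem[OF x] e by auto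
    fix \<gamma> assume \<gamma>: "bilinear_form B A \<gamma>"
    have "pair_sum (\<lambda>a b. \<gamma> (p a) b) (hcomult A (f x)) = pair_sum (\<lambda>u v. \<gamma> (g u) (f v)) (hcomult D x)"
      using tensor_eqD(3)[OF F.p_comult[OF x] bilinear_p_left[OF \<gamma>]] D.comult_mem[OF x] pf
      by (auto intro!: pair_sum_cong)
    also have "\<dots> = pair_sum (\<lambda>u v. hcounit D u * \<gamma> (hone B) (f v)) (hcomult D x) +
        pair_sum (\<lambda>u v. \<gamma> (?e u) (f v)) (hcomult D x)"
      unfolding pair_sum_add[symmetric] using D.comult_mem[OF x] gC C_carrier \<gamma>
      by (intro pair_sum_cong) (auto simp: bilinear_form_def)
    also have "pair_sum (\<lambda>u v. hcounit D u * \<gamma> (hone B) (f v)) (hcomult D x) = \<gamma> (hone B) (f x)"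
     
        by (rule D.pair_sum_counit_left[OF linear_form_comp[OF bilinear_formD(2)[OF \<gamma> B.one_closed] F.p_linear] x])
    finally show "pair_sum (\<lambda>a b. \<gamma> (p a) b) (hcomult A (f x)) =
        \<gamma> (hone B) (f x) + pair_sum \<gamma> (map (\<lambda>(u,v). (?e u, f v)) (hcomult D x))" by simp
  qed
  then show ?thesis using h_inverse_iff F.p_closed[OF x] by blast
qed


lemma hopf_hom_h_inverse_restrict: "hopf_hom (sub_hopf A hinv) (sub_hopf B C) p"
  by (rule hopf_hom_corestrict[OF sub_hopf_hopf[OF A.hopf hopf_subalg_h_inverse] B.hopf
        hopf_hom_restrict[OF hom hopf_subalg_h_inverse] C])
     (use p_h_inverse in auto)

lemma hopf_hom_into_h_inverse:
  assumes D: "hopf D" and f: "hopf_hom D A f" and g: "hopf_hom D (sub_hopf B C) g"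
    and pf: "\<forall>x\<in>hcarrier D. p (f x) = g x"
  shows "hopf_hom D (sub_hopf A hinv) f"
  by (rule hopf_hom_corestrict[OF D A.hopf f hopf_subalg_h_inverse])
     (use hom_into_h_inverse[OF D f g pf] in auto)

end

theorem lemma2p6:
  fixes A :: "('k::field,'a) hopf_alg" and B :: "('k,'b) hopf_alg"
    and p :: "'a \<Rightarrow> 'b" and C :: "'b set"
  assumes "cocomm_hopf A" and "cocomm_hopf B" and "hopf_hom A B p"
    and "hopf_subalg B C"
  shows "p ` h_inverse A B p C \<subseteq> C \<and>
    hopf_subalg A (h_inverse A B p C) \<and>
    cocomm_hopf (sub_hopf A (h_inverse A B p C)) \<and>
    hopf_hom (sub_hopf A (h_inverse A B p C)) A id \<and>
    hopf_hom (sub_hopf A (h_inverse A B p C)) (sub_hopf B C) p \<and>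
    hopf_hom (sub_hopf B C) B id \<and>
    (\<forall>(D::('k,'d) hopf_alg) f g.
       cocomm_hopf D \<and> hopf_hom D A f \<and> hopf_hom D (sub_hopf B C) g \<and>
       (\<forall>x\<in>hcarrier D. p (f x) = g x) \<longrightarrow>
       (\<exists>h. hopf_hom D (sub_hopf A (h_inverse A B p C)) h \<and>
            (\<forall>x\<in>hcarrier D. h x = f x \<and> p (h x) = g x) \<and>
            (\<forall>h'. hopf_hom D (sub_hopf A (h_inverse A B p C)) h' \<and>
                  (\<forall>x\<in>hcarrier D. h' x = f x \<and> p (h' x) = g x) \<longrightarrow>
                  (\<forall>x\<in>hcarrier D. h' x = h x))))"
proof -
  interpret h_inverse_setting A B p C
    using assms unfolding cocomm_hopf_def
    by unfold_locales (auto simp: cocomm_hopf_algebra_axioms_def)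
  have A: "hopf A" and B: "hopf B" using assms(1,2) unfolding cocomm_hopf_def by auto
  have universal: "\<exists>h. hopf_hom D (sub_hopf A hinv) h \<and> (\<forall>x\<in>hcarrier D. h x = f x \<and> p (h x) = g x) \<and>
      (\<forall>h'. hopf_hom D (sub_hopf A hinv) h' \<and> (\<forall>x\<in>hcarrier D. h' x = f x \<and> p (h' x) = g x) \<longrightarrow>
        (\<forall>x\<in>hcarrier D. h' x = h x))"
    if "cocomm_hopf D" "hopf_hom D A f" "hopf_hom D (sub_hopf B C) g" "\<forall>x\<in>hcarrier D. p (f x) = g x"
    for D :: "('k,'d) hopf_alg" and f g
    using hopf_hom_into_h_inverse[of D f g] that unfolding cocomm_hopf_def by auto
  show ?thesis
    using p_h_inverse hopf_subalg_h_inverse A.cocomm_hopf_sub_hopf[OF hopf_subalg_h_inverse]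
      hopf_hom_restrict[OF hopf_hom_id[OF A] hopf_subalg_h_inverse] hopf_hom_h_inverse_restrict
      hopf_hom_restrict[OF hopf_hom_id[OF B] assms(4)] universal
    by blast
qed

end
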